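(* Consider the VNF-node placement and capacity allocation problem P1 (defined in the context). The RP-MCA algorithm (defined in the context) outputs a feasible solution $(\mathcal{U},\boldsymbol{\lambda})$ whose value $J_1(\mathcal{U},\boldsymbol{\lambda})$ is at least $\frac12(1-1/e)\,OPT(P1)$, where $OPT(P1)$ is the optimal value of P1; i.e., RP-MCA has approximation ratio $\frac12(1-1/e)$ for P1.
   Context: Data: finite node set $\mathcal{V}$; finite flow set $\mathcal{F}$; each flow $f$ has rate $\lambda_f>0$ and path node set $\mathcal{V}_f\subseteq\mathcal{V}$; each node $v$ has capacity $c_v>0$ and cost $b_v>0$; budget $B$; it is assumed $\max_f\lambda_f\le\min_v c_v$. Problem P1: maximize $J_1(\mathcal{U},\boldsymbol{\lambda})=\sum_{f\in\mathcal{F}}\lambda_f\mathbf{1}\{\sum_{v\in\mathcal{V}_f\cap\mathcal{U}}\lambda_f^v\ge\lambda_f\}$ over $\mathcal{U}\subseteq\mathcal{V}$ and nonnegative $\boldsymbol{\lambda}=(\lambda_f^v)$ subject to $\sum_f\lambda_f^v\le c_v$ for $v\in\mathcal{U}$, $\lambda_f^v=0$ for $v\notin\mathcal{U}$, and $\sum_{v\in\mathcal{U}}b_v\le B$. Relaxed value: $R_3(\mathcal{U})$ is the optimal value of Q2 for $\mathcal{U}$: maximize $\sum_f\sum_{v\in\mathcal{V}_f\cap\mathcal{U}}\lambda_f^v$ over nonnegative $\boldsymbol{\lambda}$ with the same capacity constraints, $\lambda_f^v=0$ for $v\notin\mathcal{U}$, and $\sum_{v\in\mathcal{U}}\lambda_f^v\le\lambda_f$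 for all $f$. RP-MCA: (1) Placement: choose $\mathcal{U}$ by approximately maximizing $R_3(\mathcal{U})$ subject to $\sum_{v\in\mathcal{U}}b_v\le B$; if all costs equal $b$, use Submodular Greedy (start from $\emptyset$ and $\lfloor B/b\rfloor$ times add a node with the largest marginal increase of $R_3$, ties broken uniformly at random); in general use Enumeration-based Greedy: let $\mathcal{U}_1$ be the best (largest $R_3$) budget-feasible subset of cardinality one or two; for each budget-feasible subset of cardinality three, greedily augment it by repeatedly adding a node $u$ maximizing $(R_3(\mathcal{V}'\cup\{u\})-R_3(\mathcal{V}'))/b_u$ among those keeping the budget satisfied, and let $\mathcal{U}_2$ be the best augmented set; output the better of $\mathcal{U}_1,\mathcal{U}_2$. (2) Capacity allocation: apply the MCA algorithm to $\mathcal{U}$. MCA: write $\mathcal{U}_f=\mathcal{V}_f\cap\mathcal{U}$. Phase I: take an optimal basic solution of Q2 for $\mathcal{U}$, $y_f^v=\lambda_f^v/\lambda_f$; fully assign each flow with $y_f^v=1$ to $v$; form the bipartite forest $G'$ with edges $(f,v)$ of weight $y_f^v$ for $0<y_f^v<1$; until $G'$ is empty, repeat: Step 1 — while some node $v$ of $G'$ has a single incident edge $(f,v)$, with $r'_v$ the total rate of flows fully assigned to $v$: if $r'_v\ge\lambda_f^v$ set $y_f^v=0$ and delete $v$, else unassign the flows fully assigned to $v$, assign $f$ fully to $v$ (cancelling its other fractions) and delete $v,f$ and incident edges; Step 2 — pick a node $v_1$ of degree $\ge2$ and the longest paths $p_1,p_2$ from $v_1$ through two of its edges, change weights so that the rate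 changes $\lambda_f\Delta y_f^v$ along $p_1$ are $+\delta,-\delta,\dots$ and along $p_2$ are $-\delta,+\delta,\dots$, increase $\delta$ until some weight hits $0$ or $1$, delete zero edges and fully assign flows with weight $1$. Phase II: for each unassigned flow $f$ with total remaining capacity on $\mathcal{U}_f$ at least $\lambda_f$, split and fully assign it to nodes of $\mathcal{U}_f$. The output $\boldsymbol{\lambda}$ consists of the fully assigned flows. *)

theory Defs
  imports "HOL-Analysis.Analysis"
begin

text \<open>Problem data: node set V, flow set F, rates lam, pth node sets pth,
  capacities cap, costs cost, budget B.  An allocation x f v stands for the rate
  lambda_f^v of flow f processed at node v.\<close>

section \<open>Problem P1\<close>

definition J1 :: "'f set \<Rightarrow> ('f \<Rightarrow> real) \<Rightarrow> ('f \<Rightarrow> 'v set) \<Rightarrow> 'v set \<Rightarrow> ('f \<Rightarrow> 'v \<Rightarrow> real) \<Rightarrow> real" where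
  "J1 F lam pth U x =
     (\<Sum>f\<in>F. lam f * (if (\<Sum>v\<in>pth f \<inter> U. x f v) \<ge> lam f then 1 else 0))"

definition feasible_P1 ::
  "'v set \<Rightarrow> 'f set \<Rightarrow> ('v \<Rightarrow> real) \<Rightarrow> ('v \<Rightarrow> real) \<Rightarrow> real \<Rightarrow> 'v set \<Rightarrow> ('f \<Rightarrow> 'v \<Rightarrow> real) \<Rightarrow> bool" where
  "feasible_P1 V F cap cost B U x \<longleftrightarrow>
     U \<subseteq> V \<and>
     (\<forall>f\<in>F. \<forall>v\<in>V. 0 \<le> x f v) \<and>
     (\<forall>v\<in>U. (\<Sum>f\<in>F. x f v) \<le> cap v) \<and>
     (\<forall>f\<in>F. \<forall>v\<in>V - U. x f v = 0) \<and>
     (\<Sum>v\<in>U. cost v) \<le> B"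

definition OPT_P1 ::
  "'v set \<Rightarrow> 'f set \<Rightarrow> ('f \<Rightarrow> real) \<Rightarrow> ('f \<Rightarrow> 'v set) \<Rightarrow> ('v \<Rightarrow> real) \<Rightarrow> ('v \<Rightarrow> real) \<Rightarrow> real \<Rightarrow> real" where
  "OPT_P1 V F lam pth cap cost B =
     Sup {J1 F lam pth U x | U x. feasible_P1 V F cap cost B U x}"

section \<open>Relaxed problem Q2 and R3\<close>

text \<open>The LP variables are lambda_f^v for f in F and v in U intersected with
  the pth of f; all other entries are zero.\<close>

definition feasible_Q2 ::
  "'v set \<Rightarrow> 'f set \<Rightarrow> ('f \<Rightarrow> real) \<Rightarrow> ('f \<Rightarrow> 'v set) \<Rightarrow> ('v \<Rightarrow> real) \<Rightarrow> 'v set \<Rightarrow> ('f \<Rightarrow> 'v \<Rightarrow> real) \<Rightarrow> bool" where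
  "feasible_Q2 V F lam pth cap U x \<longleftrightarrow>
     (\<forall>f\<in>F. \<forall>v\<in>V. 0 \<le> x f v) \<and>
     (\<forall>v\<in>U. (\<Sum>f\<in>F. x f v) \<le> cap v) \<and>
     (\<forall>f\<in>F. \<forall>v\<in>V. v \<notin> U \<inter> pth f \<longrightarrow> x f v = 0) \<and>
     (\<forall>f\<in>F. (\<Sum>v\<in>U. x f v) \<le> lam f)"

definition Q2_obj :: "'f set \<Rightarrow> ('f \<Rightarrow> 'v set) \<Rightarrow> 'v set \<Rightarrow> ('f \<Rightarrow> 'v \<Rightarrow> real) \<Rightarrow> real" where
  "Q2_obj F pth U x = (\<Sum>f\<in>F. \<Sum>v\<in>pth f \<inter> U. x f v)"

definition R3 ::
  "'v set \<Rightarrow> 'f set \<Rightarrow> ('f \<Rightarrow> real) \<Rightarrow> ('f \<Rightarrow> 'v set) \<Rightarrow> ('v \<Rightarrow> real) \<Rightarrow> 'v set \<Rightarrow> real" where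
  "R3 V F lam pth cap U = Sup (Q2_obj F pth U ` {x. feasible_Q2 V F lam pth cap U x})"

text \<open>Basic (feasible) solution of Q2: feasible, and the constraints active at x
  have full rank, i.e. the only direction d (on the LP variables) annihilated by
  all active constraints is d = 0.\<close>

definition basic_Q2 ::
  "'v set \<Rightarrow> 'f set \<Rightarrow> ('f \<Rightarrow> real) \<Rightarrow> ('f \<Rightarrow> 'v set) \<Rightarrow> ('v \<Rightarrow> real) \<Rightarrow> 'v set \<Rightarrow> ('f \<Rightarrow> 'v \<Rightarrow> real) \<Rightarrow> bool" where
  "basic_Q2 V F lam pth cap U x \<longleftrightarrow>
     feasible_Q2 V F lam pth cap U x \<and>
     (\<forall>d::'f \<Rightarrow> 'v \<Rightarrow> real.
        (\<forall>f\<in>F. \<forall>v\<in>V. v \<notin> U \<inter> pth f \<longrightarrow> d f v = 0) \<and>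
        (\<forall>f\<in>F. \<forall>v\<in>U \<inter> pth f. x f v = 0 \<longrightarrow> d f v = 0) \<and>
        (\<forall>v\<in>U. (\<Sum>f\<in>F. x f v) = cap v \<longrightarrow> (\<Sum>f\<in>F. d f v) = 0) \<and>
        (\<forall>f\<in>F. (\<Sum>v\<in>U. x f v) = lam f \<longrightarrow> (\<Sum>v\<in>U. d f v) = 0)
        \<longrightarrow> (\<forall>f\<in>F. \<forall>v\<in>V. d f v = 0))"

definition optimal_basic_Q2 ::
  "'v set \<Rightarrow> 'f set \<Rightarrow> ('f \<Rightarrow> real) \<Rightarrow> ('f \<Rightarrow> 'v set) \<Rightarrow> ('v \<Rightarrow> real) \<Rightarrow> 'v set \<Rightarrow> ('f \<Rightarrow> 'v \<Rightarrow> real) \<Rightarrow> bool" where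
  "optimal_basic_Q2 V F lam pth cap U x \<longleftrightarrow>
     basic_Q2 V F lam pth cap U x \<and> Q2_obj F pth U x = R3 V F lam pth cap U"

section \<open>Placement\<close>

text \<open>Submodular greedy (equal costs): greedy_reach k W means W can be the set
  after k greedy iterations (any tie-breaking).\<close>

inductive greedy_reach ::
  "'v set \<Rightarrow> 'f set \<Rightarrow> ('f \<Rightarrow> real) \<Rightarrow> ('f \<Rightarrow> 'v set) \<Rightarrow> ('v \<Rightarrow> real) \<Rightarrow> nat \<Rightarrow> 'v set \<Rightarrow> bool"
  for V F lam pth cap where
  start: "greedy_reach V F lam pth cap 0 {}"
| step: "greedy_reach V F lam pth cap k W \<Longrightarrow> u \<in> V - W \<Longrightarrow>
     (\<forall>w\<in>V - W. R3 V F lam pth cap (insert w W) - R3 V F lam pth cap W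
                \<le> R3 V F lam pth cap (insert u W) - R3 V F lam pth cap W) \<Longrightarrow>
     greedy_reach V F lam pth cap (Suc k) (insert u W)"

text \<open>floor(B/b) iterations; if the nodes run out earlier, the greedy stops.\<close>

definition submodular_greedy ::
  "'v set \<Rightarrow> 'f set \<Rightarrow> ('f \<Rightarrow> real) \<Rightarrow> ('f \<Rightarrow> 'v set) \<Rightarrow> ('v \<Rightarrow> real) \<Rightarrow> real \<Rightarrow> real \<Rightarrow> 'v set \<Rightarrow> bool" where
  "submodular_greedy V F lam pth cap b B U \<longleftrightarrow>
     greedy_reach V F lam pth cap (min (nat \<lfloor>B / b\<rfloor>) (card V)) U"

inductive aug_reach ::
  "'v set \<Rightarrow> 'f set \<Rightarrow> ('f \<Rightarrow> real) \<Rightarrow> ('f \<Rightarrow> 'v set) \<Rightarrow> ('v \<Rightarrow> real) \<Rightarrow> ('v \<Rightarrow> real) \<Rightarrow> real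
     \<Rightarrow> 'v set \<Rightarrow> 'v set \<Rightarrow> bool"
  for V F lam pth cap cost B where
  start: "aug_reach V F lam pth cap cost B S S"
| step: "aug_reach V F lam pth cap cost B S W \<Longrightarrow> u \<in> V - W \<Longrightarrow> sum cost W + cost u \<le> B \<Longrightarrow>
     (\<forall>w\<in>V - W. sum cost W + cost w \<le> B \<longrightarrow>
         (R3 V F lam pth cap (insert w W) - R3 V F lam pth cap W) / cost w
       \<le> (R3 V F lam pth cap (insert u W) - R3 V F lam pth cap W) / cost u) \<Longrightarrow>
     aug_reach V F lam pth cap cost B S (insert u W)"

definition aug_final ::
  "'v set \<Rightarrow> 'f set \<Rightarrow> ('f \<Rightarrow> real) \<Rightarrow> ('f \<Rightarrow> 'v set) \<Rightarrow> ('v \<Rightarrow> real) \<Rightarrow> ('v \<Rightarrow> real) \<Rightarrow> real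
     \<Rightarrow> 'v set \<Rightarrow> 'v set \<Rightarrow> bool" where
  "aug_final V F lam pth cap cost B S W \<longleftrightarrow>
     aug_reach V F lam pth cap cost B S W \<and> \<not> (\<exists>u\<in>V - W. sum cost W + cost u \<le> B)"

definition best_in ::
  "'v set \<Rightarrow> 'f set \<Rightarrow> ('f \<Rightarrow> real) \<Rightarrow> ('f \<Rightarrow> 'v set) \<Rightarrow> ('v \<Rightarrow> real) \<Rightarrow> 'v set set \<Rightarrow> 'v set \<Rightarrow> bool" where
  "best_in V F lam pth cap C U \<longleftrightarrow>
     U \<in> C \<and> (\<forall>W\<in>C. R3 V F lam pth cap W \<le> R3 V F lam pth cap U)"

text \<open>Enumeration-based greedy.  If no budget-feasible set of cardinality one or
  two exists (and hence none of cardinality three), the output is the empty set.\<close>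

definition enum_greedy ::
  "'v set \<Rightarrow> 'f set \<Rightarrow> ('f \<Rightarrow> real) \<Rightarrow> ('f \<Rightarrow> 'v set) \<Rightarrow> ('v \<Rightarrow> real) \<Rightarrow> ('v \<Rightarrow> real) \<Rightarrow> real
     \<Rightarrow> 'v set \<Rightarrow> bool" where
  "enum_greedy V F lam pth cap cost B U \<longleftrightarrow>
     (let S12 = {S. S \<subseteq> V \<and> card S \<in> {1, 2} \<and> sum cost S \<le> B};
          T3 = {S. S \<subseteq> V \<and> card S = 3 \<and> sum cost S \<le> B}
      in \<exists>aug. (\<forall>S\<in>T3. aug_final V F lam pth cap cost B S (aug S)) \<and>
           ((S12 = {} \<and> aug ` T3 = {} \<and> U = {}) \<or>
            (S12 \<noteq> {} \<and> aug ` T3 = {} \<and> best_in V F lam pth cap S12 U) \<or>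
            (S12 = {} \<and> aug ` T3 \<noteq> {} \<and> best_in V F lam pth cap (aug ` T3) U) \<or>
            (\<exists>U1 U2. best_in V F lam pth cap S12 U1 \<and> best_in V F lam pth cap (aug ` T3) U2 \<and>
               U \<in> {U1, U2} \<and>
               R3 V F lam pth cap U = max (R3 V F lam pth cap U1) (R3 V F lam pth cap U2))))"

definition placement ::
  "'v set \<Rightarrow> 'f set \<Rightarrow> ('f \<Rightarrow> real) \<Rightarrow> ('f \<Rightarrow> 'v set) \<Rightarrow> ('v \<Rightarrow> real) \<Rightarrow> ('v \<Rightarrow> real) \<Rightarrow> real
     \<Rightarrow> 'v set \<Rightarrow> bool" where
  "placement V F lam pth cap cost B U \<longleftrightarrow>
     (if \<exists>b. \<forall>v\<in>V. cost v = b
      then \<exists>b. (\<forall>v\<in>V. cost v = b) \<and> submodular_greedy V F lam pth cap b B U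
      else enum_greedy V F lam pth cap cost B U)"

section \<open>MCA, Phase I\<close>

text \<open>State: (asg, y), asg f = Some v iff f is fully assigned to v; y are the
  weights.  The bipartite graph G' has the edges (f,v) with 0 < y f v < 1.\<close>

definition Gedges :: "'f set \<Rightarrow> ('f \<Rightarrow> 'v set) \<Rightarrow> 'v set \<Rightarrow> ('f \<Rightarrow> 'v \<Rightarrow> real) \<Rightarrow> ('f \<times> 'v) set" where
  "Gedges F pth U y = {(f, v). f \<in> F \<and> v \<in> U \<inter> pth f \<and> 0 < y f v \<and> y f v < 1}"

text \<open>Vertices of G' are Inl f (flows) and Inr v (VNF nodes).\<close>

definition adjG :: "('f \<times> 'v) set \<Rightarrow> 'f + 'v \<Rightarrow> 'f + 'v \<Rightarrow> bool" where
  "adjG E a b \<longleftrightarrow>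
     (isl a \<and> \<not> isl b \<and> (projl a, projr b) \<in> E) \<or> (\<not> isl a \<and> isl b \<and> (projl b, projr a) \<in> E)"

definition Gedge_of :: "'f + 'v \<Rightarrow> 'f + 'v \<Rightarrow> 'f \<times> 'v" where
  "Gedge_of a b = (if isl a then (projl a, projr b) else (projl b, projr a))"

definition is_Gpath :: "('f \<times> 'v) set \<Rightarrow> 'v \<Rightarrow> 'f \<Rightarrow> ('f + 'v) list \<Rightarrow> bool" where
  "is_Gpath E v1 f1 xs \<longleftrightarrow>
     2 \<le> length xs \<and> xs ! 0 = Inr v1 \<and> xs ! 1 = Inl f1 \<and> distinct xs \<and>
     (\<forall>i. Suc i < length xs \<longrightarrow> adjG E (xs ! i) (xs ! Suc i))"

definition longest_Gpath :: "('f \<times> 'v) set \<Rightarrow> 'v \<Rightarrow> 'f \<Rightarrow> ('f + 'v) list \<Rightarrow> bool" where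
  "longest_Gpath E v1 f1 xs \<longleftrightarrow>
     is_Gpath E v1 f1 xs \<and> (\<forall>ys. is_Gpath E v1 f1 ys \<longrightarrow> length ys \<le> length xs)"

text \<open>Rate change on edge (f,v) caused by the alternating pattern s, -s, s, ...
  along the pth xs.\<close>

definition rate_change :: "('f + 'v) list \<Rightarrow> real \<Rightarrow> 'f \<Rightarrow> 'v \<Rightarrow> real" where
  "rate_change xs s f v =
     (\<Sum>i<length xs - 1. if Gedge_of (xs ! i) (xs ! Suc i) = (f, v) then s * (-1) ^ i else 0)"

definition assigned_rate :: "'f set \<Rightarrow> ('f \<Rightarrow> real) \<Rightarrow> ('f \<Rightarrow> 'v option) \<Rightarrow> 'v \<Rightarrow> real" where
  "assigned_rate F lam asg v = (\<Sum>g\<in>{g\<in>F. asg g = Some v}. lam g)"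

inductive mca1_step ::
  "'f set \<Rightarrow> ('f \<Rightarrow> real) \<Rightarrow> ('f \<Rightarrow> 'v set) \<Rightarrow> 'v set
     \<Rightarrow> ('f \<Rightarrow> 'v option) \<times> ('f \<Rightarrow> 'v \<Rightarrow> real) \<Rightarrow> ('f \<Rightarrow> 'v option) \<times> ('f \<Rightarrow> 'v \<Rightarrow> real) \<Rightarrow> bool"
  for F lam pth U where
  step1_drop:
    "{g. (g, v) \<in> Gedges F pth U y} = {f} \<Longrightarrow>
     assigned_rate F lam asg v \<ge> lam f * y f v \<Longrightarrow>
     mca1_step F lam pth U (asg, y) (asg, y(f := (y f)(v := 0)))"
| step1_swap:
    "{g. (g, v) \<in> Gedges F pth U y} = {f} \<Longrightarrow>
     assigned_rate F lam asg v < lam f * y f v \<Longrightarrow>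
     asg' = (\<lambda>g. if g = f then Some v else if asg g = Some v then None else asg g) \<Longrightarrow>
     mca1_step F lam pth U (asg, y) (asg', y(f := (\<lambda>_. 0)))"
| step2:
    "\<not> (\<exists>v f. {g. (g, v) \<in> Gedges F pth U y} = {f}) \<Longrightarrow>
     (f1, v1) \<in> Gedges F pth U y \<Longrightarrow> (f2, v1) \<in> Gedges F pth U y \<Longrightarrow> f1 \<noteq> f2 \<Longrightarrow>
     longest_Gpath (Gedges F pth U y) v1 f1 p1 \<Longrightarrow>
     longest_Gpath (Gedges F pth U y) v1 f2 p2 \<Longrightarrow>
     0 < \<delta> \<Longrightarrow>
     y' = (\<lambda>f v. y f v + \<delta> * (rate_change p1 1 f v + rate_change p2 (-1) f v) / lam f) \<Longrightarrow>
     (\<forall>(f, v)\<in>Gedges F pth U y. 0 \<le> y' f v \<and> y' f v \<le> 1) \<Longrightarrow>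
     (\<exists>(f, v)\<in>Gedges F pth U y. y' f v = 0 \<or> y' f v = 1) \<Longrightarrow>
     H = {g. \<exists>v. (g, v) \<in> Gedges F pth U y \<and> y' g v = 1} \<Longrightarrow>
     (\<forall>g. if g \<in> H then (\<exists>v. (g, v) \<in> Gedges F pth U y \<and> y' g v = 1 \<and> asg' g = Some v)
          else asg' g = asg g) \<Longrightarrow>
     y'' = (\<lambda>g. if g \<in> H then (\<lambda>_. 0) else y' g) \<Longrightarrow>
     mca1_step F lam pth U (asg, y) (asg', y'')"

section \<open>MCA, Phase II\<close>

definition remaining_cap :: "'f set \<Rightarrow> ('v \<Rightarrow> real) \<Rightarrow> ('f \<Rightarrow> 'v \<Rightarrow> real) \<Rightarrow> 'v \<Rightarrow> real" where
  "remaining_cap F cap x v = cap v - (\<Sum>g\<in>F. x g v)"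

inductive mca2_step ::
  "'f set \<Rightarrow> ('f \<Rightarrow> real) \<Rightarrow> ('f \<Rightarrow> 'v set) \<Rightarrow> ('v \<Rightarrow> real) \<Rightarrow> 'v set
     \<Rightarrow> ('f \<Rightarrow> 'v \<Rightarrow> real) \<times> 'f set \<Rightarrow> ('f \<Rightarrow> 'v \<Rightarrow> real) \<times> 'f set \<Rightarrow> bool"
  for F lam pth cap U where
  assign:
    "f \<in> T \<Longrightarrow>
     (\<Sum>v\<in>U \<inter> pth f. remaining_cap F cap x v) \<ge> lam f \<Longrightarrow>
     (\<forall>v\<in>U \<inter> pth f. 0 \<le> s v \<and> s v \<le> remaining_cap F cap x v) \<Longrightarrow>
     (\<forall>v. v \<notin> U \<inter> pth f \<longrightarrow> s v = 0) \<Longrightarrow>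
     (\<Sum>v\<in>U \<inter> pth f. s v) = lam f \<Longrightarrow>
     mca2_step F lam pth cap U (x, T) (x(f := s), T - {f})"
| skip:
    "f \<in> T \<Longrightarrow>
     (\<Sum>v\<in>U \<inter> pth f. remaining_cap F cap x v) < lam f \<Longrightarrow>
     mca2_step F lam pth cap U (x, T) (x, T - {f})"

section \<open>MCA and RP-MCA\<close>

text \<open>MCA V F lam pth cap U x: x is a possible output of MCA applied to U
  (for some optimal basic solution and some sequence of choices).\<close>

definition MCA ::
  "'v set \<Rightarrow> 'f set \<Rightarrow> ('f \<Rightarrow> real) \<Rightarrow> ('f \<Rightarrow> 'v set) \<Rightarrow> ('v \<Rightarrow> real) \<Rightarrow> 'v set
     \<Rightarrow> ('f \<Rightarrow> 'v \<Rightarrow> real) \<Rightarrow> bool" where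
  "MCA V F lam pth cap U x \<longleftrightarrow>
     (\<exists>x0 y0 asg0 y1 asg y.
        optimal_basic_Q2 V F lam pth cap U x0 \<and>
        y0 = (\<lambda>f v. x0 f v / lam f) \<and>
        (\<forall>f. if f \<in> F \<and> (\<exists>v\<in>U \<inter> pth f. y0 f v = 1)
             then (\<exists>v\<in>U \<inter> pth f. y0 f v = 1 \<and> asg0 f = Some v)
             else asg0 f = None) \<and>
        y1 = (\<lambda>f. if asg0 f \<noteq> None then (\<lambda>_. 0) else y0 f) \<and>
        (mca1_step F lam pth U)\<^sup>*\<^sup>* (asg0, y1) (asg, y) \<and>
        Gedges F pth U y = {} \<and>
        (mca2_step F lam pth cap U)\<^sup>*\<^sup>*
           (\<lambda>f v. if f \<in> F \<and> asg f = Some v then lam f else 0, {f\<in>F. asg f = None})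
           (x, {}))"

definition RP_MCA ::
  "'v set \<Rightarrow> 'f set \<Rightarrow> ('f \<Rightarrow> real) \<Rightarrow> ('f \<Rightarrow> 'v set) \<Rightarrow> ('v \<Rightarrow> real) \<Rightarrow> ('v \<Rightarrow> real) \<Rightarrow> real
     \<Rightarrow> 'v set \<Rightarrow> ('f \<Rightarrow> 'v \<Rightarrow> real) \<Rightarrow> bool" where
  "RP_MCA V F lam pth cap cost B U x \<longleftrightarrow>
     placement V F lam pth cap cost B U \<and> MCA V F lam pth cap U x"

end

theory Submission
  imports Defs
begin

(* R3 U is the value of a bipartite transportation LP. Its max-flow/min-cut dual gives
   R3 U = min over T <= U of cap(T) + lam(flows meeting U - T); the coverage term is submodular
   and the minimum over T preserves this, so R3 is monotone submodular with R3 {} = 0. Both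
   greedy placement rules therefore reach (1 - 1/e) times the best budget-feasible value of R3
   (Nemhauser-Wolsey for uniform costs, partial enumeration in the style of Khuller-Moss-Naor and
   Sviridenko in general), and R3 bounds J1 of every feasible solution of P1 from above.
   MCA rounds an optimal basic solution of Q2 while preserving the potential
     R3 U <= assigned rate + fractional rate + rate assigned to nodes without fractional edges.
   Once no fractional edge is left, the last term is the assigned rate again, so R3 U <= 2 J1. *)

section \<open>The relaxation Q2\<close>

locale network =
  fixes V :: "'v set" and F :: "'f set" and lam :: "'f \<Rightarrow> real" and pth :: "'f \<Rightarrow> 'v set"
    and cap :: "'v \<Rightarrow> real"
  assumes finite_V: "finite V" and finite_F: "finite F"
    and lam_pos: "\<And>f. f \<in> F \<Longrightarrow> 0 < lam f"
    and pth_sub: "\<And>f. f \<in> F \<Longrightarrow> pth f \<subseteq> V"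
    and cap_pos: "\<And>v. v \<in> V \<Longrightarrow> 0 < cap v"
begin

abbreviation feas where "feas U x \<equiv> feasible_Q2 V F lam pth cap U x"
abbreviation obj where "obj U x \<equiv> Q2_obj F pth U x"
abbreviation R where "R U \<equiv> R3 V F lam pth cap U"
abbreviation basic where "basic U x \<equiv> basic_Q2 V F lam pth cap U x"

definition load :: "('f \<Rightarrow> 'v \<Rightarrow> real) \<Rightarrow> 'v \<Rightarrow> real" where
  "load x v = (\<Sum>f\<in>F. x f v)"

definition flow_total :: "'v set \<Rightarrow> ('f \<Rightarrow> 'v \<Rightarrow> real) \<Rightarrow> 'f \<Rightarrow> real" where
  "flow_total U x f = (\<Sum>v\<in>U. x f v)"

definition supported :: "'v set \<Rightarrow> ('f \<Rightarrow> 'v \<Rightarrow> real) \<Rightarrow> bool" where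
  "supported U x \<longleftrightarrow> (\<forall>f\<in>F. \<forall>v\<in>V. v \<notin> U \<inter> pth f \<longrightarrow> x f v = 0)"

lemma feasible_Q2_iff:
  "feas U x \<longleftrightarrow> (\<forall>f\<in>F. \<forall>v\<in>V. 0 \<le> x f v) \<and> (\<forall>v\<in>U. load x v \<le> cap v) \<and>
     supported U x \<and> (\<forall>f\<in>F. flow_total U x f \<le> lam f)"
  unfolding feasible_Q2_def load_def flow_total_def supported_def by blast

lemma finite_node_set: "U \<subseteq> V \<Longrightarrow> finite U"
  using finite_V finite_subset by blast

lemma obj_eq_sum_flow_total:
  assumes "U \<subseteq> V" "supported U x"
  shows "obj U x = (\<Sum>f\<in>F. flow_total U x f)"
  unfolding Q2_obj_def flow_total_def
proof (rule sum.cong[OF refl])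
  fix f assume f: "f \<in> F"
  have "(\<Sum>v\<in>U. x f v) = (\<Sum>v\<in>U \<inter> pth f. x f v) + (\<Sum>v\<in>U - pth f. x f v)"
    using finite_node_set[OF assms(1)] by (metis Diff_eq sum.Int_Diff)
  also have "(\<Sum>v\<in>U - pth f. x f v) = 0"
    using assms f unfolding supported_def by (intro sum.neutral) auto
  finally show "(\<Sum>v\<in>pth f \<inter> U. x f v) = (\<Sum>v\<in>U. x f v)" by (simp add: Int_commute)
qed

lemma obj_eq_sum_load:
  assumes "U \<subseteq> V" "supported U x"
  shows "obj U x = (\<Sum>v\<in>U. load x v)"
  unfolding obj_eq_sum_flow_total[OF assms] flow_total_def load_def by (rule sum.swap)

lemma obj_add_scaled: "obj U (\<lambda>f v. x f v + t * d f v) = obj U x + t * obj U d"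
  unfolding Q2_obj_def by (simp add: sum.distrib sum_distrib_left)

lemma load_add_scaled: "load (\<lambda>f v. x f v + t * d f v) v = load x v + t * load d v"
  unfolding load_def by (simp add: sum.distrib sum_distrib_left)

lemma flow_total_add_scaled:
  "flow_total U (\<lambda>f v. x f v + t * d f v) f = flow_total U x f + t * flow_total U d f"
  unfolding flow_total_def by (simp add: sum.distrib sum_distrib_left)

lemma feasible_zero: "U \<subseteq> V \<Longrightarrow> feas U (\<lambda>f v. 0)"
  unfolding feasible_Q2_def using lam_pos cap_pos by (auto intro: less_imp_le)

lemma obj_le_total_rate:
  assumes "U \<subseteq> V" "feas U x"
  shows "obj U x \<le> (\<Sum>f\<in>F. lam f)"
proof -
  have "obj U x = (\<Sum>f\<in>F. flow_total U x f)"
    using assms obj_eq_sum_flow_total feasible_Q2_iff by blast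
  also have "\<dots> \<le> (\<Sum>f\<in>F. lam f)"
    using assms(2) unfolding feasible_Q2_iff by (intro sum_mono) auto
  finally show ?thesis .
qed

lemma obj_le_R:
  assumes "U \<subseteq> V" "feas U x"
  shows "obj U x \<le> R U"
  unfolding R3_def
  by (rule cSup_upper)
    (use assms obj_le_total_rate in \<open>auto intro!: bdd_aboveI[where M="\<Sum>f\<in>F. lam f"]\<close>)

lemma R_le:
  assumes "U \<subseteq> V" "\<And>x. feas U x \<Longrightarrow> obj U x \<le> M"
  shows "R U \<le> M"
  unfolding R3_def
  by (rule cSup_least) (use assms feasible_zero in auto)

subsection \<open>Optimal basic solutions\<close>

definition active_direction ::
  "'v set \<Rightarrow> ('f \<Rightarrow> 'v \<Rightarrow> real) \<Rightarrow> ('f \<Rightarrow> 'v \<Rightarrow> real) \<Rightarrow> bool" where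
  "active_direction U x d \<longleftrightarrow> supported U d \<and>
     (\<forall>f\<in>F. \<forall>v\<in>U \<inter> pth f. x f v = 0 \<longrightarrow> d f v = 0) \<and>
     (\<forall>v\<in>U. load x v = cap v \<longrightarrow> load d v = 0) \<and>
     (\<forall>f\<in>F. flow_total U x f = lam f \<longrightarrow> flow_total U d f = 0)"

lemma basic_iff:
  "basic U x \<longleftrightarrow> feas U x \<and> (\<forall>d. active_direction U x d \<longrightarrow> (\<forall>f\<in>F. \<forall>v\<in>V. d f v = 0))"
  unfolding basic_Q2_def active_direction_def supported_def load_def flow_total_def by blast

lemma basic_feasible: "basic U x \<Longrightarrow> feas U x"
  unfolding basic_Q2_def by blast

lemma active_direction_uminus:
  "active_direction U x d \<Longrightarrow> active_direction U x (\<lambda>f v. - d f v)"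
  unfolding active_direction_def supported_def load_def flow_total_def by (auto simp: sum_negf)

lemma obj_uminus: "obj U (\<lambda>f v. - d f v) = - obj U d"
  unfolding Q2_obj_def by (simp add: sum_negf)

definition lp_vars :: "'v set \<Rightarrow> ('f \<times> 'v) set" where
  "lp_vars U = Sigma F (\<lambda>f. U \<inter> pth f)"

definition zero_vars :: "'v set \<Rightarrow> ('f \<Rightarrow> 'v \<Rightarrow> real) \<Rightarrow> ('f \<times> 'v) set" where
  "zero_vars U x = {p \<in> lp_vars U. x (fst p) (snd p) = 0}"

definition tight_nodes :: "'v set \<Rightarrow> ('f \<Rightarrow> 'v \<Rightarrow> real) \<Rightarrow> 'v set" where
  "tight_nodes U x = {v\<in>U. load x v = cap v}"

definition tight_flows :: "'v set \<Rightarrow> ('f \<Rightarrow> 'v \<Rightarrow> real) \<Rightarrow> 'f set" where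
  "tight_flows U x = {f\<in>F. flow_total U x f = lam f}"

definition num_active :: "'v set \<Rightarrow> ('f \<Rightarrow> 'v \<Rightarrow> real) \<Rightarrow> nat" where
  "num_active U x = card (zero_vars U x) + card (tight_nodes U x) + card (tight_flows U x)"

lemma lp_vars_iff: "p \<in> lp_vars U \<longleftrightarrow> fst p \<in> F \<and> snd p \<in> U \<inter> pth (fst p)"
  unfolding lp_vars_def by (cases p) auto

lemma finite_lp_vars: "U \<subseteq> V \<Longrightarrow> finite (lp_vars U)"
  unfolding lp_vars_def using finite_F finite_node_set by (intro finite_SigmaI) auto

lemma num_active_bounded:
  assumes U: "U \<subseteq> V"
  shows "num_active U x \<le> card (lp_vars U) + card U + card F"
proof -
  have "card (zero_vars U x) \<le> card (lp_vars U)"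
    unfolding zero_vars_def by (rule card_mono[OF finite_lp_vars[OF U]]) auto
  moreover have "card (tight_nodes U x) \<le> card U"
    unfolding tight_nodes_def by (rule card_mono[OF finite_node_set[OF U]]) auto
  moreover have "card (tight_flows U x) \<le> card F"
    unfolding tight_flows_def by (rule card_mono[OF finite_F]) auto
  ultimately show ?thesis unfolding num_active_def by simp
qed

text \<open>The step lengths at which moving from x along e makes an inactive constraint active.\<close>

definition step_bounds ::
  "'v set \<Rightarrow> ('f \<Rightarrow> 'v \<Rightarrow> real) \<Rightarrow> ('f \<Rightarrow> 'v \<Rightarrow> real) \<Rightarrow> real set" where
  "step_bounds U x e =
     (\<lambda>p. x (fst p) (snd p) / - e (fst p) (snd p)) ` {p \<in> lp_vars U. e (fst p) (snd p) < 0} \<union>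
     (\<lambda>v. (cap v - load x v) / load e v) ` {v\<in>U. 0 < load e v} \<union>
     (\<lambda>f. (lam f - flow_total U x f) / flow_total U e f) ` {f\<in>F. 0 < flow_total U e f}"

lemma finite_step_bounds: "U \<subseteq> V \<Longrightarrow> finite (step_bounds U x e)"
  unfolding step_bounds_def using finite_lp_vars finite_node_set finite_F by auto

lemma step_bounds_nonneg:
  assumes fx: "feas U x" and U: "U \<subseteq> V" and s: "s \<in> step_bounds U x e"
  shows "0 \<le> s"
proof -
  have x: "\<forall>f\<in>F. \<forall>v\<in>V. 0 \<le> x f v" "\<forall>v\<in>U. load x v \<le> cap v"
    "\<forall>f\<in>F. flow_total U x f \<le> lam f"
    using fx unfolding feasible_Q2_iff by auto
  show ?thesis
    using s unfolding step_bounds_def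
  proof (elim UnE imageE CollectE conjE)
    fix p assume "p \<in> lp_vars U" "e (fst p) (snd p) < 0" "s = x (fst p) (snd p) / - e (fst p) (snd p)"
    moreover have "0 \<le> x (fst p) (snd p)" using calculation x(1) U unfolding lp_vars_iff by auto
    ultimately show ?thesis by (simp add: divide_nonneg_neg)
  qed (use x in auto)
qed

lemma step_bounds_nonempty:
  assumes U: "U \<subseteq> V" and e: "active_direction U x e"
    and p0: "(f0, v0) \<in> lp_vars U" and ne: "e f0 v0 \<noteq> 0"
  shows "step_bounds U x e \<noteq> {}"
proof (cases "\<exists>p\<in>lp_vars U. e (fst p) (snd p) < 0")
  case True
  then show ?thesis unfolding step_bounds_def by auto
next
  case False
  then have nonneg: "0 \<le> e f v" if "(f, v) \<in> lp_vars U" for f v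
    using that by force
  have f0: "f0 \<in> F" "v0 \<in> U" "v0 \<in> pth f0" using p0 lp_vars_iff[of "(f0, v0)"] by auto
  have "0 < e f0 v0" using nonneg[OF p0] ne by simp
  also have "e f0 v0 \<le> flow_total U e f0"
    unfolding flow_total_def
  proof (rule member_le_sum[OF f0(2) _ finite_node_set[OF U]])
    fix v assume v: "v \<in> U - {v0}"
    show "0 \<le> e f0 v"
      using nonneg[of f0 v] e f0 v U unfolding active_direction_def supported_def lp_vars_iff
      by (cases "v \<in> pth f0") auto
  qed
  finally show ?thesis unfolding step_bounds_def using f0 by auto
qed

lemma feasible_along_direction:
  assumes U: "U \<subseteq> V" and fx: "feas U x" and e: "active_direction U x e"
    and t: "0 \<le> t" "\<And>s. s \<in> step_bounds U x e \<Longrightarrow> t \<le> s"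
  shows "feas U (\<lambda>f v. x f v + t * e f v)"
  unfolding feasible_Q2_iff load_add_scaled flow_total_add_scaled
proof (intro conjI ballI)
  have supp: "supported U e" using e unfolding active_direction_def by blast
  fix f v assume f: "f \<in> F" and v: "v \<in> V"
  show "0 \<le> x f v + t * e f v"
  proof (cases "(f, v) \<in> lp_vars U \<and> e f v < 0")
    case True
    then have "x f v / - e f v \<in> step_bounds U x e"
      unfolding step_bounds_def by (intro UnI1 image_eqI[where x="(f, v)"]) auto
    then have "t \<le> x f v / - e f v" by (rule t(2))
    then have "t * - e f v \<le> x f v" using True pos_le_divide_eq[of "- e f v" t "x f v"] by linarith
    then show ?thesis by simp
  next
    case False
    then show ?thesis using fx supp t(1) f v unfolding feasible_Q2_iff supported_def lp_vars_iff by auto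
  qed
next
  fix v assume v: "v \<in> U"
  show "load x v + t * load e v \<le> cap v"
  proof (cases "0 < load e v")
    case True
    then have "t \<le> (cap v - load x v) / load e v" using v by (intro t(2)) (auto simp: step_bounds_def)
    then show ?thesis using True by (simp add: pos_le_divide_eq)
  next
    case False
    then show ?thesis using fx v t(1) unfolding feasible_Q2_iff by (smt (verit) mult_nonneg_nonpos)
  qed
next
  show "supported U (\<lambda>f v. x f v + t * e f v)"
    using fx e unfolding feasible_Q2_iff active_direction_def supported_def by auto
next
  fix f assume f: "f \<in> F"
  show "flow_total U x f + t * flow_total U e f \<le> lam f"
  proof (cases "0 < flow_total U e f")
    case True
    then have "t \<le> (lam f - flow_total U x f) / flow_total U e f"
      using f by (intro t(2)) (auto simp: step_bounds_def)
    then show ?thesis using True by (simp add: pos_le_divide_eq)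
  next
    case False
    then show ?thesis using fx f t(1) unfolding feasible_Q2_iff by (smt (verit) mult_nonneg_nonpos)
  qed
qed

lemma num_active_along_direction:
  assumes U: "U \<subseteq> V" and e: "active_direction U x e" and t: "t \<in> step_bounds U x e"
  shows "num_active U x < num_active U (\<lambda>f v. x f v + t * e f v)"
proof -
  let ?x' = "\<lambda>f v. x f v + t * e f v"
  have e': "\<And>f v. f \<in> F \<Longrightarrow> v \<in> U \<inter> pth f \<Longrightarrow> x f v = 0 \<Longrightarrow> e f v = 0"
     "\<And>v. v \<in> U \<Longrightarrow> load x v = cap v \<Longrightarrow> load e v = 0"
     "\<And>f. f \<in> F \<Longrightarrow> flow_total U x f = lam f \<Longrightarrow> flow_total U e f = 0"
    using e unfolding active_direction_def by auto
  have Z: "zero_vars U x \<subseteq> zero_vars U ?x'" unfolding zero_vars_def using e' lp_vars_iff by auto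
  have N: "tight_nodes U x \<subseteq> tight_nodes U ?x'"
    unfolding tight_nodes_def load_add_scaled using e' by auto
  have T: "tight_flows U x \<subseteq> tight_flows U ?x'"
    unfolding tight_flows_def flow_total_add_scaled using e' by auto
  have fin: "finite (zero_vars U ?x')" "finite (tight_nodes U ?x')" "finite (tight_flows U ?x')"
    unfolding zero_vars_def tight_nodes_def tight_flows_def
    using finite_lp_vars[OF U] finite_node_set[OF U] finite_F by auto
  have "zero_vars U x \<subset> zero_vars U ?x' \<or> tight_nodes U x \<subset> tight_nodes U ?x' \<or>
        tight_flows U x \<subset> tight_flows U ?x'"
    using t Z N T unfolding step_bounds_def
  proof (elim UnE imageE CollectE conjE)
    fix p assume p: "p \<in> lp_vars U" "e (fst p) (snd p) < 0" "t = x (fst p) (snd p) / - e (fst p) (snd p)"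
    have "p \<in> zero_vars U ?x'" "p \<notin> zero_vars U x"
      unfolding zero_vars_def using p e'(1) lp_vars_iff[of p] by auto
    then show ?thesis using Z by blast
  next
    fix v assume v: "v \<in> U" "0 < load e v" "t = (cap v - load x v) / load e v"
    have "v \<in> tight_nodes U ?x'" "v \<notin> tight_nodes U x"
      unfolding tight_nodes_def load_add_scaled using v e'(2) by auto
    then show ?thesis using N by blast
  next
    fix f assume f: "f \<in> F" "0 < flow_total U e f" "t = (lam f - flow_total U x f) / flow_total U e f"
    have "f \<in> tight_flows U ?x'" "f \<notin> tight_flows U x"
      unfolding tight_flows_def flow_total_add_scaled using f e'(3) by auto
    then show ?thesis using T by blast
  qed
  then have "card (zero_vars U x) < card (zero_vars U ?x') \<or> card (tight_nodes U x) < card (tight_nodes U ?x') \<or>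
      card (tight_flows U x) < card (tight_flows U ?x')"
    using psubset_card_mono[OF fin(1)] psubset_card_mono[OF fin(2)] psubset_card_mono[OF fin(3)] by blast
  moreover have "card (zero_vars U x) \<le> card (zero_vars U ?x')"
    "card (tight_nodes U x) \<le> card (tight_nodes U ?x')"
    "card (tight_flows U x) \<le> card (tight_flows U ?x')"
    using card_mono[OF fin(1) Z] card_mono[OF fin(2) N] card_mono[OF fin(3) T] by auto
  ultimately show ?thesis unfolding num_active_def by linarith
qed

lemma improve_along_active_direction:
  assumes U: "U \<subseteq> V" and fx: "feas U x" and e: "active_direction U x e"
    and p0: "(f0, v0) \<in> lp_vars U" and ne: "e f0 v0 \<noteq> 0" and oe: "0 \<le> obj U e"
  shows "\<exists>x'. feas U x' \<and> obj U x \<le> obj U x' \<and> num_active U x < num_active U x'"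
proof -
  define t where "t = Min (step_bounds U x e)"
  have fin: "finite (step_bounds U x e)" by (rule finite_step_bounds[OF U])
  have ne': "step_bounds U x e \<noteq> {}" by (rule step_bounds_nonempty[OF U e p0 ne])
  have t: "t \<in> step_bounds U x e" unfolding t_def using fin ne' by simp
  have t0: "0 \<le> t" by (rule step_bounds_nonneg[OF fx U t])
  have "feas U (\<lambda>f v. x f v + t * e f v)"
    by (rule feasible_along_direction[OF U fx e t0]) (use fin in \<open>simp add: t_def\<close>)
  moreover have "obj U x \<le> obj U (\<lambda>f v. x f v + t * e f v)"
    unfolding obj_add_scaled using t0 oe by simp
  ultimately show ?thesis using num_active_along_direction[OF U e t] by blast
qed

lemma basic_solution_dominates:
  assumes U: "U \<subseteq> V" and fx: "feas U x"
  shows "\<exists>x'. basic U x' \<and> obj U x \<le> obj U x'"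
  using fx
proof (induction "card (lp_vars U) + card U + card F - num_active U x" arbitrary: x rule: less_induct)
  case (less x)
  show ?case
  proof (cases "basic U x")
    case True then show ?thesis by blast
  next
    case False
    then obtain d f0 v0 where d: "active_direction U x d" "f0 \<in> F" "v0 \<in> V" "d f0 v0 \<noteq> 0"
      using less.prems unfolding basic_iff by blast
    have E0: "(f0, v0) \<in> lp_vars U"
      using d unfolding active_direction_def supported_def lp_vars_def by auto
    define e where "e = (if 0 \<le> obj U d then d else (\<lambda>f v. - d f v))"
    have e: "active_direction U x e" "e f0 v0 \<noteq> 0" "0 \<le> obj U e"
      unfolding e_def using d active_direction_uminus[OF d(1)] obj_uminus[of U d] by auto
    obtain x' where x': "feas U x'" "obj U x \<le> obj U x'" "num_active U x < num_active U x'"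
      using improve_along_active_direction[OF U less.prems e(1) E0 e(2) e(3)] by blast
    have "card (lp_vars U) + card U + card F - num_active U x' < card (lp_vars U) + card U + card F - num_active U x"
      using x'(3) num_active_bounded[OF U, of x'] by linarith
    from less.hyps[OF this x'(1)] obtain y where "basic U y" "obj U x' \<le> obj U y" by blast
    then show ?thesis using x'(2) by force
  qed
qed

lemma basic_obj_determined_by_active_sets:
  assumes U: "U \<subseteq> V" and b: "basic U x" "basic U y"
    and eq: "zero_vars U x = zero_vars U y" "tight_nodes U x = tight_nodes U y" "tight_flows U x = tight_flows U y"
  shows "obj U x = obj U y"
proof -
  have fx: "feas U x" "feas U y" using b basic_feasible by auto
  define d where "d = (\<lambda>f v. x f v - y f v)"
  have "active_direction U x d"
    unfolding active_direction_def
  proof (intro conjI ballI impI)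
    show "supported U d" using fx unfolding feasible_Q2_iff supported_def d_def by auto
  next
    fix f v assume f: "f \<in> F" and v: "v \<in> U \<inter> pth f" and x0: "x f v = 0"
    then have "(f, v) \<in> zero_vars U x" unfolding zero_vars_def lp_vars_def by auto
    then have "(f, v) \<in> zero_vars U y" using eq by simp
    then show "d f v = 0" unfolding zero_vars_def d_def using x0 by auto
  next
    fix v assume v: "v \<in> U" and t: "load x v = cap v"
    then have "v \<in> tight_nodes U y" using eq unfolding tight_nodes_def by blast
    then show "load d v = 0" unfolding d_def load_def tight_nodes_def using t by (simp add: sum_subtractf load_def)
  next
    fix f assume f: "f \<in> F" and t: "flow_total U x f = lam f"
    then have "f \<in> tight_flows U y" using eq unfolding tight_flows_def by blast
    then show "flow_total U d f = 0" unfolding d_def flow_total_def tight_flows_def using t by (simp add: sum_subtractf flow_total_def)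
  qed
  then have z: "\<forall>f\<in>F. \<forall>v\<in>V. d f v = 0" using b(1) unfolding basic_iff by blast
  show ?thesis unfolding Q2_obj_def
  proof (rule sum.cong[OF refl], rule sum.cong[OF refl])
    fix f v assume "f \<in> F" "v \<in> pth f \<inter> U"
    then show "x f v = y f v" using z pth_sub unfolding d_def by force
  qed
qed

lemma finite_basic_obj_values:
  assumes U: "U \<subseteq> V"
  shows "finite {obj U x | x. basic U x}"
proof -
  define act where "act x = (zero_vars U x, tight_nodes U x, tight_flows U x)" for x
  define g where "g A = obj U (SOME x. basic U x \<and> act x = A)" for A
  have "{obj U x | x. basic U x} \<subseteq> g ` (Pow (lp_vars U) \<times> Pow U \<times> Pow F)"
  proof
    fix r assume "r \<in> {obj U x | x. basic U x}"
    then obtain x where x: "basic U x" "r = obj U x" by blast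
    define y where "y = (SOME y. basic U y \<and> act y = act x)"
    have y: "basic U y \<and> act y = act x" unfolding y_def by (rule someI[of _ x]) (use x in auto)
    have "obj U y = obj U x"
      by (rule basic_obj_determined_by_active_sets[OF U]) (use y x in \<open>auto simp: act_def\<close>)
    moreover have "act x \<in> Pow (lp_vars U) \<times> Pow U \<times> Pow F"
      unfolding act_def zero_vars_def tight_nodes_def tight_flows_def by auto
    ultimately show "r \<in> g ` (Pow (lp_vars U) \<times> Pow U \<times> Pow F)"
      using x unfolding g_def y_def by (auto intro!: image_eqI[where x="act x"])
  qed
  moreover have "finite (Pow (lp_vars U) \<times> Pow U \<times> Pow F)"
    using finite_lp_vars[OF U] finite_node_set[OF U] finite_F by auto
  ultimately show ?thesis using finite_surj by blast
qed

lemma optimal_basic_exists: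
  assumes U: "U \<subseteq> V"
  shows "\<exists>x. basic U x \<and> obj U x = R U"
proof -
  let ?W = "{obj U x | x. basic U x}"
  obtain x0 where "basic U x0" using basic_solution_dominates[OF U feasible_zero[OF U]] by blast
  then have ne: "?W \<noteq> {}" by blast
  have fin: "finite ?W" by (rule finite_basic_obj_values[OF U])
  have "Max ?W \<in> ?W" using fin ne by (rule Max_in)
  then obtain xb where xb: "basic U xb" "obj U xb = Max ?W" by auto
  have "R U \<le> Max ?W"
  proof (rule R_le[OF U])
    fix x assume "feas U x"
    then obtain y where y: "basic U y" "obj U x \<le> obj U y" using basic_solution_dominates[OF U] by blast
    then have "obj U y \<le> Max ?W" using fin by (intro Max_ge) auto
    then show "obj U x \<le> Max ?W" using y by linarith
  qed
  moreover have "Max ?W \<le> R U" using obj_le_R[OF U basic_feasible[OF xb(1)]] xb(2) by simp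
  ultimately show ?thesis using xb by auto
qed

end

section \<open>R3 as a minimum cut\<close>

lemma eventually_affine_le:
  fixes a b c :: real
  assumes "a \<le> c" and "a = c \<Longrightarrow> b \<le> 0"
  shows "\<forall>\<^sub>F t in at_right 0. a + t * b \<le> c"
proof (cases "a < c")
  case True
  have "((\<lambda>t. a + t * b) \<longlongrightarrow> a + 0 * b) (at_right 0)"
    by (intro tendsto_intros)
  then have "((\<lambda>t. a + t * b) \<longlongrightarrow> a) (at_right 0)" by simp
  from order_tendstoD(2)[OF this True] show ?thesis by eventually_elim simp
next
  case False
  then have "b \<le> 0" using assms by simp
  from eventually_at_right_less[of "0::real"] show ?thesis
  proof eventually_elim
    case (elim t)
    then have "t * b \<le> 0" using \<open>b \<le> 0\<close> by (simp add: mult_nonneg_nonpos)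
    then show ?case using assms(1) by linarith
  qed
qed

context network begin

definition coverage :: "'v set \<Rightarrow> real" where
  "coverage X = sum lam {f\<in>F. pth f \<inter> X \<noteq> {}}"

definition cut_value :: "'v set \<Rightarrow> 'v set \<Rightarrow> real" where
  "cut_value U T = sum cap T + coverage (U - T)"

lemma obj_split_at_cut:
  assumes U: "U \<subseteq> V" and T: "T \<subseteq> U" and x: "supported U x"
  shows "obj U x = (\<Sum>v\<in>T. load x v) + (\<Sum>f\<in>{f\<in>F. pth f \<inter> (U - T) \<noteq> {}}. \<Sum>v\<in>U - T. x f v)"
proof -
  have "obj U x = (\<Sum>v\<in>T. load x v) + (\<Sum>v\<in>U - T. load x v)"
    unfolding obj_eq_sum_load[OF U x] using finite_node_set[OF U] T
    by (metis sum.subset_diff add.commute)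
  also have "(\<Sum>v\<in>U - T. load x v) = (\<Sum>f\<in>F. \<Sum>v\<in>U - T. x f v)"
    unfolding load_def by (rule sum.swap)
  also have "\<dots> = (\<Sum>f\<in>{f\<in>F. pth f \<inter> (U - T) \<noteq> {}}. \<Sum>v\<in>U - T. x f v)"
    using x U unfolding supported_def
    by (intro sum.mono_neutral_right[OF finite_F]) (auto intro!: sum.neutral)
  finally show ?thesis .
qed

lemma obj_le_cut_value:
  assumes U: "U \<subseteq> V" and T: "T \<subseteq> U" and fx: "feas U x"
  shows "obj U x \<le> cut_value U T"
proof -
  have x: "\<forall>f\<in>F. \<forall>v\<in>V. 0 \<le> x f v" "\<forall>v\<in>U. load x v \<le> cap v" "supported U x"
    "\<forall>f\<in>F. flow_total U x f \<le> lam f"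
    using fx unfolding feasible_Q2_iff by auto
  have "(\<Sum>v\<in>T. load x v) \<le> sum cap T" using x(2) T by (intro sum_mono) auto
  moreover have "(\<Sum>v\<in>U - T. x f v) \<le> lam f" if f: "f \<in> F" for f
  proof -
    have "(\<Sum>v\<in>U - T. x f v) \<le> (\<Sum>v\<in>U. x f v)"
      using f x(1) U finite_node_set[OF U] by (intro sum_mono2) auto
    then show ?thesis using x(4) f unfolding flow_total_def by auto
  qed
  ultimately show ?thesis
    unfolding obj_split_at_cut[OF U T x(3)] cut_value_def coverage_def
    by (smt (verit, best) mem_Collect_eq sum_mono)
qed

lemma R_le_cut_value: "U \<subseteq> V \<Longrightarrow> T \<subseteq> U \<Longrightarrow> R U \<le> cut_value U T"
  by (rule R_le) (auto intro: obj_le_cut_value)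

text \<open>Reachability in the residual graph of x; the reachable nodes form the minimum cut.\<close>

inductive residual_reach :: "'v set \<Rightarrow> ('f \<Rightarrow> 'v \<Rightarrow> real) \<Rightarrow> 'f + 'v \<Rightarrow> bool" for U x where
  src: "f \<in> F \<Longrightarrow> flow_total U x f < lam f \<Longrightarrow> residual_reach U x (Inl f)"
| fwd: "residual_reach U x (Inl f) \<Longrightarrow> f \<in> F \<Longrightarrow> v \<in> U \<inter> pth f \<Longrightarrow> residual_reach U x (Inr v)"
| bwd: "residual_reach U x (Inr v) \<Longrightarrow> g \<in> F \<Longrightarrow> v \<in> U \<inter> pth g \<Longrightarrow> 0 < x g v \<Longrightarrow>
    residual_reach U x (Inl g)"

text \<open>An augmenting path ending at a, as a direction: it raises the load of a (if a is a node) by one,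
  keeps all other loads, and does not raise a tight flow (nor the flow a, if a is a flow).\<close>

definition raising_direction ::
  "'v set \<Rightarrow> ('f \<Rightarrow> 'v \<Rightarrow> real) \<Rightarrow> 'f + 'v \<Rightarrow> ('f \<Rightarrow> 'v \<Rightarrow> real) \<Rightarrow> bool" where
  "raising_direction U x a d \<longleftrightarrow> supported U d \<and>
     (\<forall>f\<in>F. \<forall>v\<in>U \<inter> pth f. x f v = 0 \<longrightarrow> 0 \<le> d f v) \<and>
     (\<forall>w\<in>U. load d w = (if a = Inr w then 1 else 0)) \<and>
     (\<forall>h\<in>F. flow_total U x h = lam h \<longrightarrow> flow_total U d h + (if a = Inl h then 1 else 0) \<le> 0)"

lemma residual_reach_raising_direction:
  assumes U: "U \<subseteq> V"
  shows "residual_reach U x a \<Longrightarrow> \<exists>d. raising_direction U x a d"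
proof (induction rule: residual_reach.induct)
  case (src f)
  show ?case
    by (rule exI[of _ "\<lambda>f v. 0"])
      (use src in \<open>auto simp: raising_direction_def supported_def load_def flow_total_def\<close>)
next
  case (fwd f v)
  then obtain d where d: "raising_direction U x (Inl f) d" by blast
  define d' where "d' = (\<lambda>g w. d g w + (if g = f \<and> w = v then 1 else 0))"
  have ld: "load d' w = load d w + (if w = v then 1 else 0)" for w
    unfolding d'_def load_def using fwd(2) finite_F by (simp add: sum.distrib)
  have fs: "flow_total U d' h = flow_total U d h + (if h = f then 1 else 0)" for h
    unfolding d'_def flow_total_def using fwd(3) finite_node_set[OF U] by (simp add: sum.distrib)
  have "raising_direction U x (Inr v) d'"
    using d fwd(2,3) unfolding raising_direction_def ld fs by (auto simp: supported_def d'_def)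
  then show ?case by blast
next
  case (bwd v g)
  then obtain d where d: "raising_direction U x (Inr v) d" by blast
  define d' where "d' = (\<lambda>h w. d h w - (if h = g \<and> w = v then 1 else 0))"
  have ld: "load d' w = load d w - (if w = v then 1 else 0)" for w
    unfolding d'_def load_def using bwd(2) finite_F by (simp add: sum_subtractf)
  have fs: "flow_total U d' h = flow_total U d h - (if h = g then 1 else 0)" for h
    unfolding d'_def flow_total_def using bwd(3) finite_node_set[OF U] by (simp add: sum_subtractf)
  have "raising_direction U x (Inl g) d'"
    using d bwd(2,3,4) unfolding raising_direction_def ld fs by (auto simp: supported_def d'_def)
  then show ?case by blast
qed

lemma eventually_feasible_along:
  assumes U: "U \<subseteq> V" and fx: "feas U x" and d: "supported U d"
    and zero: "\<And>f v. f \<in> F \<Longrightarrow> v \<in> U \<inter> pth f \<Longrightarrow> x f v = 0 \<Longrightarrow> 0 \<le> d f v"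
    and tight_node: "\<And>v. v \<in> U \<Longrightarrow> load x v = cap v \<Longrightarrow> load d v \<le> 0"
    and tight_flow: "\<And>f. f \<in> F \<Longrightarrow> flow_total U x f = lam f \<Longrightarrow> flow_total U d f \<le> 0"
  shows "\<forall>\<^sub>F t in at_right 0. feas U (\<lambda>f v. x f v + t * d f v)"
proof -
  have x: "\<forall>f\<in>F. \<forall>v\<in>V. 0 \<le> x f v" "\<forall>v\<in>U. load x v \<le> cap v" "supported U x"
    "\<forall>f\<in>F. flow_total U x f \<le> lam f"
    using fx unfolding feasible_Q2_iff by auto
  have "\<forall>\<^sub>F t in at_right 0. \<forall>p\<in>F \<times> V. 0 \<le> x (fst p) (snd p) + t * d (fst p) (snd p)"
  proof (rule eventually_ball_finite, use finite_F finite_V in simp, rule ballI)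
    fix p assume p: "p \<in> F \<times> V"
    have "x (fst p) (snd p) = 0 \<Longrightarrow> 0 \<le> d (fst p) (snd p)"
      using zero[of "fst p" "snd p"] d p unfolding supported_def by (cases "snd p \<in> U \<inter> pth (fst p)") auto
    then have "\<forall>\<^sub>F t in at_right 0. - x (fst p) (snd p) + t * - d (fst p) (snd p) \<le> 0"
      using x(1) p by (intro eventually_affine_le) auto
    then show "\<forall>\<^sub>F t in at_right 0. 0 \<le> x (fst p) (snd p) + t * d (fst p) (snd p)"
      by eventually_elim simp
  qed
  moreover have "\<forall>\<^sub>F t in at_right 0. \<forall>v\<in>U. load x v + t * load d v \<le> cap v"
    using x(2) tight_node finite_node_set[OF U]
    by (intro eventually_ball_finite ballI eventually_affine_le) auto
  moreover have "\<forall>\<^sub>F t in at_right 0. \<forall>f\<in>F. flow_total U x f + t * flow_total U d f \<le> lam f"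
    using x(4) tight_flow finite_F by (intro eventually_ball_finite ballI eventually_affine_le) auto
  ultimately show ?thesis
  proof eventually_elim
    case (elim t)
    have "supported U (\<lambda>f v. x f v + t * d f v)" using x(3) d unfolding supported_def by auto
    then show ?case using elim unfolding feasible_Q2_iff load_add_scaled flow_total_add_scaled by auto
  qed
qed

lemma residual_reach_saturated:
  assumes U: "U \<subseteq> V" and fx: "feas U x" and opt: "obj U x = R U"
    and r: "residual_reach U x (Inr v)" and vU: "v \<in> U"
  shows "load x v = cap v"
proof (rule ccontr)
  assume slack: "load x v \<noteq> cap v"
  obtain d where d: "raising_direction U x (Inr v) d"
    using residual_reach_raising_direction[OF U r] by blast
  have ld: "\<And>w. w \<in> U \<Longrightarrow> load d w = (if w = v then 1 else 0)" and supp: "supported U d"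
    using d unfolding raising_direction_def by auto
  have "\<forall>\<^sub>F t in at_right 0. feas U (\<lambda>f w. x f w + t * d f w)"
    using d slack ld by (intro eventually_feasible_along[OF U fx supp]) (auto simp: raising_direction_def)
  then obtain t where t: "0 < t" "feas U (\<lambda>f w. x f w + t * d f w)"
    using eventually_conj[OF _ eventually_at_right_less[of "0::real"]]
      eventually_happens[of _ "at_right (0::real)"] by force
  have "obj U d = (\<Sum>w\<in>U. if w = v then 1 else 0)"
    unfolding obj_eq_sum_load[OF U supp] using ld by (intro sum.cong) auto
  then have "obj U d = 1" using vU finite_node_set[OF U] by simp
  then have "obj U (\<lambda>f w. x f w + t * d f w) = R U + t" unfolding obj_add_scaled opt by simp
  then show False using obj_le_R[OF U t(2)] t(1) by simp
qed

lemma R_eq_cut_value: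
  assumes U: "U \<subseteq> V"
  shows "\<exists>T\<subseteq>U. R U = cut_value U T"
proof -
  obtain x where xb: "basic U x" and opt: "obj U x = R U" using optimal_basic_exists[OF U] by blast
  have x: "\<forall>f\<in>F. \<forall>v\<in>V. 0 \<le> x f v" "supported U x" "\<forall>f\<in>F. flow_total U x f \<le> lam f"
    using basic_feasible[OF xb] unfolding feasible_Q2_iff by auto
  define T where "T = {v\<in>U. residual_reach U x (Inr v)}"
  define N where "N = {f\<in>F. pth f \<inter> (U - T) \<noteq> {}}"
  have TU: "T \<subseteq> U" unfolding T_def by auto
  have unreached: "\<not> residual_reach U x (Inl f)" if f: "f \<in> N" for f
    using f residual_reach.fwd[of U x f] unfolding N_def T_def by blast
  have N_tight: "flow_total U x f = lam f" if f: "f \<in> N" for f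
    using unreached[OF f] residual_reach.src[of f U x] x(3) f unfolding N_def by force
  have N_avoids_T: "x f v = 0" if f: "f \<in> N" and v: "v \<in> T" for f v
  proof (rule ccontr)
    assume "x f v \<noteq> 0"
    moreover have "f \<in> F" "v \<in> V" using f v TU U unfolding N_def by auto
    ultimately have "v \<in> pth f" "0 < x f v" using x(1,2) v TU unfolding supported_def by force+
    then show False
      using unreached[OF f] residual_reach.bwd[of U x v f] v \<open>f \<in> F\<close> TU unfolding T_def by auto
  qed
  have "(\<Sum>v\<in>U - T. x f v) = lam f" if f: "f \<in> N" for f
  proof -
    have "(\<Sum>v\<in>U. x f v) = (\<Sum>v\<in>T. x f v) + (\<Sum>v\<in>U - T. x f v)"
      using finite_node_set[OF U] TU by (metis sum.subset_diff add.commute)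
    then show ?thesis using N_avoids_T[OF f] N_tight[OF f] unfolding flow_total_def by simp
  qed
  moreover have "load x v = cap v" if "v \<in> T" for v
    using residual_reach_saturated[OF U basic_feasible[OF xb] opt] that unfolding T_def by auto
  ultimately have "R U = cut_value U T"
    unfolding opt[symmetric] obj_split_at_cut[OF U TU x(2)] cut_value_def coverage_def N_def[symmetric]
    by simp
  then show ?thesis using TU by blast
qed

end

section \<open>Submodularity of R3\<close>

context network begin

lemma coverage_mono: "X \<subseteq> Y \<Longrightarrow> coverage X \<le> coverage Y"
  unfolding coverage_def using finite_F lam_pos by (intro sum_mono2) (auto intro: less_imp_le)

lemma coverage_submodular: "coverage (P \<union> Q) + coverage (P \<inter> Q) \<le> coverage P + coverage Q"
proof -
  let ?N = "\<lambda>X. {f\<in>F. pth f \<inter> X \<noteq> {}}"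
  have fin: "finite (?N X)" for X using finite_F by auto
  have u: "?N (P \<union> Q) = ?N P \<union> ?N Q" by auto
  have i: "?N (P \<inter> Q) \<subseteq> ?N P \<inter> ?N Q" by auto
  have "coverage (P \<inter> Q) \<le> sum lam (?N P \<inter> ?N Q)"
    unfolding coverage_def using i fin lam_pos by (intro sum_mono2) (auto intro: less_imp_le)
  moreover have "sum lam (?N P \<union> ?N Q) + sum lam (?N P \<inter> ?N Q) = coverage P + coverage Q"
    unfolding coverage_def by (rule sum.union_inter[OF fin fin])
  ultimately show ?thesis unfolding coverage_def u by linarith
qed

lemma R_submodular:
  assumes A: "A \<subseteq> V" and B: "B \<subseteq> V"
  shows "R (A \<union> B) + R (A \<inter> B) \<le> R A + R B"
proof -
  txt \<open>Uncross minimum cuts TA and TB: T1 and T2 split TA and TB modularly, while their complements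
    shrink into the union and the intersection of the complements of TA and TB.\<close>
  obtain TA where TA: "TA \<subseteq> A" "R A = cut_value A TA" using R_eq_cut_value[OF A] by blast
  obtain TB where TB: "TB \<subseteq> B" "R B = cut_value B TB" using R_eq_cut_value[OF B] by blast
  define T1 where "T1 = (TA \<inter> TB) \<union> (TA - B) \<union> (TB - A)"
  define T2 where "T2 = (TA \<union> TB) \<inter> A \<inter> B"
  have AB: "A \<union> B \<subseteq> V" "A \<inter> B \<subseteq> V" using A B by auto
  have T1s: "T1 \<subseteq> A \<union> B" unfolding T1_def using TA TB by auto
  have T2s: "T2 \<subseteq> A \<inter> B" unfolding T2_def by auto
  have r1: "R (A \<union> B) \<le> cut_value (A \<union> B) T1" by (rule R_le_cut_value[OF AB(1) T1s])
  have r2: "R (A \<inter> B) \<le> cut_value (A \<inter> B) T2" by (rule R_le_cut_value[OF AB(2) T2s])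
  have finTA: "finite TA" using TA A finite_node_set by (meson finite_subset finite_V)
  have finTB: "finite TB" using TB B finite_node_set by (meson finite_subset finite_V)
  have un: "T1 \<union> T2 = TA \<union> TB" unfolding T1_def T2_def using TA TB by auto
  have it: "T1 \<inter> T2 = TA \<inter> TB" unfolding T1_def T2_def using TA TB by auto
  have fin1: "finite T1" unfolding T1_def using finTA finTB by auto
  have fin2: "finite T2" unfolding T2_def using finTA finTB by auto
  have capeq: "sum cap T1 + sum cap T2 = sum cap TA + sum cap TB"
    using sum.union_inter[OF fin1 fin2, of cap] sum.union_inter[OF finTA finTB, of cap] un it by simp
  have X1: "(A \<union> B) - T1 \<subseteq> (A - TA) \<union> (B - TB)" unfolding T1_def by auto
  have X2: "(A \<inter> B) - T2 \<subseteq> (A - TA) \<inter> (B - TB)" unfolding T2_def by auto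
  have "coverage ((A \<union> B) - T1) + coverage ((A \<inter> B) - T2) \<le> coverage ((A - TA) \<union> (B - TB)) + coverage ((A - TA) \<inter> (B - TB))"
    using coverage_mono[OF X1] coverage_mono[OF X2] by linarith
  also have "\<dots> \<le> coverage (A - TA) + coverage (B - TB)" by (rule coverage_submodular)
  finally show ?thesis using r1 r2 capeq TA(2) TB(2) unfolding cut_value_def by linarith
qed

lemma R_mono:
  assumes AB: "A \<subseteq> B" and B: "B \<subseteq> V"
  shows "R A \<le> R B"
proof -
  obtain T where T: "T \<subseteq> B" "R B = cut_value B T" using R_eq_cut_value[OF B] by blast
  have "R A \<le> cut_value A (T \<inter> A)" by (rule R_le_cut_value) (use AB B in auto)
  also have "\<dots> \<le> cut_value B T"
    unfolding cut_value_def
  proof (rule add_mono)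
    show "sum cap (T \<inter> A) \<le> sum cap T"
      using T B finite_node_set[of T] cap_pos by (intro sum_mono2) (auto intro: less_imp_le)
    show "coverage (A - T \<inter> A) \<le> coverage (B - T)" using AB by (intro coverage_mono) auto
  qed
  finally show ?thesis using T(2) by simp
qed

lemma R_nonneg: "U \<subseteq> V \<Longrightarrow> 0 \<le> R U"
  using obj_le_R[OF _ feasible_zero, of U] by (simp add: Q2_obj_def)

lemma R_empty: "R {} = 0"
proof -
  have "R {} \<le> cut_value {} {}" by (rule R_le_cut_value) auto
  moreover have "cut_value {} {} = 0" unfolding cut_value_def coverage_def by simp
  ultimately show ?thesis using R_nonneg[of "{}"] by simp
qed

lemma R_diminishing_returns:
  assumes AS: "A \<subseteq> S" and S: "S \<subseteq> V" and u: "u \<in> V" "u \<notin> S"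
  shows "R (insert u S) - R S \<le> R (insert u A) - R A"
proof -
  have "R (insert u A \<union> S) + R (insert u A \<inter> S) \<le> R (insert u A) + R S"
    by (rule R_submodular) (use AS S u in auto)
  moreover have "insert u A \<union> S = insert u S" using AS by auto
  moreover have "insert u A \<inter> S = A" using AS u by auto
  ultimately show ?thesis by simp
qed

lemma R_union_le_sum_marginals:
  assumes S: "S \<subseteq> V" and X: "X \<subseteq> V" "X \<inter> S = {}"
  shows "R (S \<union> X) \<le> R S + (\<Sum>u\<in>X. R (insert u S) - R S)"
proof -
  have finX: "finite X" using X finite_V finite_subset by blast
  show ?thesis using finX X
  proof (induction X rule: finite_induct)
    case empty then show ?case by simp
  next
    case (insert u X)
    have IH: "R (S \<union> X) \<le> R S + (\<Sum>u\<in>X. R (insert u S) - R S)" using insert by auto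
    have "R (insert u (S \<union> X)) - R (S \<union> X) \<le> R (insert u S) - R S"
      by (rule R_diminishing_returns) (use insert S in auto)
    then show ?case using IH insert(1,2) by simp
  qed
qed

lemma R_le_sum_marginals:
  assumes S: "S \<subseteq> V" and Ob: "Ob \<subseteq> V"
  shows "R Ob \<le> R S + (\<Sum>u\<in>Ob - S. R (insert u S) - R S)"
proof -
  have "R Ob \<le> R (S \<union> (Ob - S))" by (rule R_mono) (use S Ob in auto)
  also have "\<dots> \<le> R S + (\<Sum>u\<in>Ob - S. R (insert u S) - R S)"
    by (rule R_union_le_sum_marginals) (use S Ob in auto)
  finally show ?thesis .
qed

lemma R_marginal_nonneg: "S \<subseteq> V \<Longrightarrow> u \<in> V \<Longrightarrow> 0 \<le> R (insert u S) - R S"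
  using R_mono[of S "insert u S"] by auto

end

section \<open>Greedy placement\<close>

lemma finite_argmax:
  fixes f :: "'a \<Rightarrow> 'b::linorder"
  assumes "finite A" "A \<noteq> {}"
  shows "\<exists>x\<in>A. \<forall>y\<in>A. f y \<le> f x"
proof -
  have "Max (f ` A) \<in> f ` A" using assms by simp
  then obtain x where "x \<in> A" "f x = Max (f ` A)" by auto
  then show ?thesis using assms(1) by (metis Max_ge finite_imageI image_eqI)
qed

lemma one_minus_inverse_power_le_exp:
  assumes K: "0 < K"
  shows "(1 - 1 / real K) ^ K \<le> exp (-1)"
proof -
  have "(1 - 1 / real K) ^ K \<le> exp (- (1 / real K)) ^ K"
    using exp_ge_add_one_self[of "- (1 / real K)"] K by (intro power_mono) auto
  also have "\<dots> = exp (real K * (- (1 / real K)))" by (rule exp_of_nat_mult[symmetric])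
  also have "real K * (- (1 / real K)) = -1" using K by simp
  finally show ?thesis .
qed

lemma mult_one_minus_le_exp: "0 \<le> (g::real) \<Longrightarrow> g * (1 - a) \<le> g * exp (- a)"
  using exp_ge_add_one_self[of "-a"] by (intro mult_left_mono) auto

lemma gap_after_step:
  fixes g m c b s G \<rho> :: real
  assumes b: "0 < b" and c: "0 \<le> c" and g: "g \<le> b * \<rho>" and m: "\<rho> * c \<le> m" "0 \<le> m"
    and gap: "g \<le> exp (- (s / b)) * G" and G: "0 \<le> G"
  shows "g - m \<le> exp (- ((s + c) / b)) * G"
proof (cases "g < 0")
  case True
  have "0 \<le> exp (- ((s + c) / b)) * G" using G by simp
  then show ?thesis using True m(2) by linarith
next
  case False
  have "g / b * c \<le> \<rho> * c" using g b c by (intro mult_right_mono) (auto simp: field_simps)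
  then have "g - m \<le> g * (1 - c / b)" using m(1) by (simp add: algebra_simps)
  also have "\<dots> \<le> g * exp (- (c / b))" using False by (intro mult_one_minus_le_exp) simp
  also have "\<dots> \<le> exp (- (s / b)) * G * exp (- (c / b))" using gap by (rule mult_right_mono) simp
  also have "\<dots> = exp (- ((s + c) / b)) * G"
    by (simp add: exp_add[symmetric] add_divide_distrib algebra_simps)
  finally show ?thesis .
qed

lemma approx_after_last_step:
  fixes rO rY rW rZ :: real
  assumes "0 \<le> rY" and "rO - rZ \<le> exp (-1) * (rO - rY)" and "3 * (rZ - rW) \<le> rY"
  shows "(1 - exp (-1)) * rO \<le> rW"
proof -
  have "exp 1 \<le> (3::real)" by (rule exp_le)
  then have "1 / 3 \<le> exp (-1::real)" by (simp add: exp_minus field_simps)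
  then have "1 * rY \<le> (3 * exp (-1)) * rY" using assms(1) by (intro mult_right_mono) auto
  then show ?thesis using assms(2,3) by (simp add: algebra_simps)
qed

context network begin

lemma approx_R_le_of_subset:
  assumes "A \<subseteq> B" "B \<subseteq> V"
  shows "(1 - exp (-1)) * R A \<le> R B"
proof -
  have "(1 - exp (-1)) * R A \<le> R A" using R_nonneg[of A] assms by (simp add: mult_left_le_one_le)
  then show ?thesis using R_mono[OF assms] by linarith
qed

subsection \<open>Uniform costs\<close>

lemma greedy_reach_card:
  "greedy_reach V F lam pth cap k W \<Longrightarrow> W \<subseteq> V \<and> finite W \<and> card W = k"
  by (induction rule: greedy_reach.induct) auto

lemma greedy_gap_decay:
  assumes gr: "greedy_reach V F lam pth cap k W" and Ob: "Ob \<subseteq> V" "card Ob \<le> K" and K: "0 < K"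
  shows "R Ob - R W \<le> (1 - 1 / real K) ^ k * R Ob"
  using gr
proof (induction rule: greedy_reach.induct)
  case start then show ?case using R_empty by simp
next
  case (step k W u)
  have W: "W \<subseteq> V" "finite W" using greedy_reach_card[OF step(1)] by auto
  let ?D = "R (insert u W) - R W"
  have "R Ob \<le> R W + (\<Sum>w\<in>Ob - W. R (insert w W) - R W)" by (rule R_le_sum_marginals[OF W(1) Ob(1)])
  also have "\<dots> \<le> R W + (\<Sum>w\<in>Ob - W. ?D)"
    using step(3) Ob(1) by (intro add_left_mono sum_mono) auto
  also have "(\<Sum>w\<in>Ob - W. ?D) \<le> real K * ?D"
  proof -
    have "card (Ob - W) \<le> K"
      using Ob finite_node_set[OF Ob(1)] card_mono[of Ob "Ob - W"] by auto
    then show ?thesis using R_marginal_nonneg[OF W(1)] step(2) by (simp add: mult_right_mono)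
  qed
  finally have "R Ob - R W \<le> real K * ?D" by simp
  then have "R Ob - R (insert u W) \<le> (R Ob - R W) * (1 - 1 / real K)"
    using K by (simp add: field_simps)
  also have "\<dots> \<le> ((1 - 1 / real K) ^ k * R Ob) * (1 - 1 / real K)"
    by (rule mult_right_mono[OF step(4)]) (use K in \<open>simp add: field_simps\<close>)
  also have "\<dots> = (1 - 1 / real K) ^ Suc k * R Ob" by simp
  finally show ?case .
qed

lemma uniform_cost_card_le:
  fixes cost :: "'v \<Rightarrow> real" and b B :: real
  assumes b: "0 < b" and cb: "\<forall>v\<in>V. cost v = b" and X: "X \<subseteq> V" "sum cost X \<le> B"
  shows "card X \<le> nat \<lfloor>B / b\<rfloor>"
proof -
  have "sum cost X = real (card X) * b" using X cb by (simp add: subset_iff)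
  then have "real (card X) \<le> B / b" using X(2) b by (simp add: field_simps)
  then show ?thesis by (metis le_nat_floor floor_of_nat nat_int of_int_of_nat_eq le_floor_iff)
qed

lemma submodular_greedy_guarantee:
  assumes b: "0 < b" and B: "0 \<le> B" and cb: "\<forall>v\<in>V. cost v = b"
    and sg: "submodular_greedy V F lam pth cap b B U"
  shows "U \<subseteq> V \<and> sum cost U \<le> B \<and>
    (\<forall>Ob. Ob \<subseteq> V \<and> sum cost Ob \<le> B \<longrightarrow> (1 - exp (-1)) * R Ob \<le> R U)"
proof -
  define K where "K = min (nat \<lfloor>B / b\<rfloor>) (card V)"
  have gr: "greedy_reach V F lam pth cap K U" using sg unfolding submodular_greedy_def K_def .
  have U: "U \<subseteq> V" "finite U" "card U = K" using greedy_reach_card[OF gr] by auto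
  have "real K \<le> real (nat \<lfloor>B / b\<rfloor>)" unfolding K_def by simp
  also have "\<dots> \<le> B / b" using B b by (cases "0 \<le> \<lfloor>B / b\<rfloor>") simp_all
  finally have "real K \<le> B / b" .
  then have "sum cost U \<le> B" using U cb b by (simp add: subset_iff field_simps)
  moreover have "(1 - exp (-1)) * R Ob \<le> R U" if Ob: "Ob \<subseteq> V" "sum cost Ob \<le> B" for Ob
  proof -
    have cK: "card Ob \<le> K"
      using uniform_cost_card_le[OF b cb Ob] card_mono[OF finite_V Ob(1)] unfolding K_def by simp
    show ?thesis
    proof (cases "K = 0")
      case True
      then show ?thesis using cK finite_node_set[OF Ob(1)] R_empty R_nonneg[OF U(1)] by simp
    next
      case False
      have "R Ob - R U \<le> (1 - 1 / real K) ^ K * R Ob" using False by (intro greedy_gap_decay[OF gr Ob(1) cK]) simp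
      also have "\<dots> \<le> exp (-1) * R Ob"
        using False R_nonneg[OF Ob(1)] by (intro mult_right_mono one_minus_inverse_power_le_exp) auto
      finally show ?thesis by (simp add: algebra_simps)
    qed
  qed
  ultimately show ?thesis using U by blast
qed

lemma greedy_reach_exists: "k \<le> card V \<Longrightarrow> \<exists>W. greedy_reach V F lam pth cap k W"
proof (induction k)
  case 0 then show ?case using greedy_reach.start by blast
next
  case (Suc k)
  then obtain W where W: "greedy_reach V F lam pth cap k W" by auto
  have Wi: "W \<subseteq> V" "finite W" "card W = k" using greedy_reach_card[OF W] by auto
  have "V - W \<noteq> {}"
  proof
    assume "V - W = {}"
    then have "card V \<le> card W" using Wi by (intro card_mono) auto
    then show False using Suc.prems Wi by simp
  qed
  then obtain u where "u \<in> V - W" "\<forall>w\<in>V - W. R (insert w W) - R W \<le> R (insert u W) - R W"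
    using finite_argmax[of "V - W" "\<lambda>w. R (insert w W) - R W"] finite_V by blast
  then show ?case using greedy_reach.step[OF W] by blast
qed

end

subsection \<open>Arbitrary costs: partial enumeration\<close>

context network begin

lemma aug_reach_within_budget:
  assumes "\<forall>v\<in>V. 0 < cost v"
  shows "aug_reach V F lam pth cap cost B S W \<Longrightarrow> S \<subseteq> V \<Longrightarrow> sum cost S \<le> B \<Longrightarrow>
    S \<subseteq> W \<and> W \<subseteq> V \<and> sum cost W \<le> B"
proof (induction rule: aug_reach.induct)
  case start then show ?case by simp
next
  case (step S W u)
  then have W: "S \<subseteq> W" "W \<subseteq> V" "sum cost W \<le> B" by auto
  then have "sum cost (insert u W) = sum cost W + cost u" using step(2) finite_node_set by simp
  then show ?case using W step(2,3) by auto
qed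

text \<open>Y consists of the first three elements of O picked greedily.\<close>

lemma heavy_triple_exists:
  assumes Ob: "Ob \<subseteq> V" and c3: "3 \<le> card Ob"
  shows "\<exists>Y\<subseteq>Ob. card Y = 3 \<and>
     (\<forall>u\<in>Ob - Y. \<forall>S. Y \<subseteq> S \<longrightarrow> S \<subseteq> V \<longrightarrow> u \<notin> S \<longrightarrow> 3 * (R (insert u S) - R S) \<le> R Y)"
proof -
  have finOb: "finite Ob" using finite_node_set[OF Ob] .
  have "Ob \<noteq> {}" using c3 by auto
  then obtain o1 where o1: "o1 \<in> Ob" "\<forall>y\<in>Ob. R {y} \<le> R {o1}"
    using finite_argmax[OF finOb, of "\<lambda>y. R {y}"] by blast
  have c2: "2 \<le> card (Ob - {o1})" using c3 o1(1) finOb by (simp add: card_Diff_singleton)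
  have "Ob - {o1} \<noteq> {}"
  proof
    assume "Ob - {o1} = {}"
    then have "card (Ob - {o1}) = 0" by (simp only: card.empty)
    with c2 show False by simp
  qed
  then obtain o2 where o2: "o2 \<in> Ob - {o1}" "\<forall>y\<in>Ob - {o1}. R {y, o1} \<le> R {o2, o1}"
    using finite_argmax[of "Ob - {o1}" "\<lambda>y. R {y, o1}"] finOb by auto
  have s12: "{o1, o2} \<subseteq> Ob" and c12: "card {o1, o2} = 2" using o1(1) o2(1) by auto
  have c1: "1 \<le> card (Ob - {o1, o2})" using c3 c12 card_Diff_subset[OF _ s12] by simp
  have "Ob - {o1, o2} \<noteq> {}"
  proof
    assume "Ob - {o1, o2} = {}"
    then have "card (Ob - {o1, o2}) = 0" by (simp only: card.empty)
    with c1 show False by simp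
  qed
  then obtain o3 where o3: "o3 \<in> Ob - {o1, o2}" "\<forall>y\<in>Ob - {o1, o2}. R {y, o1, o2} \<le> R {o3, o1, o2}"
    using finite_argmax[of "Ob - {o1, o2}" "\<lambda>y. R {y, o1, o2}"] finOb by auto
  define Y where "Y = {o3, o1, o2}"
  have "3 * (R (insert u S) - R S) \<le> R Y"
    if u: "u \<in> Ob - Y" and S: "Y \<subseteq> S" "S \<subseteq> V" "u \<notin> S" for u S
  proof -
    have uV: "u \<in> V" using u Ob by auto
    have m1: "R (insert u S) - R S \<le> R (insert u {}) - R {}"
      by (rule R_diminishing_returns) (use S uV in auto)
    have m2: "R (insert u S) - R S \<le> R (insert u {o1}) - R {o1}"
      by (rule R_diminishing_returns) (use S uV Y_def in auto)
    have m3: "R (insert u S) - R S \<le> R (insert u {o1, o2}) - R {o1, o2}"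
      by (rule R_diminishing_returns) (use S uV Y_def in auto)
    have a1: "R {u} \<le> R {o1}" using o1(2) u by auto
    have a2: "R {u, o1} \<le> R {o2, o1}" using o2(2) u Y_def by auto
    have a3: "R {u, o1, o2} \<le> R {o3, o1, o2}" using o3(2) u Y_def by auto
    have e2: "{o2, o1} = {o1, o2}" by auto
    show ?thesis using m1 m2 m3 a1 a2 a3 R_empty unfolding Y_def e2 by simp
  qed
  moreover have "Y \<subseteq> Ob" "card Y = 3" unfolding Y_def using o1 o2 o3 by auto
  ultimately show ?thesis by blast
qed

end

text \<open>The analysis of one cost-benefit greedy augmentation of a heavy triple Y of an optimal set O.
  While the augmentation has not yet reached (1 - 1/e) R3 O, the remaining gap R3 O - R3 W decays
  exponentially in the budget spent beyond Y.\<close>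

locale augmentation = network V F lam pth cap
  for V :: "'v set" and F :: "'f set" and lam pth cap +
  fixes cost :: "'v \<Rightarrow> real" and B :: real and Ob Y :: "'v set"
  assumes cost_pos: "\<And>v. v \<in> V \<Longrightarrow> 0 < cost v"
    and Ob: "Ob \<subseteq> V" "sum cost Ob \<le> B"
    and Y: "Y \<subseteq> Ob" "Y \<noteq> Ob"
    and heavy: "\<And>u S. u \<in> Ob - Y \<Longrightarrow> Y \<subseteq> S \<Longrightarrow> S \<subseteq> V \<Longrightarrow> u \<notin> S \<Longrightarrow>
      3 * (R (insert u S) - R S) \<le> R Y"
begin

definition ratio :: "'v set \<Rightarrow> 'v \<Rightarrow> real" where
  "ratio W u = (R (insert u W) - R W) / cost u"

definition gap_bound :: "'v set \<Rightarrow> real" where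
  "gap_bound W = exp (- ((sum cost W - sum cost Y) / (B - sum cost Y))) * (R Ob - R Y)"

lemma cost_sum_split: "Y \<subseteq> W \<Longrightarrow> W \<subseteq> V \<Longrightarrow> sum cost W = sum cost Y + sum cost (W - Y)"
  using sum.subset_diff[of Y W cost] finite_node_set by simp

lemma cost_nonneg: "X \<subseteq> V \<Longrightarrow> 0 \<le> sum cost X"
  using cost_pos by (intro sum_nonneg) (auto intro: less_imp_le)

lemma budget_left:
  shows "sum cost (Ob - Y) \<le> B - sum cost Y" and "0 < B - sum cost Y"
proof -
  show le: "sum cost (Ob - Y) \<le> B - sum cost Y" using cost_sum_split[OF Y(1) Ob(1)] Ob(2) by simp
  have "Ob - Y \<noteq> {}" using Y by auto
  then have "0 < sum cost (Ob - Y)" using cost_pos Ob finite_node_set[OF Ob(1)] by (intro sum_pos) auto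
  then show "0 < B - sum cost Y" using le by simp
qed

lemma best_ratio_exists:
  assumes "\<not> Ob \<subseteq> W"
  obtains z where "z \<in> Ob - W" "\<And>w. w \<in> Ob - W \<Longrightarrow> ratio W w \<le> ratio W z"
  using finite_argmax[of "Ob - W" "ratio W"] finite_node_set[OF Ob(1)] assms by blast

lemma gap_step:
  assumes W: "Y \<subseteq> W" "W \<subseteq> V" and gap: "R Ob - R W \<le> gap_bound W"
    and z: "z \<in> Ob - W" "\<And>w. w \<in> Ob - W \<Longrightarrow> ratio W w \<le> ratio W z"
    and u: "u \<in> V - W" "ratio W z \<le> ratio W u"
  shows "R Ob - R (insert u W) \<le> gap_bound (insert u W)"
proof -
  let ?b = "B - sum cost Y" and ?\<rho> = "ratio W z"
  have zV: "z \<in> V" using z(1) Ob by auto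
  have \<rho>: "0 \<le> ?\<rho>" unfolding ratio_def using R_marginal_nonneg[OF W(2) zV] cost_pos[OF zV] by simp
  have "R Ob - R W \<le> (\<Sum>w\<in>Ob - W. R (insert w W) - R W)" using R_le_sum_marginals[OF W(2) Ob(1)] by simp
  also have "\<dots> \<le> (\<Sum>w\<in>Ob - W. ?\<rho> * cost w)"
  proof (rule sum_mono)
    fix w assume w: "w \<in> Ob - W"
    then have "0 < cost w" using cost_pos Ob by auto
    then show "R (insert w W) - R W \<le> ?\<rho> * cost w" using z(2)[OF w] by (simp add: ratio_def field_simps)
  qed
  also have "\<dots> = ?\<rho> * sum cost (Ob - W)" by (simp add: sum_distrib_left)
  also have "\<dots> \<le> ?\<rho> * ?b"
  proof (rule mult_left_mono[OF _ \<rho>])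
    have "sum cost (Ob - W) \<le> sum cost (Ob - Y)"
      using W(1) cost_pos Ob finite_node_set[OF Ob(1)] by (intro sum_mono2) (auto intro: less_imp_le)
    then show "sum cost (Ob - W) \<le> ?b" using budget_left(1) by simp
  qed
  finally have g: "R Ob - R W \<le> ?b * ?\<rho>" by (simp add: mult.commute)
  have cu: "0 < cost u" using cost_pos u(1) by auto
  have m: "?\<rho> * cost u \<le> R (insert u W) - R W" using u(2) cu by (simp add: ratio_def field_simps)
  have "R Ob - R W - (R (insert u W) - R W) \<le>
      exp (- ((sum cost W - sum cost Y + cost u) / ?b)) * (R Ob - R Y)"
    using gap R_marginal_nonneg[OF W(2), of u] u(1) R_mono[OF Y(1) Ob(1)] cu
    by (intro gap_after_step[OF budget_left(2) _ g m]) (auto simp: gap_bound_def)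
  moreover have "sum cost (insert u W) = sum cost W + cost u" using u(1) finite_node_set[OF W(2)] by simp
  ultimately show ?thesis unfolding gap_bound_def by (simp add: algebra_simps)
qed

lemma gap_overflow:
  assumes W: "Y \<subseteq> W" "W \<subseteq> V" and gap: "R Ob - R W \<le> gap_bound W"
    and z: "z \<in> Ob - W" "\<And>w. w \<in> Ob - W \<Longrightarrow> ratio W w \<le> ratio W z"
    and over: "B < sum cost W + cost z"
  shows "(1 - exp (-1)) * R Ob \<le> R W"
proof -
  have zW: "z \<in> V - W" using z(1) Ob by auto
  have "R Ob - R (insert z W) \<le> gap_bound (insert z W)" by (rule gap_step[OF W gap z zW order.refl])
  also have "\<dots> \<le> exp (-1) * (R Ob - R Y)"
    unfolding gap_bound_def
  proof (rule mult_right_mono)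
    have "sum cost (insert z W) = sum cost W + cost z" using zW finite_node_set[OF W(2)] by simp
    then have "1 \<le> (sum cost (insert z W) - sum cost Y) / (B - sum cost Y)"
      using over budget_left(2) by (simp add: field_simps)
    then show "exp (- ((sum cost (insert z W) - sum cost Y) / (B - sum cost Y))) \<le> exp (-1)" by simp
    show "0 \<le> R Ob - R Y" using R_mono[OF Y(1) Ob(1)] by simp
  qed
  finally show ?thesis
    using heavy[of z W] z(1) W R_nonneg[of Y] Y(1) Ob(1) by (intro approx_after_last_step) auto
qed

lemma aug_reach_gap:
  assumes "aug_reach V F lam pth cap cost B S W" and "S = Y"
  shows "Y \<subseteq> W \<and> W \<subseteq> V \<and> sum cost W \<le> B \<and>
    ((1 - exp (-1)) * R Ob \<le> R W \<or> R Ob - R W \<le> gap_bound W)"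
  using assms
proof (induction rule: aug_reach.induct)
  case (start S)
  have "0 \<le> sum cost (Ob - Y)" using Ob(1) by (intro cost_nonneg) auto
  then have "sum cost Y \<le> B" using cost_sum_split[OF Y(1) Ob(1)] Ob(2) by simp
  then show ?case using start Y Ob by (auto simp: gap_bound_def)
next
  case (step S W u)
  have W: "Y \<subseteq> W" "W \<subseteq> V" "sum cost W \<le> B" using step.IH step.prems by auto
  have budget: "Y \<subseteq> insert u W \<and> insert u W \<subseteq> V \<and> sum cost (insert u W) \<le> B"
    using W step.hyps(2,3) finite_node_set[OF W(2)] by auto
  have mono: "R W \<le> R (insert u W)" by (rule R_mono) (use budget in auto)
  show ?case
  proof (cases "(1 - exp (-1)) * R Ob \<le> R W \<or> Ob \<subseteq> W")
    case True
    then have "(1 - exp (-1)) * R Ob \<le> R (insert u W)"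
      using mono approx_R_le_of_subset[of Ob "insert u W"] budget by auto
    then show ?thesis using budget by blast
  next
    case False
    then have gap: "R Ob - R W \<le> gap_bound W" using step.IH step.prems by blast
    obtain z where z: "z \<in> Ob - W" "\<And>w. w \<in> Ob - W \<Longrightarrow> ratio W w \<le> ratio W z"
      using best_ratio_exists False by blast
    have "sum cost W + cost z \<le> B" using gap_overflow[OF W(1,2) gap z] False by (meson not_le)
    then have "ratio W z \<le> ratio W u" using step.hyps(4) z(1) Ob unfolding ratio_def by auto
    then show ?thesis using gap_step[OF W(1,2) gap z, of u] step.hyps(2) budget by blast
  qed
qed

lemma aug_final_guarantee:
  assumes "aug_final V F lam pth cap cost B Y Wf"
  shows "(1 - exp (-1)) * R Ob \<le> R Wf"
proof -
  have reach: "aug_reach V F lam pth cap cost B Y Wf"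
    and full: "\<And>u. u \<in> V - Wf \<Longrightarrow> B < sum cost Wf + cost u"
    using assms unfolding aug_final_def by force+
  have W: "Y \<subseteq> Wf" "Wf \<subseteq> V" using aug_reach_gap[OF reach refl] by auto
  show ?thesis
  proof (rule ccontr)
    assume fail: "\<not> ?thesis"
    then have gap: "R Ob - R Wf \<le> gap_bound Wf" using aug_reach_gap[OF reach refl] by blast
    have "\<not> Ob \<subseteq> Wf" using fail approx_R_le_of_subset W by blast
    then obtain z where z: "z \<in> Ob - Wf" "\<And>w. w \<in> Ob - Wf \<Longrightarrow> ratio Wf w \<le> ratio Wf z"
      using best_ratio_exists by blast
    then show False using gap_overflow[OF W gap z] full[of z] fail Ob by auto
  qed
qed

end

context network begin

definition small_sets :: "('v \<Rightarrow> real) \<Rightarrow> real \<Rightarrow> 'v set set" where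
  "small_sets cost B = {S. S \<subseteq> V \<and> card S \<in> {1, 2} \<and> sum cost S \<le> B}"

definition triple_sets :: "('v \<Rightarrow> real) \<Rightarrow> real \<Rightarrow> 'v set set" where
  "triple_sets cost B = {S. S \<subseteq> V \<and> card S = 3 \<and> sum cost S \<le> B}"

lemma finite_small_sets: "finite (small_sets cost B)" and finite_triple_sets: "finite (triple_sets cost B)"
  unfolding small_sets_def triple_sets_def using finite_V by (auto intro: finite_subset[of _ "Pow V"])

lemma enum_greedy_best:
  assumes "enum_greedy V F lam pth cap cost B U"
  obtains aug where "\<And>S. S \<in> triple_sets cost B \<Longrightarrow> aug_final V F lam pth cap cost B S (aug S)"
    and "U = {} \<or> U \<in> small_sets cost B \<union> aug ` triple_sets cost B"
    and "\<And>W. W \<in> small_sets cost B \<union> aug ` triple_sets cost B \<Longrightarrow> R W \<le> R U"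
proof -
  let ?S = "small_sets cost B" and ?T = "triple_sets cost B"
  have "\<exists>aug. (\<forall>S\<in>?T. aug_final V F lam pth cap cost B S (aug S)) \<and>
      ((?S = {} \<and> aug ` ?T = {} \<and> U = {}) \<or>
       (?S \<noteq> {} \<and> aug ` ?T = {} \<and> best_in V F lam pth cap ?S U) \<or>
       (?S = {} \<and> aug ` ?T \<noteq> {} \<and> best_in V F lam pth cap (aug ` ?T) U) \<or>
       (\<exists>U1 U2. best_in V F lam pth cap ?S U1 \<and> best_in V F lam pth cap (aug ` ?T) U2 \<and>
          U \<in> {U1, U2} \<and> R U = max (R U1) (R U2)))"
    using assms unfolding enum_greedy_def Let_def small_sets_def[symmetric] triple_sets_def[symmetric] .
  then obtain aug where aug: "\<forall>S\<in>?T. aug_final V F lam pth cap cost B S (aug S)"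
    and cases: "(?S = {} \<and> aug ` ?T = {} \<and> U = {}) \<or>
       (?S \<noteq> {} \<and> aug ` ?T = {} \<and> best_in V F lam pth cap ?S U) \<or>
       (?S = {} \<and> aug ` ?T \<noteq> {} \<and> best_in V F lam pth cap (aug ` ?T) U) \<or>
       (\<exists>U1 U2. best_in V F lam pth cap ?S U1 \<and> best_in V F lam pth cap (aug ` ?T) U2 \<and>
          U \<in> {U1, U2} \<and> R U = max (R U1) (R U2))"
    by (elim exE conjE)
  have "(U = {} \<or> U \<in> ?S \<union> aug ` ?T) \<and> (\<forall>W\<in>?S \<union> aug ` ?T. R W \<le> R U)"
    using cases
  proof (elim disjE exE conjE)
    fix U1 U2
    assume "best_in V F lam pth cap ?S U1" "best_in V F lam pth cap (aug ` ?T) U2"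
      "U \<in> {U1, U2}" "R U = max (R U1) (R U2)"
    then show ?thesis unfolding best_in_def by fastforce
  qed (simp_all add: best_in_def)
  then show thesis using that aug by blast
qed

lemma aug_of_heavy_triple_guarantee:
  assumes cpos: "\<forall>v\<in>V. 0 < cost v" and Ob: "Ob \<subseteq> V" "sum cost Ob \<le> B" and c3: "3 \<le> card Ob"
    and aug: "\<And>S. S \<in> triple_sets cost B \<Longrightarrow> aug_final V F lam pth cap cost B S (aug S)"
  shows "\<exists>Y\<in>triple_sets cost B. (1 - exp (-1)) * R Ob \<le> R (aug Y)"
proof -
  obtain Y where Y: "Y \<subseteq> Ob" "card Y = 3"
    and heavy: "\<forall>u\<in>Ob - Y. \<forall>S. Y \<subseteq> S \<longrightarrow> S \<subseteq> V \<longrightarrow> u \<notin> S \<longrightarrow> 3 * (R (insert u S) - R S) \<le> R Y"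
    using heavy_triple_exists[OF Ob(1) c3] by blast
  have "sum cost Y \<le> sum cost Ob"
    using finite_node_set[OF Ob(1)] Y(1) cpos Ob(1) by (intro sum_mono2) (auto intro: less_imp_le)
  then have YT: "Y \<in> triple_sets cost B" unfolding triple_sets_def using Y Ob by auto
  have "(1 - exp (-1)) * R Ob \<le> R (aug Y)"
  proof (cases "Y = Ob")
    case True
    have "aug_reach V F lam pth cap cost B Y (aug Y)" using aug[OF YT] unfolding aug_final_def by blast
    then have "Ob \<subseteq> aug Y" "aug Y \<subseteq> V"
      using aug_reach_within_budget[OF cpos] True YT unfolding triple_sets_def by auto
    then show ?thesis by (rule approx_R_le_of_subset)
  next
    case False
    interpret augmentation V F lam pth cap cost B Ob Y
      using Y(1) False heavy cpos Ob by unfold_locales auto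
    show ?thesis using aug_final_guarantee aug[OF YT] by blast
  qed
  then show ?thesis using YT by blast
qed

lemma enum_greedy_guarantee:
  assumes cpos: "\<forall>v\<in>V. 0 < cost v" and B: "0 \<le> B"
    and eg: "enum_greedy V F lam pth cap cost B U"
  shows "U \<subseteq> V \<and> sum cost U \<le> B \<and>
    (\<forall>Ob. Ob \<subseteq> V \<and> sum cost Ob \<le> B \<longrightarrow> (1 - exp (-1)) * R Ob \<le> R U)"
proof -
  obtain aug where aug: "\<And>S. S \<in> triple_sets cost B \<Longrightarrow> aug_final V F lam pth cap cost B S (aug S)"
    and U: "U = {} \<or> U \<in> small_sets cost B \<union> aug ` triple_sets cost B"
    and best: "\<And>W. W \<in> small_sets cost B \<union> aug ` triple_sets cost B \<Longrightarrow> R W \<le> R U"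
    using enum_greedy_best[OF eg] by blast
  have "aug S \<subseteq> V \<and> sum cost (aug S) \<le> B" if "S \<in> triple_sets cost B" for S
    using aug_reach_within_budget[OF cpos, of B S "aug S"] aug[OF that] that
    unfolding aug_final_def triple_sets_def by blast
  then have U_budget: "U \<subseteq> V \<and> sum cost U \<le> B" using U B unfolding small_sets_def by auto
  moreover have "(1 - exp (-1)) * R Ob \<le> R U" if Ob: "Ob \<subseteq> V" "sum cost Ob \<le> B" for Ob
  proof -
    consider "Ob = {}" | "Ob \<in> small_sets cost B" | "3 \<le> card Ob"
    proof (cases "card Ob = 0")
      case True
      then show thesis using that(1) finite_node_set[OF Ob(1)] by simp
    qed (use that(2,3) Ob in \<open>force simp: small_sets_def\<close>)
    then show ?thesis
    proof cases
      case 1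
      then show ?thesis using R_empty R_nonneg U_budget by simp
    next
      case 2
      then have "R Ob \<le> R U" using best by blast
      moreover have "(1 - exp (-1)) * R Ob \<le> R Ob" by (rule approx_R_le_of_subset[OF subset_refl Ob(1)])
      ultimately show ?thesis by linarith
    next
      case 3
      then show ?thesis using aug_of_heavy_triple_guarantee[OF cpos Ob 3 aug] best by fastforce
    qed
  qed
  ultimately show ?thesis by blast
qed

lemma placement_guarantee:
  assumes cpos: "\<forall>v\<in>V. 0 < cost v" and B: "0 \<le> B" and pl: "placement V F lam pth cap cost B U"
  shows "U \<subseteq> V \<and> sum cost U \<le> B \<and>
    (\<forall>Ob. Ob \<subseteq> V \<and> sum cost Ob \<le> B \<longrightarrow> (1 - exp (-1)) * R Ob \<le> R U)"
proof (cases "\<exists>b. \<forall>v\<in>V. cost v = b")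
  case True
  then obtain b where b: "\<forall>v\<in>V. cost v = b" "submodular_greedy V F lam pth cap b B U"
    using pl unfolding placement_def by auto
  show ?thesis
  proof (cases "V = {}")
    case True
    then have "greedy_reach V F lam pth cap 0 U" using b(2) unfolding submodular_greedy_def by simp
    then have "U = {}" using greedy_reach_card finite_subset by fastforce
    then show ?thesis using True B R_empty by auto
  next
    case False
    then have "0 < b" using b(1) cpos by auto
    then show ?thesis using submodular_greedy_guarantee[OF _ B b(1) b(2)] by blast
  qed
next
  case False
  then have "enum_greedy V F lam pth cap cost B U" using pl unfolding placement_def by auto
  then show ?thesis using enum_greedy_guarantee[OF cpos B] by blast
qed

lemma aug_final_exists:
  "aug_reach V F lam pth cap cost B S W \<Longrightarrow> \<exists>W'. aug_final V F lam pth cap cost B S W'"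
proof (induction "card (V - W)" arbitrary: W rule: less_induct)
  case less
  show ?case
  proof (cases "\<exists>u\<in>V - W. sum cost W + cost u \<le> B")
    case False
    then show ?thesis using less.prems unfolding aug_final_def by blast
  next
    case True
    define Fit where "Fit = {u\<in>V - W. sum cost W + cost u \<le> B}"
    have "finite Fit" "Fit \<noteq> {}" unfolding Fit_def using finite_V True by auto
    then obtain u where u: "u \<in> Fit"
      "\<forall>w\<in>Fit. (R (insert w W) - R W) / cost w \<le> (R (insert u W) - R W) / cost u"
      using finite_argmax[of Fit "\<lambda>w. (R (insert w W) - R W) / cost w"] by blast
    have st: "aug_reach V F lam pth cap cost B S (insert u W)"
      by (rule aug_reach.step[OF less.prems]) (use u in \<open>auto simp: Fit_def\<close>)
    have "card (V - insert u W) < card (V - W)"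
      using u(1) finite_V unfolding Fit_def by (intro psubset_card_mono) auto
    then show ?thesis using less.hyps st by blast
  qed
qed

lemma enum_greedy_exists: "\<exists>U. enum_greedy V F lam pth cap cost B U"
proof -
  let ?S = "small_sets cost B" and ?T = "triple_sets cost B"
  have "\<forall>S\<in>?T. \<exists>W. aug_final V F lam pth cap cost B S W"
    using aug_final_exists aug_reach.start by blast
  then obtain aug where aug: "\<forall>S\<in>?T. aug_final V F lam pth cap cost B S (aug S)" by metis
  have best: "\<exists>U. best_in V F lam pth cap C U" if "finite C" "C \<noteq> {}" for C
    using finite_argmax[OF that, of R] unfolding best_in_def by blast
  have fin: "finite ?S" "finite (aug ` ?T)" using finite_small_sets finite_triple_sets by auto
  have "\<exists>U. (?S = {} \<and> aug ` ?T = {} \<and> U = {}) \<or>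
      (?S \<noteq> {} \<and> aug ` ?T = {} \<and> best_in V F lam pth cap ?S U) \<or>
      (?S = {} \<and> aug ` ?T \<noteq> {} \<and> best_in V F lam pth cap (aug ` ?T) U) \<or>
      (\<exists>U1 U2. best_in V F lam pth cap ?S U1 \<and> best_in V F lam pth cap (aug ` ?T) U2 \<and>
         U \<in> {U1, U2} \<and> R U = max (R U1) (R U2))"
  proof (cases "?S = {}"; cases "aug ` ?T = {}")
    assume "?S = {}" "aug ` ?T = {}" then show ?thesis by blast
  next
    assume "?S = {}" "aug ` ?T \<noteq> {}" then show ?thesis using best[OF fin(2)] by blast
  next
    assume "?S \<noteq> {}" "aug ` ?T = {}" then show ?thesis using best[OF fin(1)] by blast
  next
    assume "?S \<noteq> {}" "aug ` ?T \<noteq> {}"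
    then obtain U1 U2 where "best_in V F lam pth cap ?S U1" "best_in V F lam pth cap (aug ` ?T) U2"
      using best fin by meson
    moreover have "(if R U2 \<le> R U1 then U1 else U2) \<in> {U1, U2} \<and>
      R (if R U2 \<le> R U1 then U1 else U2) = max (R U1) (R U2)" by auto
    ultimately show ?thesis by blast
  qed
  then obtain U where "(?S = {} \<and> aug ` ?T = {} \<and> U = {}) \<or>
      (?S \<noteq> {} \<and> aug ` ?T = {} \<and> best_in V F lam pth cap ?S U) \<or>
      (?S = {} \<and> aug ` ?T \<noteq> {} \<and> best_in V F lam pth cap (aug ` ?T) U) \<or>
      (\<exists>U1 U2. best_in V F lam pth cap ?S U1 \<and> best_in V F lam pth cap (aug ` ?T) U2 \<and>
         U \<in> {U1, U2} \<and> R U = max (R U1) (R U2))" ..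
  then have "enum_greedy V F lam pth cap cost B U"
    unfolding enum_greedy_def Let_def small_sets_def[symmetric] triple_sets_def[symmetric]
    using aug by (intro exI[of _ aug] conjI)
  then show ?thesis ..
qed

lemma placement_exists: "\<exists>U. placement V F lam pth cap cost B U"
proof (cases "\<exists>b. \<forall>v\<in>V. cost v = b")
  case True
  then obtain b where b: "\<forall>v\<in>V. cost v = b" by auto
  obtain U where "greedy_reach V F lam pth cap (min (nat \<lfloor>B / b\<rfloor>) (card V)) U"
    using greedy_reach_exists[of "min (nat \<lfloor>B / b\<rfloor>) (card V)"] by auto
  then show ?thesis unfolding placement_def submodular_greedy_def using True b by auto
next
  case False
  obtain U where "enum_greedy V F lam pth cap cost B U" using enum_greedy_exists ..
  then show ?thesis unfolding placement_def using False by auto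
qed

end

section \<open>Walks in the bipartite graph G'\<close>

definition walk :: "('f \<times> 'v) set \<Rightarrow> ('f + 'v) list \<Rightarrow> bool" where
  "walk E ws \<longleftrightarrow> (\<forall>i. Suc i < length ws \<longrightarrow> adjG E (ws ! i) (ws ! Suc i))"

lemma adjG_cases:
  assumes "adjG E a b"
  shows "(\<exists>f v. a = Inl f \<and> b = Inr v \<and> (f, v) \<in> E \<and> Gedge_of a b = (f, v)) \<or>
         (\<exists>f v. a = Inr v \<and> b = Inl f \<and> (f, v) \<in> E \<and> Gedge_of a b = (f, v))"
  using assms unfolding adjG_def Gedge_of_def
  by (cases a; cases b) auto

lemma adjG_isl: "adjG E a b \<Longrightarrow> isl a \<noteq> isl b"
  unfolding adjG_def by auto

lemma adjG_edge: "adjG E a b \<Longrightarrow> Gedge_of a b \<in> E"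
  using adjG_cases[of E a b] by auto

lemma walk_isl_alternates:
  assumes w: "walk E ws" and i: "i < length ws"
  shows "isl (ws ! i) = (if even i then isl (ws ! 0) else \<not> isl (ws ! 0))"
  using i
proof (induction i)
  case 0 then show ?case by simp
next
  case (Suc i)
  have "adjG E (ws ! i) (ws ! Suc i)" using w Suc.prems unfolding walk_def by auto
  then have "isl (ws ! Suc i) = (\<not> isl (ws ! i))" using adjG_isl by blast
  then show ?case using Suc by auto
qed

lemma alternating_indicator_telescope:
  fixes ws :: "'a list" and a :: 'a
  shows "(\<Sum>i<n. ((if ws ! i = a then 1 else 0) + (if ws ! Suc i = a then 1 else 0)) * (-1::real) ^ i)
     = (if ws ! 0 = a then 1 else 0) - (if ws ! n = a then (-1) ^ n else 0)"
  by (induction n) (auto simp: algebra_simps)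

text \<open>The alternating pattern s, -s, s, ... along a walk leaves the totals at its inner vertices
  unchanged; at its ends they change by s times the following signs.\<close>

definition endpoint_sign :: "('f + 'v) list \<Rightarrow> 'f + 'v \<Rightarrow> real" where
  "endpoint_sign ws a = (if ws ! 0 = a then 1 else 0) - (if ws ! (length ws - 1) = a then (-1) ^ (length ws - 1) else 0)"

lemma rate_change_node_sum:
  assumes w: "walk E ws" and EF: "\<forall>p\<in>E. fst p \<in> F" and finite_F: "finite F" and ne: "ws \<noteq> []"
  shows "(\<Sum>f\<in>F. rate_change ws s f v) = s * endpoint_sign ws (Inr v)"
proof -
  let ?n = "length ws - 1"
  have "(\<Sum>f\<in>F. rate_change ws s f v) =
      (\<Sum>i<?n. \<Sum>f\<in>F. if Gedge_of (ws ! i) (ws ! Suc i) = (f, v) then s * (-1) ^ i else 0)"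
    unfolding rate_change_def by (rule sum.swap)
  also have "\<dots> = (\<Sum>i<?n. s * (((if ws ! i = Inr v then 1 else 0) + (if ws ! Suc i = Inr v then 1 else 0)) * (-1) ^ i))"
  proof (rule sum.cong[OF refl])
    fix i assume i: "i \<in> {..<?n}"
    then have adj: "adjG E (ws ! i) (ws ! Suc i)" using w unfolding walk_def by auto
    from adjG_cases[OF adj] obtain g u where gu: "(ws ! i = Inl g \<and> ws ! Suc i = Inr u) \<or> (ws ! i = Inr u \<and> ws ! Suc i = Inl g)"
      "(g, u) \<in> E" "Gedge_of (ws ! i) (ws ! Suc i) = (g, u)" by blast
    have gF: "g \<in> F" using EF gu(2) by auto
    have "(\<Sum>f\<in>F. if Gedge_of (ws ! i) (ws ! Suc i) = (f, v) then s * (-1) ^ i else 0) =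
          (\<Sum>f\<in>F. if f = g then (if u = v then s * (-1) ^ i else 0) else 0)"
      using gu(3) by (intro sum.cong) auto
    also have "\<dots> = (if u = v then s * (-1) ^ i else 0)" using gF finite_F by simp
    finally show "(\<Sum>f\<in>F. if Gedge_of (ws ! i) (ws ! Suc i) = (f, v) then s * (-1) ^ i else 0) =
        s * (((if ws ! i = Inr v then 1 else 0) + (if ws ! Suc i = Inr v then 1 else 0)) * (-1) ^ i)"
      using gu(1) by auto
  qed
  also have "\<dots> = s * endpoint_sign ws (Inr v)"
    unfolding endpoint_sign_def sum_distrib_left[symmetric] alternating_indicator_telescope by simp
  finally show ?thesis .
qed

lemma rate_change_flow_sum:
  assumes w: "walk E ws" and EU: "\<forall>p\<in>E. snd p \<in> U" and finU: "finite U" and ne: "ws \<noteq> []"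
  shows "(\<Sum>v\<in>U. rate_change ws s f v) = s * endpoint_sign ws (Inl f)"
proof -
  let ?n = "length ws - 1"
  have "(\<Sum>v\<in>U. rate_change ws s f v) =
      (\<Sum>i<?n. \<Sum>v\<in>U. if Gedge_of (ws ! i) (ws ! Suc i) = (f, v) then s * (-1) ^ i else 0)"
    unfolding rate_change_def by (rule sum.swap)
  also have "\<dots> = (\<Sum>i<?n. s * (((if ws ! i = Inl f then 1 else 0) + (if ws ! Suc i = Inl f then 1 else 0)) * (-1) ^ i))"
  proof (rule sum.cong[OF refl])
    fix i assume i: "i \<in> {..<?n}"
    then have adj: "adjG E (ws ! i) (ws ! Suc i)" using w unfolding walk_def by auto
    from adjG_cases[OF adj] obtain g u where gu: "(ws ! i = Inl g \<and> ws ! Suc i = Inr u) \<or> (ws ! i = Inr u \<and> ws ! Suc i = Inl g)"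
      "(g, u) \<in> E" "Gedge_of (ws ! i) (ws ! Suc i) = (g, u)" by blast
    have uU: "u \<in> U" using EU gu(2) by auto
    have "(\<Sum>v\<in>U. if Gedge_of (ws ! i) (ws ! Suc i) = (f, v) then s * (-1) ^ i else 0) =
          (\<Sum>v\<in>U. if v = u then (if g = f then s * (-1) ^ i else 0) else 0)"
      using gu(3) by (intro sum.cong) auto
    also have "\<dots> = (if g = f then s * (-1) ^ i else 0)" using uU finU by simp
    finally show "(\<Sum>v\<in>U. if Gedge_of (ws ! i) (ws ! Suc i) = (f, v) then s * (-1) ^ i else 0) =
        s * (((if ws ! i = Inl f then 1 else 0) + (if ws ! Suc i = Inl f then 1 else 0)) * (-1) ^ i)"
      using gu(1) by auto
  qed
  also have "\<dots> = s * endpoint_sign ws (Inl f)"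
    unfolding endpoint_sign_def sum_distrib_left[symmetric] alternating_indicator_telescope by simp
  finally show ?thesis .
qed

lemma rate_change_support:
  assumes w: "walk E ws" and nz: "rate_change ws s f v \<noteq> 0"
  shows "(f, v) \<in> E"
proof -
  obtain i where i0: "i \<in> {..<length ws - 1}"
      "(if Gedge_of (ws ! i) (ws ! Suc i) = (f, v) then s * (-1) ^ i else 0) \<noteq> (0::real)"
    using sum.not_neutral_contains_not_neutral[OF nz[unfolded rate_change_def]] by blast
  then have i: "i < length ws - 1" "Gedge_of (ws ! i) (ws ! Suc i) = (f, v)"
    by (auto split: if_splits)
  then have "adjG E (ws ! i) (ws ! Suc i)" using w unfolding walk_def by auto
  then show ?thesis using adjG_edge i(2) by metis
qed

lemma Gedge_of_eq_cases:
  assumes "adjG E a b" "adjG E c d" "Gedge_of a b = Gedge_of c d"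
  shows "(a = c \<and> b = d) \<or> (a = d \<and> b = c)"
  using adjG_cases[OF assms(1)] adjG_cases[OF assms(2)] assms(3) by auto

lemma rate_change_path_edge:
  assumes w: "walk E ws" and d: "distinct ws" and j: "Suc j < length ws"
  shows "rate_change ws s (fst (Gedge_of (ws ! j) (ws ! Suc j))) (snd (Gedge_of (ws ! j) (ws ! Suc j))) = s * (-1) ^ j"
proof -
  let ?e = "Gedge_of (ws ! j) (ws ! Suc j)"
  have "rate_change ws s (fst ?e) (snd ?e) = (\<Sum>i<length ws - 1. if i = j then s * (-1) ^ i else 0)"
    unfolding rate_change_def
  proof (rule sum.cong[OF refl])
    fix i assume i: "i \<in> {..<length ws - 1}"
    have "Gedge_of (ws ! i) (ws ! Suc i) = ?e \<longleftrightarrow> i = j"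
    proof
      assume eq: "Gedge_of (ws ! i) (ws ! Suc i) = ?e"
      have a1: "adjG E (ws ! i) (ws ! Suc i)" "adjG E (ws ! j) (ws ! Suc j)"
        using w i j unfolding walk_def by auto
      from Gedge_of_eq_cases[OF a1 eq] have "(ws ! i = ws ! j \<and> ws ! Suc i = ws ! Suc j) \<or> (ws ! i = ws ! Suc j \<and> ws ! Suc i = ws ! j)" .
      then show "i = j"
      proof
        assume "ws ! i = ws ! j \<and> ws ! Suc i = ws ! Suc j"
        then show "i = j" using nth_eq_iff_index_eq[OF d, of i j] i j by auto
      next
        assume h: "ws ! i = ws ! Suc j \<and> ws ! Suc i = ws ! j"
        then have "i = Suc j" using nth_eq_iff_index_eq[OF d, of i "Suc j"] i j by auto
        moreover have "Suc i = j" using h nth_eq_iff_index_eq[OF d, of "Suc i" j] i j by auto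
        ultimately show "i = j" by simp
      qed
    qed simp
    then show "(if Gedge_of (ws ! i) (ws ! Suc i) = (fst ?e, snd ?e) then s * (-1) ^ i else 0) =
          (if i = j then s * (-1) ^ i else 0)" by simp
  qed
  also have "\<dots> = s * (-1) ^ j" using j by simp
  finally show ?thesis .
qed

text \<open>Acyclicity of G' in the form in which it is used: E carries no nonzero circulation.\<close>

definition circulation_free :: "'f set \<Rightarrow> 'v set \<Rightarrow> ('f \<times> 'v) set \<Rightarrow> bool" where
  "circulation_free F U E \<longleftrightarrow> (\<forall>d. (\<forall>f v. (f, v) \<notin> E \<longrightarrow> d f v = (0::real)) \<and>
      (\<forall>v\<in>U. (\<Sum>f\<in>F. d f v) = 0) \<and> (\<forall>f\<in>F. (\<Sum>v\<in>U. d f v) = 0) \<longrightarrow>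
      (\<forall>p\<in>E. d (fst p) (snd p) = 0))"

lemma circulation_free_mono:
  fixes E E' :: "('f \<times> 'v) set"
  assumes "circulation_free F U E" and "E' \<subseteq> E"
  shows "circulation_free F U E'"
  unfolding circulation_free_def
proof (intro allI impI ballI)
  fix d :: "'f \<Rightarrow> 'v \<Rightarrow> real" and p
  assume d: "(\<forall>f v. (f, v) \<notin> E' \<longrightarrow> d f v = 0) \<and> (\<forall>v\<in>U. (\<Sum>f\<in>F. d f v) = 0) \<and>
    (\<forall>f\<in>F. (\<Sum>v\<in>U. d f v) = 0)" and p: "p \<in> E'"
  then have "\<forall>f v. (f, v) \<notin> E \<longrightarrow> d f v = 0" using assms(2) by blast
  then show "d (fst p) (snd p) = 0" using assms d p unfolding circulation_free_def by blast
qed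

lemma is_Gpath_walk: "is_Gpath E v1 f1 xs \<Longrightarrow> walk E xs"
  unfolding is_Gpath_def walk_def by auto

lemma rate_change_single_edge:
  assumes k: "k < length ws - 1" "Gedge_of (ws ! k) (ws ! Suc k) = e"
    and oth: "\<And>i. i < length ws - 1 \<Longrightarrow> i \<noteq> k \<Longrightarrow> Gedge_of (ws ! i) (ws ! Suc i) \<noteq> e"
  shows "rate_change ws s (fst e) (snd e) = s * (-1) ^ k"
proof -
  have "rate_change ws s (fst e) (snd e) = (\<Sum>i<length ws - 1. if i = k then s * (-1) ^ i else 0)"
    unfolding rate_change_def using k oth by (intro sum.cong refl) auto
  also have "\<dots> = s * (-1) ^ k" using k by simp
  finally show ?thesis .
qed

lemma circulation_free_closed_walk:
  assumes ac: "circulation_free F U E" and EFU: "E \<subseteq> F \<times> U" and fin: "finite F" "finite U"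
    and w: "walk E cyc" "cyc \<noteq> []" and closed: "\<And>a. endpoint_sign cyc a = 0" and p: "p \<in> E"
  shows "rate_change cyc s (fst p) (snd p) = 0"
proof -
  have EF: "\<forall>p\<in>E. fst p \<in> F" "\<forall>p\<in>E. snd p \<in> U" using EFU by auto
  have "\<forall>f v. (f, v) \<notin> E \<longrightarrow> rate_change cyc s f v = 0" using rate_change_support[OF w(1)] by blast
  moreover have "\<forall>v\<in>U. (\<Sum>f\<in>F. rate_change cyc s f v) = 0"
    using rate_change_node_sum[OF w(1) EF(1) fin(1) w(2)] closed by simp
  moreover have "\<forall>f\<in>F. (\<Sum>v\<in>U. rate_change cyc s f v) = 0"
    using rate_change_flow_sum[OF w(1) EF(2) fin(2) w(2)] closed by simp
  ultimately show ?thesis using ac p unfolding circulation_free_def by blast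
qed

lemma walk_close_cycle:
  assumes w: "walk E xs" and j: "j < length xs" and adj: "adjG E (xs ! (length xs - 1)) (xs ! j)"
  shows "walk E (drop j xs @ [xs ! j])"
  unfolding walk_def
proof (intro allI impI)
  let ?cyc = "drop j xs @ [xs ! j]"
  fix i assume i: "Suc i < length ?cyc"
  show "adjG E (?cyc ! i) (?cyc ! Suc i)"
  proof (cases "Suc i < length xs - j")
    case True
    then show ?thesis using w j unfolding walk_def by (auto simp: nth_append)
  next
    case False
    then have "Suc i = length xs - j" "j + i = length xs - 1" using i j by auto
    then show ?thesis using adj j by (simp add: nth_append)
  qed
qed

lemma closing_cycle_endpoint_sign:
  assumes w: "walk E xs" and j: "j < length xs" and adj: "adjG E (xs ! (length xs - 1)) (xs ! j)"
  shows "endpoint_sign (drop j xs @ [xs ! j]) a = 0"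
proof -
  have "isl (xs ! (length xs - 1)) = (if even (length xs - 1) then isl (xs ! 0) else \<not> isl (xs ! 0))"
    using walk_isl_alternates[OF w, of "length xs - 1"] j by simp
  moreover have "isl (xs ! j) = (if even j then isl (xs ! 0) else \<not> isl (xs ! 0))"
    using walk_isl_alternates[OF w j] .
  ultimately have "even (length xs - 1) \<noteq> even j" using adjG_isl[OF adj] by auto
  then have "even (length xs - j)" using j by (auto simp: even_diff_nat)
  then show ?thesis unfolding endpoint_sign_def using j by (simp add: nth_append)
qed

lemma closing_cycle_first_edge:
  assumes w: "walk E xs" and d: "distinct xs" and j: "j + 2 < length xs"
    and adj: "adjG E (xs ! (length xs - 1)) (xs ! j)"
  defines "cyc \<equiv> drop j xs @ [xs ! j]"
  shows "rate_change cyc s (fst (Gedge_of (xs ! j) (xs ! Suc j))) (snd (Gedge_of (xs ! j) (xs ! Suc j))) = s"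
proof -
  let ?L = "length xs" and ?e = "Gedge_of (xs ! j) (xs ! Suc j)"
  have lc: "length cyc = ?L - j + 1" unfolding cyc_def using j by simp
  have cn: "cyc ! i = xs ! (j + i)" if "i < ?L - j" for i
    unfolding cyc_def using that j by (simp add: nth_append)
  have wc: "walk E cyc" unfolding cyc_def using walk_close_cycle[OF w _ adj] j by simp
  have a0: "adjG E (xs ! j) (xs ! Suc j)" using w j unfolding walk_def by auto
  have idx: "a = b" if "xs ! a = xs ! b" "a < ?L" "b < ?L" for a b
    using that nth_eq_iff_index_eq[OF d, of a b] by simp
  have "rate_change cyc s (fst ?e) (snd ?e) = s * (-1) ^ 0"
  proof (rule rate_change_single_edge)
    show "0 < length cyc - 1" using lc j by simp
    show "Gedge_of (cyc ! 0) (cyc ! Suc 0) = ?e" using cn[of 0] cn[of 1] j by simp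
    fix i assume i: "i < length cyc - 1" "i \<noteq> 0"
    show "Gedge_of (cyc ! i) (cyc ! Suc i) \<noteq> ?e"
    proof
      assume eq: "Gedge_of (cyc ! i) (cyc ! Suc i) = ?e"
      have "adjG E (cyc ! i) (cyc ! Suc i)" using wc i unfolding walk_def by auto
      from Gedge_of_eq_cases[OF this a0 eq]
      have h: "(cyc ! i = xs ! j \<and> cyc ! Suc i = xs ! Suc j) \<or> (cyc ! i = xs ! Suc j \<and> cyc ! Suc i = xs ! j)" .
      show False
      proof (cases "Suc i < ?L - j")
        case True
        have ci: "cyc ! i = xs ! (j + i)" "cyc ! Suc i = xs ! (j + Suc i)" using cn True by auto
        have lt: "j + i < ?L" "j + Suc i < ?L" "Suc j < ?L" using True j by linarith+
        have "xs ! (j + i) = xs ! j \<longrightarrow> j + i = j" "xs ! (j + i) = xs ! Suc j \<longrightarrow> j + i = Suc j"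
          "xs ! (j + Suc i) = xs ! j \<longrightarrow> j + Suc i = j"
          using idx[of "j + i" j] idx[of "j + i" "Suc j"] idx[of "j + Suc i" j] lt by auto
        then show False using h ci i by auto
      next
        case False
        then have "Suc i = ?L - j" using i lc by simp
        then have "j + i = ?L - 1" "i < ?L - j" using j by linarith+
        then have "cyc ! i = xs ! (?L - 1)" using cn[of i] by simp
        moreover have "?L - 1 \<noteq> j" "?L - 1 \<noteq> Suc j" "?L - 1 < ?L" "Suc j < ?L" using j by linarith+
        then have "xs ! (?L - 1) \<noteq> xs ! j" "xs ! (?L - 1) \<noteq> xs ! Suc j"
          using idx[of "?L - 1" j] idx[of "?L - 1" "Suc j"] j by auto
        ultimately show False using h by simp
      qed
    qed
  qed
  then show ?thesis by simp
qed

lemma no_closing_edge_to_path: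
  assumes w: "walk E xs" and d: "distinct xs" and j: "j + 2 < length xs"
    and adj: "adjG E (xs ! (length xs - 1)) (xs ! j)"
    and ac: "circulation_free F U E" and EFU: "E \<subseteq> F \<times> U" and fin: "finite F" "finite U"
  shows False
proof -
  let ?cyc = "drop j xs @ [xs ! j]" and ?e = "Gedge_of (xs ! j) (xs ! Suc j)"
  have "?e \<in> E" using w j unfolding walk_def by (auto intro: adjG_edge)
  then have "rate_change ?cyc 1 (fst ?e) (snd ?e) = 0"
    using j walk_close_cycle[OF w _ adj] closing_cycle_endpoint_sign[OF w _ adj]
    by (intro circulation_free_closed_walk[OF ac EFU fin]) auto
  then show False using closing_cycle_first_edge[OF w d j adj, of 1] by simp
qed

lemma is_Gpath_snoc:
  assumes p: "is_Gpath E v1 f1 xs" and c: "c \<notin> set xs" and adj: "adjG E (xs ! (length xs - 1)) c"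
  shows "is_Gpath E v1 f1 (xs @ [c])"
  unfolding is_Gpath_def
proof (intro conjI allI impI)
  have L: "2 \<le> length xs" using p unfolding is_Gpath_def by auto
  show "2 \<le> length (xs @ [c])" using L by simp
  have l0: "0 < length xs" "1 < length xs" using L by auto
  show "(xs @ [c]) ! 0 = Inr v1" using p l0 unfolding is_Gpath_def by (simp only: nth_append if_True)
  show "(xs @ [c]) ! 1 = Inl f1" using p l0 unfolding is_Gpath_def by (simp only: nth_append if_True)
  show "distinct (xs @ [c])" using p c unfolding is_Gpath_def by simp
  fix i assume i: "Suc i < length (xs @ [c])"
  show "adjG E ((xs @ [c]) ! i) ((xs @ [c]) ! Suc i)"
  proof (cases "Suc i < length xs")
    case True then show ?thesis using p unfolding is_Gpath_def by (simp add: nth_append)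
  next
    case False
    then have si: "Suc i = length xs" using i by simp
    then have ii: "i = length xs - 1" by simp
    have il: "i < length xs" using ii L by simp
    have "(xs @ [c]) ! i = xs ! (length xs - 1)" using ii il by (simp only: nth_append if_True)
    moreover have "(xs @ [c]) ! Suc i = c" using si by (simp add: nth_append)
    ultimately show ?thesis using adj by simp
  qed
qed

lemma longest_Gpath_last_neighbour:
  assumes lp: "longest_Gpath E v1 f1 xs" and c: "adjG E (xs ! (length xs - 1)) c"
    and ac: "circulation_free F U E" and EFU: "E \<subseteq> F \<times> U" and fin: "finite F" "finite U"
  shows "c = xs ! (length xs - 2)"
proof -
  have p: "is_Gpath E v1 f1 xs" using lp unfolding longest_Gpath_def by auto
  have w: "walk E xs" using is_Gpath_walk[OF p] .
  have d: "distinct xs" using p unfolding is_Gpath_def by auto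
  have "c \<in> set xs"
  proof (rule ccontr)
    assume "c \<notin> set xs"
    then have "is_Gpath E v1 f1 (xs @ [c])" using is_Gpath_snoc[OF p _ c] by blast
    then show False using lp unfolding longest_Gpath_def by fastforce
  qed
  then obtain j where j: "j < length xs" "xs ! j = c" by (auto simp: in_set_conv_nth)
  have "j \<noteq> length xs - 1" using adjG_isl[OF c] j by auto
  moreover have "\<not> j + 2 < length xs"
    using no_closing_edge_to_path[OF w d _ _ ac EFU fin] c j(2) by blast
  ultimately have "j = length xs - 2" using j(1) by linarith
  then show ?thesis using j(2) by simp
qed

lemma longest_Gpath_ends_in_leaf:
  assumes lp: "longest_Gpath E v1 f1 xs"
    and ac: "circulation_free F U E" and EFU: "E \<subseteq> F \<times> U" and fin: "finite F" "finite U"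
    and nl: "\<not> (\<exists>v f. {g. (g, v) \<in> E} = {f})"
  shows "\<exists>fe w. xs ! (length xs - 1) = Inl fe \<and> {w'. (fe, w') \<in> E} = {w} \<and> (fe, w) \<in> E \<and>
    odd (length xs - 1)"
proof -
  have p: "is_Gpath E v1 f1 xs" using lp unfolding longest_Gpath_def by auto
  have w: "walk E xs" using is_Gpath_walk[OF p] .
  let ?L = "length xs"
  have L: "2 \<le> ?L" using p unfolding is_Gpath_def by auto
  define a where "a = xs ! (?L - 1)"
  define b where "b = xs ! (?L - 2)"
  have ba: "adjG E b a"
  proof -
    have "Suc (?L - 2) < ?L" "Suc (?L - 2) = ?L - 1" using L by auto
    then show ?thesis using w unfolding walk_def a_def b_def by metis
  qed
  have nb: "c = b" if "adjG E a c" for c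
    using longest_Gpath_last_neighbour[OF lp _ ac EFU fin] that unfolding a_def b_def by blast
  show ?thesis
  proof (cases a)
    case (Inr v)
    from adjG_cases[OF ba] obtain g where g: "b = Inl g" "(g, v) \<in> E" using Inr by auto
    have "{g'. (g', v) \<in> E} = {g}"
    proof
      show "{g'. (g', v) \<in> E} \<subseteq> {g}"
      proof
        fix g' assume "g' \<in> {g'. (g', v) \<in> E}"
        then have "adjG E a (Inl g')" using Inr unfolding adjG_def by auto
        then show "g' \<in> {g}" using nb g by auto
      qed
    qed (use g in auto)
    then show ?thesis using nl by blast
  next
    case (Inl fe)
    from adjG_cases[OF ba] obtain w where wv: "b = Inr w" "(fe, w) \<in> E" using Inl by auto
    have leaf: "{w'. (fe, w') \<in> E} = {w}"
    proof
      show "{w'. (fe, w') \<in> E} \<subseteq> {w}"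
      proof
        fix w' assume "w' \<in> {w'. (fe, w') \<in> E}"
        then have "adjG E a (Inr w')" using Inl unfolding adjG_def by auto
        then show "w' \<in> {w}" using nb wv by auto
      qed
    qed (use wv in auto)
    have "isl (xs ! (?L - 1)) = (if even (?L - 1) then isl (xs ! 0) else \<not> isl (xs ! 0))"
      by (rule walk_isl_alternates[OF w]) (use L in simp)
    moreover have "\<not> isl (xs ! 0)" using p unfolding is_Gpath_def by auto
    ultimately have "odd (?L - 1)" using Inl unfolding a_def by (auto split: if_splits)
    then show ?thesis using Inl wv leaf unfolding a_def by auto
  qed
qed

lemma longest_Gpath_endpoint_signs:
  assumes lp: "longest_Gpath E v1 f1 p"
    and ac: "circulation_free F U E" and EFU: "E \<subseteq> F \<times> U" and fin: "finite F" "finite U"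
    and nl: "\<not> (\<exists>v f. {g. (g, v) \<in> E} = {f})"
  obtains fe w where "walk E p" "p \<noteq> []" "\<And>v. endpoint_sign p (Inr v) = (if v = v1 then 1 else 0)"
    "\<And>f. endpoint_sign p (Inl f) = (if f = fe then 1 else 0)" "{w'. (fe, w') \<in> E} = {w}" "(fe, w) \<in> E"
proof -
  obtain fe w where e: "p ! (length p - 1) = Inl fe" "{w'. (fe, w') \<in> E} = {w}" "(fe, w) \<in> E"
    "odd (length p - 1)"
    using longest_Gpath_ends_in_leaf[OF lp ac EFU fin nl] by blast
  have gp: "is_Gpath E v1 f1 p" using lp unfolding longest_Gpath_def by auto
  have p0: "p ! 0 = Inr v1" and ne: "p \<noteq> []" using gp unfolding is_Gpath_def by auto
  have "endpoint_sign p (Inr v) = (if v = v1 then 1 else 0)" for v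
    unfolding endpoint_sign_def using p0 e(1) by auto
  moreover have "endpoint_sign p (Inl f) = (if f = fe then 1 else 0)" for f
    unfolding endpoint_sign_def using p0 e(1) e(4) by (auto simp: power_minus_odd)
  ultimately show thesis using that is_Gpath_walk[OF gp] ne e(2,3) by blast
qed

lemma walk_vertices:
  assumes w: "walk E xs" and L: "2 \<le> length xs"
  shows "set xs \<subseteq> Inl ` fst ` E \<union> Inr ` snd ` E"
proof
  fix a assume "a \<in> set xs"
  then obtain i where i: "i < length xs" "xs ! i = a" by (auto simp: in_set_conv_nth)
  obtain j where j: "Suc j < length xs" "a = xs ! j \<or> a = xs ! Suc j"
  proof (cases "Suc i < length xs")
    case False
    then have "Suc (i - 1) = i" "Suc (i - 1) < length xs" using i L by auto
    then show thesis using that[of "i - 1"] i by simp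
  qed (use that i in blast)
  then have "adjG E (xs ! j) (xs ! Suc j)" using w unfolding walk_def by blast
  then obtain f v where "(f, v) \<in> E" "xs ! j = Inl f \<and> xs ! Suc j = Inr v \<or> xs ! j = Inr v \<and> xs ! Suc j = Inl f"
    using adjG_cases by blast
  then show "a \<in> Inl ` fst ` E \<union> Inr ` snd ` E" using j(2) by force
qed

lemma longest_Gpath_exists:
  assumes e: "(f1, v1) \<in> E" and finE: "finite E"
  shows "\<exists>xs. longest_Gpath E v1 f1 xs"
proof -
  define VS where "VS = Inl ` fst ` E \<union> Inr ` snd ` E"
  have lenb: "length xs < Suc (card VS)" if p: "is_Gpath E v1 f1 xs" for xs
  proof -
    have "distinct xs" "2 \<le> length xs" using p unfolding is_Gpath_def by auto
    then have "length xs = card (set xs)" by (simp add: distinct_card)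
    also have "\<dots> \<le> card VS"
      using walk_vertices[OF is_Gpath_walk[OF p] \<open>2 \<le> length xs\<close>] finE
      unfolding VS_def by (intro card_mono) auto
    finally show ?thesis by simp
  qed
  have "is_Gpath E v1 f1 [Inr v1, Inl f1]"
    using e unfolding is_Gpath_def adjG_def by (auto simp: less_Suc_eq)
  then obtain xs where "is_Gpath E v1 f1 xs" "\<forall>ys. is_Gpath E v1 f1 ys \<longrightarrow> length ys \<le> length xs"
    using ex_has_greatest_nat[of "is_Gpath E v1 f1" _ length "Suc (card VS)"] lenb by blast
  then show ?thesis unfolding longest_Gpath_def by blast
qed

lemma rate_change_first_edge:
  assumes p: "is_Gpath E v1 f1 p"
  shows "rate_change p s f1 v1 = s"
proof -
  have w: "walk E p" using is_Gpath_walk[OF p] .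
  have d: "distinct p" and L: "Suc 0 < length p" and p01: "p ! 0 = Inr v1" "p ! 1 = Inl f1"
    using p unfolding is_Gpath_def by auto
  have e: "Gedge_of (p ! 0) (p ! Suc 0) = (f1, v1)" using p01 unfolding Gedge_of_def by simp
  show ?thesis using rate_change_path_edge[OF w d L, of s] e by simp
qed

lemma rate_change_other_first_edge:
  assumes p: "is_Gpath E v1 f2 p" and ne: "f1 \<noteq> f2"
  shows "rate_change p s f1 v1 = 0"
  unfolding rate_change_def
proof (rule sum.neutral, rule ballI)
  have w: "walk E p" using is_Gpath_walk[OF p] .
  have d: "distinct p" and p01: "p ! 0 = Inr v1" "p ! 1 = Inl f2" and L: "2 \<le> length p"
    using p unfolding is_Gpath_def by auto
  fix i assume i: "i \<in> {..<length p - 1}"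
  have "Gedge_of (p ! i) (p ! Suc i) \<noteq> (f1, v1)"
  proof
    assume eq: "Gedge_of (p ! i) (p ! Suc i) = (f1, v1)"
    have "adjG E (p ! i) (p ! Suc i)" using w i unfolding walk_def by auto
    from adjG_cases[OF this] eq
    have h: "(p ! i = Inl f1 \<and> p ! Suc i = Inr v1) \<or> (p ! i = Inr v1 \<and> p ! Suc i = Inl f1)" by auto
    then show False
    proof
      assume "p ! i = Inl f1 \<and> p ! Suc i = Inr v1"
      then have "p ! Suc i = p ! 0" using p01 by simp
      moreover have "Suc i < length p" "0 < length p" using i L by auto
      ultimately have "Suc i = 0" using nth_eq_iff_index_eq[OF d, of "Suc i" 0] by blast
      then show False by simp
    next
      assume h2: "p ! i = Inr v1 \<and> p ! Suc i = Inl f1"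
      then have "p ! i = p ! 0" using p01 by simp
      moreover have "i < length p" "0 < length p" using i L by auto
      ultimately have "i = 0" using nth_eq_iff_index_eq[OF d, of i 0] by blast
      then show False using h2 p01 ne by simp
    qed
  qed
  then show "(if Gedge_of (p ! i) (p ! Suc i) = (f1, v1) then s * (-1) ^ i else 0) = 0" by simp
qed

section \<open>MCA, Phase I: the potential invariant\<close>

locale mca_setting = network V F lam pth cap
  for V :: "'v set" and F :: "'f set" and lam pth cap +
  fixes U :: "'v set"
  assumes UV: "U \<subseteq> V"
    and lam_cap: "\<And>f v. f \<in> F \<Longrightarrow> v \<in> V \<Longrightarrow> lam f \<le> cap v"
begin

abbreviation G where "G y \<equiv> Gedges F pth U y"
abbreviation ar where "ar asg v \<equiv> assigned_rate F lam asg v"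

lemma finite_U: "finite U" using finite_node_set[OF UV] .

lemma Gedges_iff: "(f, v) \<in> G y \<longleftrightarrow> f \<in> F \<and> v \<in> U \<and> v \<in> pth f \<and> 0 < y f v \<and> y f v < 1"
  unfolding Gedges_def by auto

lemma Gedges_sub: "G y \<subseteq> F \<times> U" unfolding Gedges_def by auto

lemma finite_Gedges: "finite (G y)" using Gedges_sub finite_F finite_U by (meson finite_SigmaI finite_subset)

definition assigned_total :: "('f \<Rightarrow> 'v option) \<Rightarrow> real" where
  "assigned_total asg = (\<Sum>f\<in>F. if asg f \<noteq> None then lam f else 0)"
definition fractional_total :: "('f \<Rightarrow> 'v \<Rightarrow> real) \<Rightarrow> real" where
  "fractional_total y = (\<Sum>f\<in>F. \<Sum>w\<in>U. lam f * y f w)"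
definition isolated_nodes :: "('f \<Rightarrow> 'v \<Rightarrow> real) \<Rightarrow> 'v set" where
  "isolated_nodes y = {v\<in>U. \<forall>f. (f, v) \<notin> G y}"
definition isolated_assigned :: "('f \<Rightarrow> 'v option) \<Rightarrow> ('f \<Rightarrow> 'v \<Rightarrow> real) \<Rightarrow> real" where
  "isolated_assigned asg y = (\<Sum>v\<in>isolated_nodes y. ar asg v)"

text \<open>Besides keeping (asg, y) a valid partial rounding on an acyclic G',
  it carries the potential bound of the analysis: the optimum of Q2 is at most the assigned rate,
  plus the fractional rate, plus the rate assigned to nodes that have lost all their fractional
  edges.\<close>

definition phase1_inv :: "('f \<Rightarrow> 'v option) \<Rightarrow> ('f \<Rightarrow> 'v \<Rightarrow> real) \<Rightarrow> bool" where
  "phase1_inv asg y \<longleftrightarrow>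
    (\<forall>f\<in>F. \<forall>v. asg f = Some v \<longrightarrow> v \<in> U \<and> v \<in> pth f \<and> (\<forall>w\<in>U. y f w = 0)) \<and>
    (\<forall>f\<in>F. \<forall>w\<in>U. 0 \<le> y f w \<and> y f w < 1 \<and> (w \<notin> pth f \<longrightarrow> y f w = 0)) \<and>
    (\<forall>f\<in>F. (\<Sum>w\<in>U. y f w) \<le> 1) \<and>
    (\<forall>v\<in>U. ar asg v + (\<Sum>f\<in>F. lam f * y f v) \<le> cap v) \<and>
    circulation_free F U (G y) \<and>
    R U \<le> assigned_total asg + fractional_total y + isolated_assigned asg y"

lemma phase1_invD:
  assumes "phase1_inv asg y"
  shows "\<And>f v. f \<in> F \<Longrightarrow> asg f = Some v \<Longrightarrow> v \<in> U \<and> v \<in> pth f \<and> (\<forall>w\<in>U. y f w = 0)"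
    and "\<And>f w. f \<in> F \<Longrightarrow> w \<in> U \<Longrightarrow> 0 \<le> y f w \<and> y f w < 1 \<and> (w \<notin> pth f \<longrightarrow> y f w = 0)"
    and "\<And>f. f \<in> F \<Longrightarrow> (\<Sum>w\<in>U. y f w) \<le> 1"
    and "\<And>v. v \<in> U \<Longrightarrow> ar asg v + (\<Sum>f\<in>F. lam f * y f v) \<le> cap v"
    and "circulation_free F U (G y)"
    and "R U \<le> assigned_total asg + fractional_total y + isolated_assigned asg y"
  using assms unfolding phase1_inv_def by auto

lemma nonzero_in_Gedges: "phase1_inv asg y \<Longrightarrow> f \<in> F \<Longrightarrow> w \<in> U \<Longrightarrow> y f w \<noteq> 0 \<Longrightarrow> (f, w) \<in> G y"
  using phase1_invD(2)[of asg y f w] unfolding Gedges_iff by force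

lemma isolated_nodes_antimono: "G y' \<subseteq> G y \<Longrightarrow> isolated_nodes y \<subseteq> isolated_nodes y'"
  unfolding isolated_nodes_def by auto

lemma assigned_rate_eq: "ar asg v = (\<Sum>f\<in>F. if asg f = Some v then lam f else 0)"
  unfolding assigned_rate_def using finite_F by (simp add: sum.inter_filter)

lemma assigned_rate_nonneg: "0 \<le> ar asg v"
  unfolding assigned_rate_eq using lam_pos by (intro sum_nonneg) (auto intro: less_imp_le)

lemma isolated_assigned_nonneg: "0 \<le> isolated_assigned asg y"
  unfolding isolated_assigned_def by (rule sum_nonneg) (rule assigned_rate_nonneg)

lemma finite_isolated_nodes: "finite (isolated_nodes y)" unfolding isolated_nodes_def using finite_U by auto

lemma isolated_assigned_mono:
  assumes sub: "isolated_nodes y \<subseteq> isolated_nodes y'" and arle: "\<And>w. w \<in> isolated_nodes y \<Longrightarrow> ar asg w \<le> ar asg' w"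
  shows "isolated_assigned asg y \<le> isolated_assigned asg' y'"
proof -
  have "isolated_assigned asg y \<le> (\<Sum>w\<in>isolated_nodes y. ar asg' w)" unfolding isolated_assigned_def using arle by (intro sum_mono) auto
  also have "\<dots> \<le> isolated_assigned asg' y'" unfolding isolated_assigned_def using sub finite_isolated_nodes assigned_rate_nonneg by (intro sum_mono2) auto
  finally show ?thesis .
qed

lemma isolated_assigned_gain:
  assumes sub: "isolated_nodes y \<subseteq> isolated_nodes y'" and v: "v \<in> isolated_nodes y'" "v \<notin> isolated_nodes y"
    and arle: "\<And>w. w \<in> isolated_nodes y \<Longrightarrow> ar asg w \<le> ar asg' w"
  shows "isolated_assigned asg y + ar asg' v \<le> isolated_assigned asg' y'"
proof -
  have "isolated_assigned asg y \<le> (\<Sum>w\<in>isolated_nodes y. ar asg' w)" unfolding isolated_assigned_def using arle by (intro sum_mono) auto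
  also have "\<dots> + ar asg' v = (\<Sum>w\<in>insert v (isolated_nodes y). ar asg' w)" using v(2) finite_isolated_nodes by simp
  also have "\<dots> \<le> isolated_assigned asg' y'" unfolding isolated_assigned_def using sub v finite_isolated_nodes assigned_rate_nonneg by (intro sum_mono2) auto
  finally show ?thesis by simp
qed

lemma phase1_inv_assigned_rate_le_cap: "phase1_inv asg y \<Longrightarrow> v \<in> U \<Longrightarrow> ar asg v \<le> cap v"
proof -
  assume I: "phase1_inv asg y" and v: "v \<in> U"
  have "0 \<le> (\<Sum>f\<in>F. lam f * y f v)" using I v lam_pos unfolding phase1_inv_def
    by (intro sum_nonneg mult_nonneg_nonneg) (auto intro: less_imp_le)
  then show ?thesis using I v unfolding phase1_inv_def by force
qed

lemma phase1_inv_final: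
  assumes I: "phase1_inv asg y" and G0: "G y = {}"
  shows "R U \<le> 2 * assigned_total asg"
proof -
  have y0: "y f w = 0" if "f \<in> F" "w \<in> U" for f w
  proof -
    have "0 \<le> y f w" "y f w < 1" "w \<notin> pth f \<longrightarrow> y f w = 0" using I that unfolding phase1_inv_def by auto
    moreover have "(f, w) \<notin> G y" using G0 by auto
    ultimately show ?thesis using that unfolding Gedges_iff by force
  qed
  have "fractional_total y = 0" unfolding fractional_total_def using y0 by simp
  moreover have "isolated_nodes y = U" unfolding isolated_nodes_def using G0 by auto
  moreover have "(\<Sum>v\<in>U. ar asg v) = assigned_total asg"
  proof -
    have "(\<Sum>v\<in>U. ar asg v) = (\<Sum>v\<in>U. \<Sum>f\<in>F. if asg f = Some v then lam f else 0)" unfolding assigned_rate_eq ..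
    also have "\<dots> = (\<Sum>f\<in>F. \<Sum>v\<in>U. if asg f = Some v then lam f else 0)" by (rule sum.swap)
    also have "\<dots> = (\<Sum>f\<in>F. if asg f \<noteq> None then lam f else 0)"
    proof (rule sum.cong[OF refl])
      fix f assume f: "f \<in> F"
      show "(\<Sum>v\<in>U. if asg f = Some v then lam f else 0) = (if asg f \<noteq> None then lam f else 0)"
      proof (cases "asg f")
        case None then show ?thesis by simp
      next
        case (Some v)
        then have "v \<in> U" using I f unfolding phase1_inv_def by auto
        then show ?thesis using Some finite_U by (simp add: sum.delta)
      qed
    qed
    finally show ?thesis unfolding assigned_total_def .
  qed
  ultimately show ?thesis using I unfolding phase1_inv_def isolated_assigned_def by simp
qed

end

text \<open>The start of Phase I: x0 is an optimal basic solution of Q2 on U, every flow routed entirely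
  through one node is assigned to it, and the remaining flows keep their fractions.\<close>

locale phase1_start = mca_setting V F lam pth cap U
  for V :: "'v set" and F :: "'f set" and lam pth cap U +
  fixes x0 :: "'f \<Rightarrow> 'v \<Rightarrow> real" and asg0 :: "'f \<Rightarrow> 'v option"
  assumes x0_basic: "basic U x0" and x0_opt: "obj U x0 = R U"
    and asg0: "\<And>f. if f \<in> F \<and> (\<exists>v\<in>U \<inter> pth f. x0 f v / lam f = 1)
      then (\<exists>v\<in>U \<inter> pth f. x0 f v / lam f = 1 \<and> asg0 f = Some v) else asg0 f = None"
begin

definition y1 :: "'f \<Rightarrow> 'v \<Rightarrow> real" where
  "y1 = (\<lambda>f. if asg0 f \<noteq> None then (\<lambda>_. 0) else (\<lambda>v. x0 f v / lam f))"

lemma x0_feasible: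
  "\<forall>f\<in>F. \<forall>v\<in>V. 0 \<le> x0 f v" "\<forall>v\<in>U. load x0 v \<le> cap v" "supported U x0"
  "\<forall>f\<in>F. flow_total U x0 f \<le> lam f"
  using basic_feasible[OF x0_basic] unfolding feasible_Q2_iff by auto

lemma x0_bounds:
  assumes "f \<in> F" "w \<in> U"
  shows "0 \<le> x0 f w" and "x0 f w \<le> lam f" and "w \<notin> pth f \<Longrightarrow> x0 f w = 0"
proof -
  show nonneg: "0 \<le> x0 f w" using x0_feasible(1) assms UV by auto
  have "x0 f w \<le> flow_total U x0 f"
    unfolding flow_total_def using assms x0_feasible(1) UV finite_U by (intro member_le_sum) auto
  then show "x0 f w \<le> lam f" using x0_feasible(4) assms by force
  show "w \<notin> pth f \<Longrightarrow> x0 f w = 0" using x0_feasible(3) assms UV unfolding supported_def by auto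
qed

lemma asg0_Some:
  assumes "asg0 f = Some v"
  shows "f \<in> F" and "v \<in> U" and "v \<in> pth f" and "x0 f v = lam f"
proof -
  have c: "f \<in> F \<and> (\<exists>v\<in>U \<inter> pth f. x0 f v / lam f = 1)"
    using asg0[of f] assms by (auto split: if_splits)
  then have "\<exists>v'\<in>U \<inter> pth f. x0 f v' / lam f = 1 \<and> asg0 f = Some v'" using asg0[of f] by simp
  then have "v \<in> U \<inter> pth f" "x0 f v / lam f = 1" using assms by auto
  then show "f \<in> F" "v \<in> U" "v \<in> pth f" "x0 f v = lam f" using c lam_pos[of f] by (auto simp: field_simps)
qed

lemma asg0_None:
  assumes "f \<in> F" "asg0 f = None" "w \<in> U"
  shows "x0 f w < lam f"
proof -
  have "x0 f w \<noteq> lam f"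
  proof
    assume eq: "x0 f w = lam f"
    then have "w \<in> pth f" using x0_bounds(3)[OF assms(1,3)] lam_pos[OF assms(1)] by auto
    moreover have "x0 f w / lam f = 1" using eq lam_pos[OF assms(1)] by simp
    ultimately have "f \<in> F \<and> (\<exists>v\<in>U \<inter> pth f. x0 f v / lam f = 1)" using assms by blast
    then have "\<exists>v\<in>U \<inter> pth f. x0 f v / lam f = 1 \<and> asg0 f = Some v" using asg0[of f] by simp
    then show False using assms(2) by auto
  qed
  then show ?thesis using x0_bounds(2)[OF assms(1,3)] by simp
qed

lemma lam_mult_y1: "f \<in> F \<Longrightarrow> asg0 f = None \<Longrightarrow> lam f * y1 f w = x0 f w"
  unfolding y1_def using lam_pos[of f] by simp

lemma y1_bounds:
  assumes f: "f \<in> F" and w: "w \<in> U"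
  shows "0 \<le> y1 f w \<and> y1 f w < 1 \<and> (w \<notin> pth f \<longrightarrow> y1 f w = 0)"
  using x0_bounds[OF f w] asg0_None[OF f _ w] lam_pos[OF f] unfolding y1_def by auto

lemma y1_row_sum: "f \<in> F \<Longrightarrow> (\<Sum>w\<in>U. y1 f w) \<le> 1"
  using x0_feasible(4) lam_pos[of f]
  by (auto simp: y1_def flow_total_def sum_divide_distrib[symmetric])

lemma y1_load:
  assumes v: "v \<in> U"
  shows "ar asg0 v + (\<Sum>f\<in>F. lam f * y1 f v) \<le> cap v"
proof -
  have "ar asg0 v + (\<Sum>f\<in>F. lam f * y1 f v) =
      (\<Sum>f\<in>F. (if asg0 f = Some v then lam f else 0) + lam f * y1 f v)"
    unfolding assigned_rate_eq by (simp add: sum.distrib)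
  also have "\<dots> \<le> (\<Sum>f\<in>F. x0 f v)"
  proof (rule sum_mono)
    fix f assume f: "f \<in> F"
    show "(if asg0 f = Some v then lam f else 0) + lam f * y1 f v \<le> x0 f v"
    proof (cases "asg0 f")
      case None then show ?thesis using lam_mult_y1[OF f] by simp
    next
      case (Some u)
      then show ?thesis unfolding y1_def using asg0_Some[OF Some] x0_bounds(1)[OF f v] by auto
    qed
  qed
  also have "\<dots> \<le> cap v" using x0_feasible(2) v unfolding load_def by auto
  finally show ?thesis .
qed

lemma y1_circulation_free: "circulation_free F U (G y1)"
  unfolding circulation_free_def
proof (intro allI impI)
  fix d :: "'f \<Rightarrow> 'v \<Rightarrow> real"
  assume d: "(\<forall>f v. (f, v) \<notin> G y1 \<longrightarrow> d f v = 0) \<and> (\<forall>v\<in>U. (\<Sum>f\<in>F. d f v) = 0) \<and>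
    (\<forall>f\<in>F. (\<Sum>v\<in>U. d f v) = 0)"
  have "active_direction U x0 d"
    unfolding active_direction_def
  proof (intro conjI ballI impI)
    show "supported U d" unfolding supported_def using d Gedges_iff by blast
  next
    fix f v assume "f \<in> F" "v \<in> U \<inter> pth f" "x0 f v = 0"
    then have "(f, v) \<notin> G y1" unfolding Gedges_iff y1_def by auto
    then show "d f v = 0" using d by blast
  next
    fix v assume "v \<in> U" then show "load d v = 0" using d unfolding load_def by blast
  next
    fix f assume "f \<in> F" then show "flow_total U d f = 0" using d unfolding flow_total_def by blast
  qed
  then have "\<forall>f\<in>F. \<forall>v\<in>V. d f v = 0" using x0_basic unfolding basic_iff by blast
  then show "\<forall>p\<in>G y1. d (fst p) (snd p) = 0" using Gedges_sub UV by fastforce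
qed

lemma y1_potential: "R U \<le> assigned_total asg0 + fractional_total y1 + isolated_assigned asg0 y1"
proof -
  have "R U = (\<Sum>f\<in>F. flow_total U x0 f)" using x0_opt obj_eq_sum_flow_total[OF UV x0_feasible(3)] by simp
  also have "\<dots> = (\<Sum>f\<in>F. (if asg0 f \<noteq> None then lam f else 0) + (\<Sum>w\<in>U. lam f * y1 f w))"
  proof (rule sum.cong[OF refl])
    fix f assume f: "f \<in> F"
    show "flow_total U x0 f = (if asg0 f \<noteq> None then lam f else 0) + (\<Sum>w\<in>U. lam f * y1 f w)"
    proof (cases "asg0 f")
      case None
      then show ?thesis unfolding flow_total_def using lam_mult_y1[OF f] by simp
    next
      case (Some v)
      have "x0 f v \<le> flow_total U x0 f"
        unfolding flow_total_def using asg0_Some[OF Some] x0_bounds(1) finite_U by (intro member_le_sum) auto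
      then have "flow_total U x0 f = lam f" using x0_feasible(4) f asg0_Some[OF Some] by force
      then show ?thesis unfolding y1_def using Some by simp
    qed
  qed
  also have "\<dots> = assigned_total asg0 + fractional_total y1"
    unfolding assigned_total_def fractional_total_def by (simp add: sum.distrib)
  finally show ?thesis using isolated_assigned_nonneg[of asg0 y1] by simp
qed

lemma phase1_inv_start: "phase1_inv asg0 y1"
  unfolding phase1_inv_def
  using asg0_Some y1_bounds y1_row_sum y1_load y1_circulation_free y1_potential
  by (auto simp: y1_def)

end

subsection \<open>Step 1: leaves of G'\<close>

context mca_setting begin

lemma zeroing_preserves_bounds:
  assumes I: "phase1_inv asg y" and z: "\<And>g w. y' g w = y g w \<or> y' g w = 0"
  shows "G y' \<subseteq> G y"
    and "\<forall>g\<in>F. \<forall>w\<in>U. 0 \<le> y' g w \<and> y' g w < 1 \<and> (w \<notin> pth g \<longrightarrow> y' g w = 0)"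
    and "\<forall>g\<in>F. (\<Sum>w\<in>U. y' g w) \<le> 1"
    and "\<forall>u\<in>U. (\<Sum>g\<in>F. lam g * y' g u) \<le> (\<Sum>g\<in>F. lam g * y g u)"
    and "circulation_free F U (G y')"
proof -
  have le: "y' g w \<le> y g w" if "g \<in> F" "w \<in> U" for g w
    using z[of g w] phase1_invD(2)[OF I that] by auto
  show Gs: "G y' \<subseteq> G y"
  proof
    fix p assume "p \<in> G y'"
    then show "p \<in> G y" using z[of "fst p" "snd p"] unfolding Gedges_def by (cases p) auto
  qed
  show "\<forall>g\<in>F. \<forall>w\<in>U. 0 \<le> y' g w \<and> y' g w < 1 \<and> (w \<notin> pth g \<longrightarrow> y' g w = 0)"
    using phase1_invD(2)[OF I] z by (metis order.refl zero_less_one)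
  show "\<forall>g\<in>F. (\<Sum>w\<in>U. y' g w) \<le> 1"
    using phase1_invD(3)[OF I] le by (meson order_trans sum_mono)
  show "\<forall>u\<in>U. (\<Sum>g\<in>F. lam g * y' g u) \<le> (\<Sum>g\<in>F. lam g * y g u)"
    using le lam_pos by (intro ballI sum_mono mult_left_mono) (auto intro: less_imp_le)
  show "circulation_free F U (G y')" by (rule circulation_free_mono[OF phase1_invD(5)[OF I] Gs])
qed

lemma fractional_total_clear_entry:
  assumes "f \<in> F" "v \<in> U"
  shows "fractional_total y = fractional_total (y(f := (y f)(v := 0))) + lam f * y f v"
proof -
  let ?c = "lam f * y f v"
  have "fractional_total y = (\<Sum>g\<in>F. \<Sum>w\<in>U. lam g * (y(f := (y f)(v := 0))) g w +
      (if g = f \<and> w = v then ?c else 0))"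
    unfolding fractional_total_def by (intro sum.cong refl) auto
  also have "\<dots> = fractional_total (y(f := (y f)(v := 0))) + (\<Sum>g\<in>F. \<Sum>w\<in>U. if g = f \<and> w = v then ?c else 0)"
    unfolding fractional_total_def by (simp add: sum.distrib)
  also have "(\<Sum>g\<in>F. \<Sum>w\<in>U. if g = f \<and> w = v then ?c else 0) = (\<Sum>g\<in>F. if g = f then ?c else 0)"
    using assms finite_U by (intro sum.cong refl) (simp add: if_distrib sum.delta)
  also have "\<dots> = ?c" using assms finite_F by (simp add: sum.delta)
  finally show ?thesis .
qed

lemma fractional_total_clear_row:
  assumes "f \<in> F"
  shows "fractional_total y = fractional_total (y(f := (\<lambda>_. 0))) + (\<Sum>w\<in>U. lam f * y f w)"
proof -
  have "fractional_total y = (\<Sum>g\<in>F. (\<Sum>w\<in>U. lam g * (y(f := (\<lambda>_. 0))) g w) +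
      (if g = f then (\<Sum>w\<in>U. lam f * y f w) else 0))"
    unfolding fractional_total_def by (intro sum.cong refl) auto
  also have "\<dots> = fractional_total (y(f := (\<lambda>_. 0))) + (\<Sum>w\<in>U. lam f * y f w)"
    unfolding fractional_total_def using assms finite_F by (simp add: sum.distrib sum.delta)
  finally show ?thesis .
qed

lemma drop_preserves_inv:
  assumes I: "phase1_inv asg y" and single: "{g. (g, v) \<in> G y} = {f}"
    and ge: "lam f * y f v \<le> ar asg v"
  defines "y' \<equiv> y(f := (y f)(v := 0))"
  shows "phase1_inv asg y' \<and> G y' \<subseteq> G y \<and> (f, v) \<notin> G y'"
proof -
  have fv: "(f, v) \<in> G y" using single by auto
  then have fvp: "f \<in> F" "v \<in> U" unfolding Gedges_iff by auto
  have z: "y' g w = y g w \<or> y' g w = 0" for g w unfolding y'_def by auto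
  note bounds = zeroing_preserves_bounds[OF I z]
  have nfv: "(f, v) \<notin> G y'" unfolding Gedges_iff y'_def by auto
  have "v \<in> isolated_nodes y'" "v \<notin> isolated_nodes y"
    unfolding isolated_nodes_def using fvp bounds(1) single nfv fv by auto
  then have "isolated_assigned asg y + ar asg v \<le> isolated_assigned asg y'"
    by (intro isolated_assigned_gain[OF isolated_nodes_antimono[OF bounds(1)]]) simp_all
  then have "R U \<le> assigned_total asg + fractional_total y' + isolated_assigned asg y'"
    using phase1_invD(6)[OF I] fractional_total_clear_entry[OF fvp, of y] ge unfolding y'_def by linarith
  moreover have "\<forall>u\<in>U. ar asg u + (\<Sum>g\<in>F. lam g * y' g u) \<le> cap u"
    using bounds(4) phase1_invD(4)[OF I] by (meson add_left_mono order_trans)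
  moreover have "\<forall>g\<in>F. \<forall>u. asg g = Some u \<longrightarrow> u \<in> U \<and> u \<in> pth g \<and> (\<forall>w\<in>U. y' g w = 0)"
    using phase1_invD(1)[OF I] unfolding y'_def by auto
  ultimately show ?thesis unfolding phase1_inv_def using bounds nfv by blast
qed

definition swap_assignment :: "('f \<Rightarrow> 'v option) \<Rightarrow> 'f \<Rightarrow> 'v \<Rightarrow> 'f \<Rightarrow> 'v option" where
  "swap_assignment asg f v = (\<lambda>g. if g = f then Some v else if asg g = Some v then None else asg g)"

lemma assigned_rate_swap:
  assumes f: "f \<in> F" and fN: "asg f = None"
  shows "ar (swap_assignment asg f v) v = lam f"
    and "w \<noteq> v \<Longrightarrow> ar (swap_assignment asg f v) w = ar asg w"
    and "assigned_total (swap_assignment asg f v) = assigned_total asg + lam f - ar asg v"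
proof -
  have "ar (swap_assignment asg f v) v = (\<Sum>g\<in>F. if g = f then lam g else 0)"
    unfolding assigned_rate_eq by (intro sum.cong refl) (auto simp: swap_assignment_def)
  then show "ar (swap_assignment asg f v) v = lam f" using f finite_F by (simp add: sum.delta)
  show "w \<noteq> v \<Longrightarrow> ar (swap_assignment asg f v) w = ar asg w"
    unfolding assigned_rate_eq using fN by (intro sum.cong refl) (auto simp: swap_assignment_def)
  have "assigned_total (swap_assignment asg f v) = (\<Sum>g\<in>F. (if asg g \<noteq> None then lam g else 0) +
      (if g = f then lam g else 0) - (if asg g = Some v then lam g else 0))"
    unfolding assigned_total_def using fN by (intro sum.cong refl) (auto simp: swap_assignment_def)
  also have "\<dots> = assigned_total asg + lam f - ar asg v"
    unfolding assigned_total_def assigned_rate_eq using f finite_F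
    by (simp add: sum.distrib sum_subtractf sum.delta)
  finally show "assigned_total (swap_assignment asg f v) = assigned_total asg + lam f - ar asg v" .
qed

lemma swap_load_le_cap:
  assumes I: "phase1_inv asg y" and single: "{g. (g, v) \<in> G y} = {f}" and fN: "asg f = None"
  shows "\<forall>u\<in>U. ar (swap_assignment asg f v) u + (\<Sum>g\<in>F. lam g * (y(f := (\<lambda>_. 0))) g u) \<le> cap u"
proof
  fix u assume u: "u \<in> U"
  have fvp: "f \<in> F" "v \<in> U" using single unfolding Gedges_iff by auto
  note ar' = assigned_rate_swap[where asg=asg and f=f and v=v, OF fvp(1) fN]
  show "ar (swap_assignment asg f v) u + (\<Sum>g\<in>F. lam g * (y(f := (\<lambda>_. 0))) g u) \<le> cap u"
  proof (cases "u = v")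
    case True
    have "y g v = 0" if "g \<in> F" "g \<noteq> f" for g using nonzero_in_Gedges[OF I that(1) fvp(2)] single that by auto
    then have "(\<Sum>g\<in>F. lam g * (y(f := (\<lambda>_. 0))) g v) = 0" by (intro sum.neutral) auto
    then show ?thesis using True ar'(1) lam_cap[OF fvp(1)] fvp(2) UV by auto
  next
    case False
    have "(\<Sum>g\<in>F. lam g * (y(f := (\<lambda>_. 0))) g u) \<le> (\<Sum>g\<in>F. lam g * y g u)"
      using zeroing_preserves_bounds(4)[OF I, of "y(f := (\<lambda>_. 0))"] u by auto
    then show ?thesis using phase1_invD(4)[OF I u] ar'(2)[OF False] by linarith
  qed
qed

lemma swap_preserves_inv:
  assumes I: "phase1_inv asg y" and single: "{g. (g, v) \<in> G y} = {f}"
    and lt: "ar asg v < lam f * y f v"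
  defines "asg' \<equiv> swap_assignment asg f v" and "y' \<equiv> y(f := (\<lambda>_. 0))"
  shows "phase1_inv asg' y' \<and> G y' \<subseteq> G y \<and> (f, v) \<notin> G y'"
proof -
  have fv: "(f, v) \<in> G y" using single by auto
  then have fvp: "f \<in> F" "v \<in> U" "v \<in> pth f" "0 < y f v" "y f v < 1" unfolding Gedges_iff by auto
  have fN: "asg f = None" using phase1_invD(1)[OF I fvp(1)] fvp by (cases "asg f") auto
  have z: "y' g w = y g w \<or> y' g w = 0" for g w unfolding y'_def by auto
  note bounds = zeroing_preserves_bounds[OF I z]
  note ar' = assigned_rate_swap[where asg=asg and f=f and v=v, OF fvp(1) fN, folded asg'_def]
  have nfv: "(f, v) \<notin> G y'" unfolding Gedges_iff y'_def by auto
  have I1: "\<forall>g\<in>F. \<forall>u. asg' g = Some u \<longrightarrow> u \<in> U \<and> u \<in> pth g \<and> (\<forall>w\<in>U. y' g w = 0)"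
    using phase1_invD(1)[OF I] fvp unfolding asg'_def swap_assignment_def y'_def
    by (auto split: if_splits)
  have "isolated_assigned asg y + ar asg' v \<le> isolated_assigned asg' y'"
  proof (rule isolated_assigned_gain[OF isolated_nodes_antimono[OF bounds(1)]])
    show "v \<in> isolated_nodes y'" "v \<notin> isolated_nodes y"
      unfolding isolated_nodes_def using fvp bounds(1) single nfv fv by auto
    show "ar asg w \<le> ar asg' w" if "w \<in> isolated_nodes y" for w
    proof -
      have "w \<noteq> v" using that fv unfolding isolated_nodes_def by auto
      then show ?thesis using ar'(2) by simp
    qed
  qed
  moreover have "(\<Sum>w\<in>U. lam f * y f w) \<le> lam f"
    using phase1_invD(3)[OF I fvp(1)] lam_pos[OF fvp(1)]
    by (simp add: sum_distrib_left[symmetric] mult_left_le)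
  moreover have "ar asg v < lam f"
  proof -
    have "lam f * y f v < lam f * 1"
      by (rule mult_strict_left_mono) (use fvp(5) lam_pos[OF fvp(1)] in auto)
    then show ?thesis using lt by linarith
  qed
  ultimately have "R U \<le> assigned_total asg' + fractional_total y' + isolated_assigned asg' y'"
    using phase1_invD(6)[OF I] fractional_total_clear_row[OF fvp(1), of y] ar'(1,3)
    unfolding y'_def by linarith
  then show ?thesis
    unfolding phase1_inv_def using I1 bounds swap_load_le_cap[OF I single fN] nfv
    unfolding asg'_def y'_def by blast
qed

end

subsection \<open>Step 2: rotation along two longest paths\<close>

context mca_setting begin

text \<open>The rate changes of Step 2: +1, -1, ... along p1 and -1, +1, ... along p2. They cancel at every
  node (both paths start at v1) and at every flow except the two end flows of the paths.\<close>

lemma rotation_direction: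
  assumes I: "phase1_inv asg y" and nl: "\<not> (\<exists>v f. {g. (g, v) \<in> G y} = {f})"
    and lp1: "longest_Gpath (G y) v1 f1 p1" and lp2: "longest_Gpath (G y) v1 f2 p2"
  defines "c \<equiv> \<lambda>f v. rate_change p1 1 f v + rate_change p2 (-1) f v"
  obtains fe1 w1 fe2 where "\<And>f v. c f v \<noteq> 0 \<Longrightarrow> (f, v) \<in> G y" and "\<And>v. (\<Sum>f\<in>F. c f v) = 0"
    and "\<And>f. (\<Sum>v\<in>U. c f v) = (if f = fe1 then 1 else 0) - (if f = fe2 then 1 else 0)"
    and "{w. (fe1, w) \<in> G y} = {w1}" and "fe1 \<in> F" and "fe2 \<in> F"
proof -
  have ac: "circulation_free F U (G y)" using phase1_invD(5)[OF I] .
  have EF: "\<forall>p\<in>G y. fst p \<in> F" "\<forall>p\<in>G y. snd p \<in> U" using Gedges_sub[of y] by auto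
  obtain fe1 w1 where P1: "walk (G y) p1" "p1 \<noteq> []"
    "\<And>v. endpoint_sign p1 (Inr v) = (if v = v1 then 1 else 0)"
    "\<And>f. endpoint_sign p1 (Inl f) = (if f = fe1 then 1 else 0)" "{w. (fe1, w) \<in> G y} = {w1}" "(fe1, w1) \<in> G y"
    by (rule longest_Gpath_endpoint_signs[OF lp1 ac Gedges_sub finite_F finite_U nl]) (rule that)
  obtain fe2 w2 where P2: "walk (G y) p2" "p2 \<noteq> []"
    "\<And>v. endpoint_sign p2 (Inr v) = (if v = v1 then 1 else 0)"
    "\<And>f. endpoint_sign p2 (Inl f) = (if f = fe2 then 1 else 0)" "{w. (fe2, w) \<in> G y} = {w2}"
    "(fe2, w2) \<in> G y"
    by (rule longest_Gpath_endpoint_signs[OF lp2 ac Gedges_sub finite_F finite_U nl]) (rule that)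
  show thesis
  proof (rule that)
    show "(f, v) \<in> G y" if "c f v \<noteq> 0" for f v
    proof (rule ccontr)
      assume "(f, v) \<notin> G y"
      then have "rate_change p1 1 f v = 0" "rate_change p2 (-1) f v = 0"
        using rate_change_support[OF P1(1)] rate_change_support[OF P2(1)] by blast+
      then show False using that unfolding c_def by simp
    qed
    show "(\<Sum>f\<in>F. c f v) = 0" for v
      unfolding c_def sum.distrib rate_change_node_sum[OF P1(1) EF(1) finite_F P1(2)]
        rate_change_node_sum[OF P2(1) EF(1) finite_F P2(2)] P1(3) P2(3) by simp
    show "(\<Sum>v\<in>U. c f v) = (if f = fe1 then 1 else 0) - (if f = fe2 then 1 else 0)" for f
      unfolding c_def sum.distrib rate_change_flow_sum[OF P1(1) EF(2) finite_U P1(2)]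
        rate_change_flow_sum[OF P2(1) EF(2) finite_U P2(2)] P1(4) P2(4) by simp
    show "{w. (fe1, w) \<in> G y} = {w1}" by (rule P1(5))
    show "fe1 \<in> F" "fe2 \<in> F" using P1(6) P2(6) unfolding Gedges_iff by auto
  qed
qed

end

text \<open>One execution of Step 2, abstracted from the paths to the properties of the rate changes c
  established above: y' is moved along c by \<delta>, and the flows H that reach weight 1 become assigned.\<close>

locale rotation = mca_setting V F lam pth cap U
  for V :: "'v set" and F :: "'f set" and lam pth cap U +
  fixes asg :: "'f \<Rightarrow> 'v option" and y c y' y'' :: "'f \<Rightarrow> 'v \<Rightarrow> real" and \<delta> :: real
    and fe1 fe2 :: 'f and w1 :: 'v and H :: "'f set" and asg' :: "'f \<Rightarrow> 'v option"
  assumes I: "phase1_inv asg y"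
    and c_support: "\<And>f v. c f v \<noteq> 0 \<Longrightarrow> (f, v) \<in> G y"
    and c_node_sum: "\<And>v. (\<Sum>f\<in>F. c f v) = 0"
    and c_flow_sum: "\<And>f. (\<Sum>v\<in>U. c f v) = (if f = fe1 then 1 else 0) - (if f = fe2 then 1 else 0)"
    and leaf: "{w. (fe1, w) \<in> G y} = {w1}" and fe: "fe1 \<in> F" "fe2 \<in> F"
    and \<delta>_pos: "0 < \<delta>"
    and y'_eq: "\<And>f v. y' f v = y f v + \<delta> * c f v / lam f"
    and y'_range: "\<forall>(f, v)\<in>G y. 0 \<le> y' f v \<and> y' f v \<le> 1"
    and H_def: "H = {g. \<exists>v. (g, v) \<in> G y \<and> y' g v = 1}"
    and asg'_H: "\<And>g. g \<in> H \<Longrightarrow> \<exists>v. (g, v) \<in> G y \<and> y' g v = 1 \<and> asg' g = Some v"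
    and asg'_other: "\<And>g. g \<notin> H \<Longrightarrow> asg' g = asg g"
    and y''_def: "y'' = (\<lambda>g. if g \<in> H then (\<lambda>_. 0) else y' g)"
begin

lemma y'_outside: "(f, v) \<notin> G y \<Longrightarrow> y' f v = y f v"
  using c_support[of f v] y'_eq by auto

lemma lam_mult_y': "f \<in> F \<Longrightarrow> lam f * y' f v = lam f * y f v + \<delta> * c f v"
  using lam_pos[of f] y'_eq by (simp add: field_simps)

lemma y'_nonneg: "g \<in> F \<Longrightarrow> w \<in> U \<Longrightarrow> 0 \<le> y' g w"
  using y'_range y'_outside phase1_invD(2)[OF I] by (cases "(g, w) \<in> G y") auto

lemma y'_row_sum:
  assumes g: "g \<in> F"
  shows "(\<Sum>w\<in>U. y' g w) \<le> 1"
proof (cases "g = fe1")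
  case True
  have "w1 \<in> U" "(fe1, w1) \<in> G y" using leaf Gedges_sub by auto
  have "(\<Sum>w\<in>U. y' g w) = (\<Sum>w\<in>U. if w = w1 then y' g w1 else 0)"
  proof (rule sum.cong[OF refl])
    fix w assume w: "w \<in> U"
    show "y' g w = (if w = w1 then y' g w1 else 0)"
    proof (cases "w = w1")
      case False
      then have nE: "(g, w) \<notin> G y" using leaf True by auto
      then have "y g w = 0" using nonzero_in_Gedges[OF I g w] by auto
      then show ?thesis using y'_outside[OF nE] False by simp
    qed simp
  qed
  also have "\<dots> = y' g w1" using \<open>w1 \<in> U\<close> finite_U by (simp add: sum.delta)
  also have "\<dots> \<le> 1" using y'_range \<open>(fe1, w1) \<in> G y\<close> True by auto
  finally show ?thesis .
next
  case False
  have "(\<Sum>w\<in>U. y' g w) = (\<Sum>w\<in>U. y g w) + \<delta> / lam g * (\<Sum>w\<in>U. c g w)"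
    unfolding y'_eq by (simp add: sum.distrib sum_distrib_left sum_divide_distrib)
  moreover have "\<delta> / lam g * (\<Sum>w\<in>U. c g w) \<le> 0"
    unfolding c_flow_sum using False \<delta>_pos lam_pos[OF g] by (auto intro: divide_nonneg_pos)
  ultimately show ?thesis using phase1_invD(3)[OF I g] by linarith
qed

lemma H_props:
  assumes "g \<in> H"
  obtains v where "(g, v) \<in> G y" "y' g v = 1" "asg' g = Some v" "g \<in> F" "v \<in> U" "asg g = None"
proof -
  obtain v where v: "(g, v) \<in> G y" "y' g v = 1" "asg' g = Some v" using asg'_H[OF assms] by blast
  then have "g \<in> F" "v \<in> U" "0 < y g v" unfolding Gedges_iff by auto
  moreover have "asg g = None"
  proof (rule ccontr)
    assume "asg g \<noteq> None"
    then obtain u where "asg g = Some u" by auto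
    then have "y g v = 0" using phase1_invD(1)[OF I \<open>g \<in> F\<close>] \<open>v \<in> U\<close> by auto
    then show False using \<open>0 < y g v\<close> by simp
  qed
  ultimately show thesis using that v by blast
qed

text \<open>A flow reaching weight 1 on one edge has weight 0 on all others, as its row sum stays at most 1.\<close>

lemma H_row:
  assumes h: "g \<in> H" and w: "w \<in> U"
  shows "y' g w = (if asg' g = Some w then 1 else 0)"
proof -
  obtain v where v: "y' g v = 1" "asg' g = Some v" "g \<in> F" "v \<in> U" using H_props[OF h] by blast
  show ?thesis
  proof (cases "w = v")
    case False
    have "y' g v + y' g w = (\<Sum>w'\<in>{v, w}. y' g w')" using False by simp
    also have "\<dots> \<le> (\<Sum>w'\<in>U. y' g w')" using v w finite_U y'_nonneg by (intro sum_mono2) auto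
    also have "\<dots> \<le> 1" using y'_row_sum[OF v(3)] .
    finally show ?thesis using y'_nonneg[OF v(3) w] v False by auto
  qed (use v in simp)
qed

lemma Gedges_y''_sub: "G y'' \<subseteq> G y"
proof
  fix p assume p: "p \<in> G y''"
  obtain g w where gw: "p = (g, w)" by (cases p)
  have "0 < y'' g w" using p unfolding gw Gedges_iff by simp
  then have h: "g \<notin> H" unfolding y''_def by auto
  show "p \<in> G y"
  proof (rule ccontr)
    assume "p \<notin> G y"
    then have "y'' g w = y g w" "(g, w) \<notin> G y" using y'_outside h gw unfolding y''_def by auto
    then show False using p unfolding gw Gedges_iff by auto
  qed
qed

lemma assigned_rate_rotation:
  "ar asg' v = ar asg v + (\<Sum>g\<in>F. if g \<in> H \<and> asg' g = Some v then lam g else 0)"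
proof -
  have "ar asg' v = (\<Sum>g\<in>F. (if asg g = Some v then lam g else 0) +
      (if g \<in> H \<and> asg' g = Some v then lam g else 0))"
    unfolding assigned_rate_eq
  proof (rule sum.cong[OF refl])
    fix g assume "g \<in> F"
    show "(if asg' g = Some v then lam g else 0) =
      (if asg g = Some v then lam g else 0) + (if g \<in> H \<and> asg' g = Some v then lam g else 0)"
    proof (cases "g \<in> H")
      case True
      then obtain u where "asg g = None" using H_props by metis
      then show ?thesis using True by simp
    qed (simp add: asg'_other)
  qed
  then show ?thesis unfolding assigned_rate_eq by (simp add: sum.distrib)
qed

lemma rotation_load_le_cap:
  assumes v: "v \<in> U"
  shows "ar asg' v + (\<Sum>g\<in>F. lam g * y'' g v) \<le> cap v"
proof -
  have "(\<Sum>g\<in>F. if g \<in> H \<and> asg' g = Some v then lam g else 0) + (\<Sum>g\<in>F. lam g * y'' g v)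
      = (\<Sum>g\<in>F. lam g * y' g v)"
    unfolding sum.distrib[symmetric] using H_row[of _ v] v by (intro sum.cong refl) (auto simp: y''_def)
  also have "\<dots> = (\<Sum>g\<in>F. lam g * y g v) + \<delta> * (\<Sum>g\<in>F. c g v)"
    using lam_mult_y' by (simp add: sum.distrib sum_distrib_left)
  also have "\<dots> = (\<Sum>g\<in>F. lam g * y g v)" using c_node_sum by simp
  finally show ?thesis using phase1_invD(4)[OF I v] unfolding assigned_rate_rotation by linarith
qed

lemma rotation_keeps_total:
  "assigned_total asg' + fractional_total y'' = assigned_total asg + fractional_total y"
proof -
  have "assigned_total asg' + fractional_total y'' =
      (\<Sum>g\<in>F. (if asg g \<noteq> None then lam g else 0) + (\<Sum>w\<in>U. lam g * y' g w))"
    unfolding assigned_total_def fractional_total_def sum.distrib[symmetric]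
  proof (rule sum.cong[OF refl])
    fix g assume g: "g \<in> F"
    show "(if asg' g \<noteq> None then lam g else 0) + (\<Sum>w\<in>U. lam g * y'' g w) =
        (if asg g \<noteq> None then lam g else 0) + (\<Sum>w\<in>U. lam g * y' g w)"
    proof (cases "g \<in> H")
      case True
      then obtain v where v: "asg' g = Some v" "v \<in> U" "asg g = None" using H_props by metis
      have "(\<Sum>w\<in>U. lam g * y' g w) = (\<Sum>w\<in>U. if w = v then lam g else 0)"
        using H_row[OF True] v(1) by (intro sum.cong refl) auto
      then show ?thesis using v True finite_U unfolding y''_def by (simp add: sum.delta)
    qed (simp add: asg'_other y''_def)
  qed
  also have "\<dots> = assigned_total asg + fractional_total y + \<delta> * (\<Sum>g\<in>F. \<Sum>w\<in>U. c g w)"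
    unfolding assigned_total_def fractional_total_def
    by (simp add: lam_mult_y' sum.distrib sum_distrib_left)
  also have "(\<Sum>g\<in>F. \<Sum>w\<in>U. c g w) = 0"
    unfolding c_flow_sum using fe finite_F by (simp add: sum_subtractf sum.delta)
  finally show ?thesis by simp
qed

lemma rotation_preserves_inv: "phase1_inv asg' y'' \<and> G y'' \<subseteq> G y"
proof -
  have I1: "\<forall>g\<in>F. \<forall>u. asg' g = Some u \<longrightarrow> u \<in> U \<and> u \<in> pth g \<and> (\<forall>w\<in>U. y'' g w = 0)"
  proof (intro ballI allI impI)
    fix g u assume g: "g \<in> F" and s: "asg' g = Some u"
    show "u \<in> U \<and> u \<in> pth g \<and> (\<forall>w\<in>U. y'' g w = 0)"
    proof (cases "g \<in> H")
      case True
      then obtain v where "(g, v) \<in> G y" "asg' g = Some v" using H_props by metis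
      then show ?thesis using s True unfolding Gedges_iff y''_def by auto
    next
      case False
      then have s': "asg g = Some u" using asg'_other s by simp
      have "(g, w) \<notin> G y" if "w \<in> U" for w using phase1_invD(1)[OF I g s'] that unfolding Gedges_iff by auto
      then show ?thesis using phase1_invD(1)[OF I g s'] False y'_outside unfolding y''_def by auto
    qed
  qed
  have I2: "\<forall>g\<in>F. \<forall>w\<in>U. 0 \<le> y'' g w \<and> y'' g w < 1 \<and> (w \<notin> pth g \<longrightarrow> y'' g w = 0)"
  proof (intro ballI)
    fix g w assume g: "g \<in> F" and w: "w \<in> U"
    show "0 \<le> y'' g w \<and> y'' g w < 1 \<and> (w \<notin> pth g \<longrightarrow> y'' g w = 0)"
    proof (cases "g \<notin> H \<and> (g, w) \<in> G y")
      case True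
      then have "y' g w \<noteq> 1" "y' g w \<le> 1" using y'_range unfolding H_def by auto
      then show ?thesis using True y'_nonneg[OF g w] unfolding y''_def Gedges_iff by auto
    next
      case False
      then show ?thesis using y'_outside phase1_invD(2)[OF I g w] unfolding y''_def by auto
    qed
  qed
  have I3: "\<forall>g\<in>F. (\<Sum>w\<in>U. y'' g w) \<le> 1" using y'_row_sum unfolding y''_def by auto
  have "ar asg v \<le> ar asg' v" for v
    unfolding assigned_rate_rotation using lam_pos by (simp add: sum_nonneg less_imp_le)
  then have "isolated_assigned asg y \<le> isolated_assigned asg' y''"
    by (rule isolated_assigned_mono[OF isolated_nodes_antimono[OF Gedges_y''_sub]])
  then have I6: "R U \<le> assigned_total asg' + fractional_total y'' + isolated_assigned asg' y''"
    using phase1_invD(6)[OF I] rotation_keeps_total by linarith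
  show ?thesis
    unfolding phase1_inv_def using I1 I2 I3 rotation_load_le_cap I6 Gedges_y''_sub
      circulation_free_mono[OF phase1_invD(5)[OF I] Gedges_y''_sub] by blast
qed

end

context mca_setting begin

lemma rotate_preserves_inv:
  assumes I: "phase1_inv asg y" and nl: "\<not> (\<exists>v f. {g. (g, v) \<in> G y} = {f})"
    and lp1: "longest_Gpath (G y) v1 f1 p1" and lp2: "longest_Gpath (G y) v1 f2 p2"
    and \<delta>: "0 < \<delta>"
    and y': "y' = (\<lambda>f v. y f v + \<delta> * (rate_change p1 1 f v + rate_change p2 (-1) f v) / lam f)"
    and rng: "\<forall>(f, v)\<in>G y. 0 \<le> y' f v \<and> y' f v \<le> 1"
    and H: "H = {g. \<exists>v. (g, v) \<in> G y \<and> y' g v = 1}"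
    and asg': "\<forall>g. if g \<in> H then (\<exists>v. (g, v) \<in> G y \<and> y' g v = 1 \<and> asg' g = Some v) else asg' g = asg g"
    and y'': "y'' = (\<lambda>g. if g \<in> H then (\<lambda>_. 0) else y' g)"
  shows "phase1_inv asg' y'' \<and> G y'' \<subseteq> G y"
proof -
  let ?c = "\<lambda>f v. rate_change p1 1 f v + rate_change p2 (-1) f v"
  obtain fe1 w1 fe2 where c: "\<And>f v. ?c f v \<noteq> 0 \<Longrightarrow> (f, v) \<in> G y" "\<And>v. (\<Sum>f\<in>F. ?c f v) = 0"
    "\<And>f. (\<Sum>v\<in>U. ?c f v) = (if f = fe1 then 1 else 0) - (if f = fe2 then 1 else 0)"
    "{w. (fe1, w) \<in> G y} = {w1}" "fe1 \<in> F" "fe2 \<in> F"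
    by (rule rotation_direction[OF I nl lp1 lp2]) (rule that)
  have "rotation V F lam pth cap U asg y ?c y' y'' \<delta> fe1 fe2 w1 H asg'"
  proof (intro rotation.intro mca_setting_axioms rotation_axioms.intro)
    show "\<And>g. g \<in> H \<Longrightarrow> \<exists>v. (g, v) \<in> G y \<and> y' g v = 1 \<and> asg' g = Some v"
      "\<And>g. g \<notin> H \<Longrightarrow> asg' g = asg g"
      using asg' by (metis (full_types))+
  qed (use I c \<delta> y' rng H y'' in simp_all)
  then show ?thesis by (rule rotation.rotation_preserves_inv)
qed
end

subsection \<open>Termination of Phase I\<close>

lemma ratio_test:
  fixes a c l :: "'a \<Rightarrow> real"
  assumes P: "finite P" and bounds: "\<And>p. p \<in> P \<Longrightarrow> 0 < a p \<and> a p < 1 \<and> 0 < l p"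
    and p0: "p0 \<in> P" "c p0 \<noteq> 0"
  obtains \<delta> where "0 < \<delta>" and "\<And>p. p \<in> P \<Longrightarrow> 0 \<le> a p + \<delta> * c p / l p \<and> a p + \<delta> * c p / l p \<le> 1"
    and "\<exists>p\<in>P. c p \<noteq> 0 \<and> (a p + \<delta> * c p / l p = 0 \<or> a p + \<delta> * c p / l p = 1)"
proof -
  define t where "t p = (if 0 < c p then (1 - a p) * l p / c p else a p * l p / - c p)" for p
  define Ch where "Ch = {p\<in>P. c p \<noteq> 0}"
  define \<delta> where "\<delta> = Min (t ` Ch)"
  have fin: "finite (t ` Ch)" and ne: "t ` Ch \<noteq> {}" unfolding Ch_def using P p0 by auto
  have t_pos: "0 < t p" if "p \<in> Ch" for p
    using that bounds[of p] unfolding Ch_def t_def by (auto intro!: divide_pos_pos divide_pos_neg mult_pos_pos)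
  have le: "\<delta> \<le> t p" if "p \<in> Ch" for p unfolding \<delta>_def using fin that by simp
  obtain ps where ps: "ps \<in> Ch" "t ps = \<delta>" unfolding \<delta>_def using Min_in[OF fin ne] by auto
  show thesis
  proof (rule that)
    show "0 < \<delta>" using t_pos[OF ps(1)] ps(2) by simp
    fix p assume p: "p \<in> P"
    have b: "0 < a p" "a p < 1" "0 < l p" using bounds[OF p] by auto
    consider "c p = 0" | "0 < c p" | "c p < 0" by linarith
    then show "0 \<le> a p + \<delta> * c p / l p \<and> a p + \<delta> * c p / l p \<le> 1"
    proof cases
      case 2
      then have "\<delta> \<le> (1 - a p) * l p / c p" using le[of p] p unfolding Ch_def t_def by auto
      then have "\<delta> * c p / l p \<le> 1 - a p" using 2 b by (simp add: field_simps)
      moreover have "0 \<le> \<delta> * c p / l p" using 2 b \<open>0 < \<delta>\<close> by simp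
      ultimately show ?thesis using b by simp
    next
      case 3
      then have "\<delta> \<le> a p * l p / - c p" using le[of p] p unfolding Ch_def t_def by auto
      then have "- (\<delta> * c p / l p) \<le> a p" using 3 b by (simp add: field_simps)
      moreover have "\<delta> * c p / l p \<le> 0"
        using mult_pos_neg[OF \<open>0 < \<delta>\<close> 3] b(3) by (simp add: divide_nonpos_pos)
      ultimately show ?thesis using b by linarith
    qed (use b in simp)
  next
    have b: "0 < l ps" "c ps \<noteq> 0" "ps \<in> P" using bounds ps(1) unfolding Ch_def by auto
    then have "a ps + \<delta> * c ps / l ps = 0 \<or> a ps + \<delta> * c ps / l ps = 1"
      using ps(2) unfolding t_def by (cases "0 < c ps") (auto simp: field_simps)
    then show "\<exists>p\<in>P. c p \<noteq> 0 \<and> (a p + \<delta> * c p / l p = 0 \<or> a p + \<delta> * c p / l p = 1)"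
      using b by blast
  qed
qed

context mca_setting begin

lemma mca1_step_preserves_inv:
  assumes st: "mca1_step F lam pth U (asg, y) (asg', y')" and I: "phase1_inv asg y"
  shows "phase1_inv asg' y' \<and> G y' \<subseteq> G y"
  using st
proof (cases rule: mca1_step.cases)
  case (step1_drop v f)
  then show ?thesis using drop_preserves_inv[OF I, of v f] by auto
next
  case (step1_swap v f)
  then show ?thesis using swap_preserves_inv[OF I, of v f] unfolding swap_assignment_def by auto
next
  case (step2 f1 v1 f2 p1 p2 \<delta> y'a H)
  then show ?thesis using rotate_preserves_inv[OF I, of v1 f1 p1 f2 p2 \<delta> y'a H asg' y'] by auto
qed

lemma mca1_steps_preserve_inv:
  assumes "(mca1_step F lam pth U)\<^sup>*\<^sup>* s s'" and "phase1_inv (fst s) (snd s)"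
  shows "phase1_inv (fst s') (snd s')"
  using assms
proof (induction rule: rtranclp_induct)
  case (step b c)
  then show ?case using mca1_step_preserves_inv[of "fst b" "snd b" "fst c" "snd c"] by auto
qed

lemma leaf_step_exists:
  assumes I: "phase1_inv asg y" and single: "{g. (g, v) \<in> G y} = {f}"
  shows "\<exists>asg' y'. mca1_step F lam pth U (asg, y) (asg', y') \<and> card (G y') < card (G y)"
proof -
  have fv: "(f, v) \<in> G y" using single by auto
  show ?thesis
  proof (cases "lam f * y f v \<le> ar asg v")
    case True
    have "mca1_step F lam pth U (asg, y) (asg, y(f := (y f)(v := 0)))"
      by (rule mca1_step.step1_drop[OF single True])
    moreover have "G (y(f := (y f)(v := 0))) \<subset> G y" using drop_preserves_inv[OF I single True] fv by auto
    ultimately show ?thesis using psubset_card_mono[OF finite_Gedges] by blast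
  next
    case False
    then have lt: "ar asg v < lam f * y f v" by simp
    have "mca1_step F lam pth U (asg, y) (swap_assignment asg f v, y(f := (\<lambda>_. 0)))"
      by (rule mca1_step.step1_swap[OF single lt swap_assignment_def])
    moreover have "G (y(f := (\<lambda>_. 0))) \<subset> G y" using swap_preserves_inv[OF I single lt] fv by auto
    ultimately show ?thesis using psubset_card_mono[OF finite_Gedges] by blast
  qed
qed

lemma rotation_step_exists:
  assumes I: "phase1_inv asg y" and nl: "\<not> (\<exists>v f. {g. (g, v) \<in> G y} = {f})"
    and e1: "(f1, v1) \<in> G y" and e2: "(f2, v1) \<in> G y" "f2 \<noteq> f1"
  shows "\<exists>asg' y'. mca1_step F lam pth U (asg, y) (asg', y') \<and> card (G y') < card (G y)"
proof -
  obtain p1 where lp1: "longest_Gpath (G y) v1 f1 p1" using longest_Gpath_exists[OF e1 finite_Gedges] by blast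
  obtain p2 where lp2: "longest_Gpath (G y) v1 f2 p2" using longest_Gpath_exists[OF e2(1) finite_Gedges] by blast
  define c where "c f v = rate_change p1 1 f v + rate_change p2 (-1) f v" for f v
  have "c f1 v1 = 1"
    using rate_change_first_edge[of "G y" v1 f1 p1] rate_change_other_first_edge[of "G y" v1 f2 p2 f1] lp1 lp2 e2(2)
    unfolding c_def longest_Gpath_def by simp
  then have c11: "c (fst (f1, v1)) (snd (f1, v1)) \<noteq> 0" by simp
  have b: "\<And>p. p \<in> G y \<Longrightarrow> 0 < y (fst p) (snd p) \<and> y (fst p) (snd p) < 1 \<and> 0 < lam (fst p)"
    using lam_pos unfolding Gedges_def by auto
  obtain \<delta> where \<delta>: "0 < \<delta>"
    and rng: "\<And>p. p \<in> G y \<Longrightarrow> 0 \<le> y (fst p) (snd p) + \<delta> * c (fst p) (snd p) / lam (fst p) \<and>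
      y (fst p) (snd p) + \<delta> * c (fst p) (snd p) / lam (fst p) \<le> 1"
    and hit: "\<exists>p\<in>G y. c (fst p) (snd p) \<noteq> 0 \<and> (y (fst p) (snd p) + \<delta> * c (fst p) (snd p) / lam (fst p) = 0 \<or>
      y (fst p) (snd p) + \<delta> * c (fst p) (snd p) / lam (fst p) = 1)"
    using ratio_test[where a="\<lambda>p. y (fst p) (snd p)" and l="\<lambda>p. lam (fst p)" and c="\<lambda>p. c (fst p) (snd p)",
        OF finite_Gedges[of y] b e1 c11] by blast
  define y' where "y' = (\<lambda>f v. y f v + \<delta> * (rate_change p1 1 f v + rate_change p2 (-1) f v) / lam f)"
  define H where "H = {g. \<exists>v. (g, v) \<in> G y \<and> y' g v = 1}"
  define asg' where "asg' g = (if g \<in> H then Some (SOME v. (g, v) \<in> G y \<and> y' g v = 1) else asg g)" for g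
  define y'' where "y'' = (\<lambda>g. if g \<in> H then (\<lambda>_. 0) else y' g)"
  have asg': "\<forall>g. if g \<in> H then (\<exists>v. (g, v) \<in> G y \<and> y' g v = 1 \<and> asg' g = Some v) else asg' g = asg g"
  proof
    fix g
    show "if g \<in> H then (\<exists>v. (g, v) \<in> G y \<and> y' g v = 1 \<and> asg' g = Some v) else asg' g = asg g"
    proof (cases "g \<in> H")
      case True
      then have "\<exists>v. (g, v) \<in> G y \<and> y' g v = 1" unfolding H_def by auto
      from someI_ex[OF this] show ?thesis using True unfolding asg'_def by auto
    qed (simp add: asg'_def)
  qed
  have rng': "\<forall>(f, v)\<in>G y. 0 \<le> y' f v \<and> y' f v \<le> 1" using rng unfolding y'_def c_def by fastforce
  obtain es where es: "es \<in> G y" "y' (fst es) (snd es) = 0 \<or> y' (fst es) (snd es) = 1"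
    using hit unfolding y'_def c_def by blast
  have "\<exists>(f, v)\<in>G y. y' f v = 0 \<or> y' f v = 1" using es by (cases es) auto
  then have st: "mca1_step F lam pth U (asg, y) (asg', y'')"
    by (rule mca1_step.step2[OF nl e1 e2(1) e2(2)[symmetric] lp1 lp2 \<delta> y'_def rng' _ H_def asg' y''_def])
  have pres: "phase1_inv asg' y'' \<and> G y'' \<subseteq> G y"
    by (rule rotate_preserves_inv[OF I nl lp1 lp2 \<delta> y'_def rng' H_def asg' y''_def])
  have "y'' (fst es) (snd es) = 0" using es unfolding y''_def H_def by (cases es) auto
  then have "es \<notin> G y''" unfolding Gedges_def by auto
  then have "G y'' \<subset> G y" using pres es(1) by auto
  then show ?thesis using st psubset_card_mono[OF finite_Gedges] by blast
qed

lemma mca1_step_exists: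
  assumes I: "phase1_inv asg y" and ne: "G y \<noteq> {}"
  shows "\<exists>asg' y'. mca1_step F lam pth U (asg, y) (asg', y') \<and> card (G y') < card (G y)"
proof (cases "\<exists>v f. {g. (g, v) \<in> G y} = {f}")
  case True
  then show ?thesis using leaf_step_exists[OF I] by blast
next
  case nl: False
  obtain f1 v1 where e1: "(f1, v1) \<in> G y" using ne by auto
  then obtain f2 where "(f2, v1) \<in> G y" "f2 \<noteq> f1" using nl by blast
  then show ?thesis using rotation_step_exists[OF I nl e1] by blast
qed

lemma mca1_run_exists:
  assumes "phase1_inv asg y"
  shows "\<exists>asg2 y2. (mca1_step F lam pth U)\<^sup>*\<^sup>* (asg, y) (asg2, y2) \<and> G y2 = {}"
  using assms
proof (induction "card (G y)" arbitrary: asg y rule: less_induct)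
  case less
  show ?case
  proof (cases "G y = {}")
    case False
    obtain asg' y' where st: "mca1_step F lam pth U (asg, y) (asg', y')" and c: "card (G y') < card (G y)"
      using mca1_step_exists[OF less.prems False] by blast
    have "phase1_inv asg' y'" using mca1_step_preserves_inv[OF st less.prems] by blast
    with less.hyps[OF c] show ?thesis using st by (meson converse_rtranclp_into_rtranclp)
  qed blast
qed

end

section \<open>MCA, Phase II and the approximation ratio\<close>

lemma proportional_scaling:
  fixes r :: "'a \<Rightarrow> real"
  assumes A: "finite A" and r: "\<And>a. a \<in> A \<Longrightarrow> 0 \<le> r a" and L: "0 < L" "L \<le> sum r A"
  shows "(\<Sum>a\<in>A. r a * L / sum r A) = L"
    and "a \<in> A \<Longrightarrow> 0 \<le> r a * L / sum r A \<and> r a * L / sum r A \<le> r a"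
proof -
  have S: "0 < sum r A" using L by simp
  show "(\<Sum>a\<in>A. r a * L / sum r A) = L"
    using S by (simp add: sum_divide_distrib[symmetric] sum_distrib_right[symmetric])
  assume a: "a \<in> A"
  have "r a * (L / sum r A) \<le> r a * 1" using r[OF a] L S by (intro mult_left_mono) auto
  then show "0 \<le> r a * L / sum r A \<and> r a * L / sum r A \<le> r a" using r[OF a] L S by simp
qed

context mca_setting begin

definition assignment_alloc :: "('f \<Rightarrow> 'v option) \<Rightarrow> 'f \<Rightarrow> 'v \<Rightarrow> real" where
  "assignment_alloc asg = (\<lambda>f v. if f \<in> F \<and> asg f = Some v then lam f else 0)"

definition phase2_inv :: "('f \<Rightarrow> 'v option) \<Rightarrow> ('f \<Rightarrow> 'v \<Rightarrow> real) \<Rightarrow> 'f set \<Rightarrow> bool" where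
  "phase2_inv asg x T \<longleftrightarrow>
     (\<forall>f\<in>F. \<forall>v\<in>V. 0 \<le> x f v) \<and> (\<forall>v\<in>U. (\<Sum>f\<in>F. x f v) \<le> cap v) \<and>
     (\<forall>f\<in>F. \<forall>v\<in>V. v \<notin> U \<inter> pth f \<longrightarrow> x f v = 0) \<and> T \<subseteq> F \<and>
     (\<forall>f\<in>T. asg f = None \<and> (\<forall>v. x f v = 0)) \<and>
     (\<forall>f\<in>F. asg f \<noteq> None \<longrightarrow> (\<forall>v. x f v = assignment_alloc asg f v))"

lemma phase2_inv_init:
  assumes I: "phase1_inv asg y"
  shows "phase2_inv asg (assignment_alloc asg) {f\<in>F. asg f = None}"
proof -
  have "(\<Sum>f\<in>F. assignment_alloc asg f v) = ar asg v" for v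
    unfolding assignment_alloc_def assigned_rate_eq by (intro sum.cong) auto
  then have "(\<Sum>f\<in>F. assignment_alloc asg f v) \<le> cap v" if "v \<in> U" for v
    using phase1_inv_assigned_rate_le_cap[OF I that] by simp
  moreover have "assignment_alloc asg f v = 0" if "f \<in> F" "v \<notin> U \<inter> pth f" for f v
    using that phase1_invD(1)[OF I] unfolding assignment_alloc_def by auto
  ultimately show ?thesis unfolding phase2_inv_def using lam_pos
    by (auto simp: assignment_alloc_def intro: less_imp_le)
qed

lemma phase2_inv_assign:
  assumes Q: "phase2_inv asg x T" and f: "f \<in> T"
    and s: "\<forall>v\<in>U \<inter> pth f. 0 \<le> s v \<and> s v \<le> remaining_cap F cap x v" "\<forall>v. v \<notin> U \<inter> pth f \<longrightarrow> s v = 0"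
  shows "phase2_inv asg (x(f := s)) (T - {f})"
proof -
  have Q': "\<forall>f\<in>F. \<forall>v\<in>V. 0 \<le> x f v" "\<forall>v\<in>U. (\<Sum>f\<in>F. x f v) \<le> cap v"
     "\<forall>f\<in>F. \<forall>v\<in>V. v \<notin> U \<inter> pth f \<longrightarrow> x f v = 0" "T \<subseteq> F"
     "\<forall>f\<in>T. asg f = None \<and> (\<forall>v. x f v = 0)"
     "\<forall>f\<in>F. asg f \<noteq> None \<longrightarrow> (\<forall>v. x f v = assignment_alloc asg f v)"
    using Q unfolding phase2_inv_def by auto
  have fF: "f \<in> F" and x0: "\<forall>v. x f v = 0" using Q'(4,5) f by auto
  have ld: "(\<Sum>g\<in>F. (x(f := s)) g v) = (\<Sum>g\<in>F. x g v) + s v" for v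
  proof -
    have "(\<Sum>g\<in>F. (x(f := s)) g v) = (\<Sum>g\<in>F. x g v + (if g = f then s v else 0))"
      using x0 by (intro sum.cong) auto
    then show ?thesis using fF finite_F by (simp add: sum.distrib sum.delta)
  qed
  have "(\<Sum>g\<in>F. (x(f := s)) g v) \<le> cap v" if v: "v \<in> U" for v
  proof (cases "v \<in> pth f")
    case True
    then have "s v \<le> remaining_cap F cap x v" using s(1) v by blast
    then show ?thesis unfolding ld remaining_cap_def by simp
  next
    case False
    then have "s v = 0" using s(2) by blast
    then show ?thesis unfolding ld using Q'(2) v by simp
  qed
  moreover have "g \<noteq> f" if "g \<in> F" "asg g \<noteq> None" for g using Q'(5) f that by auto
  ultimately show ?thesis using Q' s x0 unfolding phase2_inv_def by auto
qed

lemma mca2_step_preserves_inv: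
  assumes "mca2_step F lam pth cap U (x, T) (x', T')" and "phase2_inv asg x T"
  shows "phase2_inv asg x' T'"
  using assms
proof (cases rule: mca2_step.cases)
  case (assign f s)
  then show ?thesis using phase2_inv_assign[OF assms(2)] by blast
next
  case (skip f)
  then show ?thesis using assms(2) unfolding phase2_inv_def by auto
qed

lemma mca2_steps_preserve_inv:
  assumes "(mca2_step F lam pth cap U)\<^sup>*\<^sup>* s s'" and "phase2_inv asg (fst s) (snd s)"
  shows "phase2_inv asg (fst s') (snd s')"
  using assms
proof (induction rule: rtranclp_induct)
  case (step b c)
  then show ?case using mca2_step_preserves_inv[of "fst b" "snd b" "fst c" "snd c"] by auto
qed

lemma mca2_step_exists:
  assumes Q: "phase2_inv asg x T" and f: "f \<in> T"
  shows "\<exists>x'. mca2_step F lam pth cap U (x, T) (x', T - {f})"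
proof (cases "lam f \<le> (\<Sum>v\<in>U \<inter> pth f. remaining_cap F cap x v)")
  case True
  let ?r = "remaining_cap F cap x" and ?A = "U \<inter> pth f"
  define s where "s v = (if v \<in> ?A then ?r v * lam f / sum ?r ?A else 0)" for v
  have r: "0 \<le> ?r v" if "v \<in> U" for v
    using Q that unfolding phase2_inv_def remaining_cap_def by auto
  have lam: "0 < lam f" using lam_pos f Q unfolding phase2_inv_def by auto
  note split = proportional_scaling[of ?A ?r "lam f", OF _ _ lam True]
  have "\<forall>v\<in>?A. 0 \<le> s v \<and> s v \<le> ?r v" using split(2) r finite_U unfolding s_def by auto
  moreover have "(\<Sum>v\<in>?A. s v) = lam f" using split(1) r finite_U unfolding s_def by simp
  ultimately have "mca2_step F lam pth cap U (x, T) (x(f := s), T - {f})"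
    by (intro mca2_step.assign[where F=F and lam=lam and pth=pth and cap=cap and U=U and x=x and f=f
          and s=s, OF f True]) (auto simp: s_def)
  then show ?thesis by blast
next
  case False
  then show ?thesis
    using mca2_step.skip[where F=F and lam=lam and pth=pth and cap=cap and U=U and x=x and f=f, OF f]
    by auto
qed

lemma mca2_run_exists:
  assumes "phase2_inv asg x T"
  shows "\<exists>x'. (mca2_step F lam pth cap U)\<^sup>*\<^sup>* (x, T) (x', {})"
  using assms
proof (induction "card T" arbitrary: x T rule: less_induct)
  case less
  show ?case
  proof (cases "T = {}")
    case False
    then obtain f where f: "f \<in> T" by auto
    then obtain x' where st: "mca2_step F lam pth cap U (x, T) (x', T - {f})"
      using mca2_step_exists[OF less.prems] by blast
    have "finite T" using less.prems finite_F finite_subset unfolding phase2_inv_def by blast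
    then have "card (T - {f}) < card T" using f by (intro psubset_card_mono) auto
    with less.hyps mca2_step_preserves_inv[OF st less.prems] obtain x'' where
      "(mca2_step F lam pth cap U)\<^sup>*\<^sup>* (x', T - {f}) (x'', {})" by blast
    then show ?thesis using st by (meson converse_rtranclp_into_rtranclp)
  qed blast
qed

lemma assigned_total_le_J1:
  assumes I: "phase1_inv asg y" and Q: "phase2_inv asg x T"
  shows "assigned_total asg \<le> J1 F lam pth U x"
  unfolding assigned_total_def J1_def
proof (rule sum_mono)
  fix f assume f: "f \<in> F"
  show "(if asg f \<noteq> None then lam f else 0) \<le>
    lam f * (if lam f \<le> (\<Sum>v\<in>pth f \<inter> U. x f v) then 1 else 0)"
  proof (cases "asg f")
    case None then show ?thesis using lam_pos[OF f] by simp
  next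
    case (Some v)
    have v: "v \<in> U" "v \<in> pth f" using phase1_invD(1)[OF I f Some] by auto
    have "\<forall>w. x f w = assignment_alloc asg f w" using Q f Some unfolding phase2_inv_def by auto
    then have "(\<Sum>w\<in>pth f \<inter> U. x f w) = (\<Sum>w\<in>pth f \<inter> U. if w = v then lam f else 0)"
      using f Some unfolding assignment_alloc_def by (intro sum.cong) auto
    also have "\<dots> = lam f" using v finite_U by (simp add: sum.delta)
    finally show ?thesis using Some by simp
  qed
qed

lemma MCA_feasible_half_R:
  assumes "MCA V F lam pth cap U x"
  shows "(\<forall>f\<in>F. \<forall>v\<in>V. 0 \<le> x f v) \<and> (\<forall>v\<in>U. (\<Sum>f\<in>F. x f v) \<le> cap v) \<and>
         (\<forall>f\<in>F. \<forall>v\<in>V - U. x f v = 0) \<and> R U \<le> 2 * J1 F lam pth U x"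
proof -
  obtain x0 asg0 asg y where
    ob: "optimal_basic_Q2 V F lam pth cap U x0"
    and a0: "\<forall>f. if f \<in> F \<and> (\<exists>v\<in>U \<inter> pth f. x0 f v / lam f = 1)
             then (\<exists>v\<in>U \<inter> pth f. x0 f v / lam f = 1 \<and> asg0 f = Some v) else asg0 f = None"
    and run1: "(mca1_step F lam pth U)\<^sup>*\<^sup>*
      (asg0, \<lambda>f. if asg0 f \<noteq> None then (\<lambda>_. 0) else (\<lambda>v. x0 f v / lam f)) (asg, y)"
    and G0: "G y = {}"
    and run2: "(mca2_step F lam pth cap U)\<^sup>*\<^sup>* (assignment_alloc asg, {f\<in>F. asg f = None}) (x, {})"
    using assms unfolding MCA_def assignment_alloc_def by blast
  have "phase1_start V F lam pth cap U x0 asg0"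
  proof (intro phase1_start.intro mca_setting_axioms phase1_start_axioms.intro)
    show "basic U x0" "obj U x0 = R U" using ob unfolding optimal_basic_Q2_def by auto
  qed (use a0 in blast)
  then interpret phase1_start V F lam pth cap U x0 asg0 .
  have I: "phase1_inv asg y"
    using mca1_steps_preserve_inv[OF run1] phase1_inv_start unfolding y1_def by simp
  have Q: "phase2_inv asg x {}"
    using mca2_steps_preserve_inv[OF run2] phase2_inv_init[OF I] by simp
  then show ?thesis
    using phase1_inv_final[OF I G0] assigned_total_le_J1[OF I Q] unfolding phase2_inv_def by auto
qed

lemma MCA_exists: "\<exists>x. MCA V F lam pth cap U x"
proof -
  obtain x0 where x0: "basic U x0" "obj U x0 = R U" using optimal_basic_exists[OF UV] by blast
  define asg0 where "asg0 f = (if f \<in> F \<and> (\<exists>v\<in>U \<inter> pth f. x0 f v / lam f = 1)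
      then Some (SOME v. v \<in> U \<inter> pth f \<and> x0 f v / lam f = 1) else None)" for f
  have a0: "if f \<in> F \<and> (\<exists>v\<in>U \<inter> pth f. x0 f v / lam f = 1)
      then (\<exists>v\<in>U \<inter> pth f. x0 f v / lam f = 1 \<and> asg0 f = Some v) else asg0 f = None" for f
  proof (cases "f \<in> F \<and> (\<exists>v\<in>U \<inter> pth f. x0 f v / lam f = 1)")
    case True
    then have "\<exists>v. v \<in> U \<inter> pth f \<and> x0 f v / lam f = 1" by auto
    from someI_ex[OF this] show ?thesis using True unfolding asg0_def by auto
  next
    case False
    then show ?thesis unfolding asg0_def by (simp only: if_False)
  qed
  then have a0_all: "\<forall>f. if f \<in> F \<and> (\<exists>v\<in>U \<inter> pth f. x0 f v / lam f = 1)
      then (\<exists>v\<in>U \<inter> pth f. x0 f v / lam f = 1 \<and> asg0 f = Some v) else asg0 f = None" by blast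
  have "phase1_start V F lam pth cap U x0 asg0"
    by (intro phase1_start.intro mca_setting_axioms phase1_start_axioms.intro x0 a0)
  then interpret phase1_start V F lam pth cap U x0 asg0 .
  obtain asg y where run1: "(mca1_step F lam pth U)\<^sup>*\<^sup>* (asg0, y1) (asg, y)" and G0: "G y = {}"
    using mca1_run_exists[OF phase1_inv_start] by blast
  have I: "phase1_inv asg y" using mca1_steps_preserve_inv[OF run1] phase1_inv_start by simp
  obtain x where run2: "(mca2_step F lam pth cap U)\<^sup>*\<^sup>* (assignment_alloc asg, {f\<in>F. asg f = None}) (x, {})"
    using mca2_run_exists[OF phase2_inv_init[OF I]] by blast
  have "MCA V F lam pth cap U x"
    unfolding MCA_def optimal_basic_Q2_def
    by (rule exI[of _ x0], rule exI[of _ "\<lambda>f v. x0 f v / lam f"], rule exI[of _ asg0], rule exI[of _ y1],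
        rule exI[of _ asg], rule exI[of _ y])
      (use x0 a0_all run1 G0 run2 in \<open>simp add: y1_def assignment_alloc_def\<close>)
  then show ?thesis by blast
qed

end

context network begin

text \<open>Scaling every fully served flow down to exactly its rate and dropping the others turns a
  feasible solution of P1 into one of Q2 of value J1.\<close>

lemma J1_le_R:
  assumes fp: "feasible_P1 V F cap cost B U x"
  shows "J1 F lam pth U x \<le> R U"
proof -
  have U: "U \<subseteq> V" and xn: "\<forall>f\<in>F. \<forall>v\<in>V. 0 \<le> x f v" and xc: "\<forall>v\<in>U. (\<Sum>f\<in>F. x f v) \<le> cap v"
    using fp unfolding feasible_P1_def by auto
  define S where "S f = (\<Sum>w\<in>pth f \<inter> U. x f w)" for f
  define C where "C f \<longleftrightarrow> f \<in> F \<and> lam f \<le> S f" for f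
  define z where "z f v = (if C f \<and> v \<in> pth f \<inter> U then x f v * lam f / S f else 0)" for f v
  have split: "(\<Sum>v\<in>pth f \<inter> U. x f v * lam f / S f) = lam f"
    "\<And>v. v \<in> pth f \<inter> U \<Longrightarrow> 0 \<le> x f v * lam f / S f \<and> x f v * lam f / S f \<le> x f v" if "C f" for f
    using proportional_scaling[of "pth f \<inter> U" "x f" "lam f"] that xn U pth_sub lam_pos finite_node_set[OF U]
    unfolding C_def S_def by auto
  have zsum: "(\<Sum>v\<in>pth f \<inter> U. z f v) = (if C f then lam f else 0)" for f
    using split(1)[of f] unfolding z_def by (cases "C f") simp_all
  have zle: "0 \<le> z f v \<and> z f v \<le> x f v" if "f \<in> F" "v \<in> V" for f v
    using split(2)[of f v] xn that unfolding z_def by auto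
  have "feas U z"
    unfolding feasible_Q2_def
  proof (intro conjI ballI impI)
    fix v assume v: "v \<in> U"
    have "(\<Sum>f\<in>F. z f v) \<le> (\<Sum>f\<in>F. x f v)" using zle v U by (intro sum_mono) auto
    then show "(\<Sum>f\<in>F. z f v) \<le> cap v" using xc v by auto
  next
    fix f assume f: "f \<in> F"
    have "(\<Sum>v\<in>U. z f v) = (\<Sum>v\<in>pth f \<inter> U. z f v)"
      unfolding z_def using finite_node_set[OF U] by (intro sum.mono_neutral_right) auto
    then show "(\<Sum>v\<in>U. z f v) \<le> lam f" unfolding zsum using lam_pos[OF f] by simp
  qed (use zle in \<open>auto simp: z_def\<close>)
  moreover have "J1 F lam pth U x = obj U z"
    unfolding J1_def Q2_obj_def zsum C_def S_def by (intro sum.cong) auto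
  ultimately show ?thesis using obj_le_R[OF U] by simp
qed

lemma OPT_P1_le:
  assumes B: "0 \<le> B" and bound: "\<And>U x. feasible_P1 V F cap cost B U x \<Longrightarrow> J1 F lam pth U x \<le> M"
  shows "OPT_P1 V F lam pth cap cost B \<le> M"
proof -
  have "feasible_P1 V F cap cost B {} (\<lambda>f v. 0)" unfolding feasible_P1_def using B by simp
  then show ?thesis unfolding OPT_P1_def by (intro cSup_least) (auto intro: bound)
qed

lemma approx_OPT_P1:
  assumes B: "0 \<le> B"
    and U: "\<And>Ob. Ob \<subseteq> V \<Longrightarrow> sum cost Ob \<le> B \<Longrightarrow> (1 - exp (-1)) * R Ob \<le> R U"
  shows "(1 - exp (-1)) * OPT_P1 V F lam pth cap cost B \<le> R U"
proof -
  let ?c = "1 - exp (-1) :: real"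
  have c: "0 < ?c" by simp
  have "OPT_P1 V F lam pth cap cost B \<le> R U / ?c"
  proof (rule OPT_P1_le[OF B])
    fix U' x' assume fp: "feasible_P1 V F cap cost B U' x'"
    have "?c * J1 F lam pth U' x' \<le> ?c * R U'" using J1_le_R[OF fp] c by simp
    also have "\<dots> \<le> R U" using U fp unfolding feasible_P1_def by auto
    finally show "J1 F lam pth U' x' \<le> R U / ?c" using c by (simp add: field_simps)
  qed
  then show ?thesis using c by (simp add: field_simps)
qed

end

theorem theorem2:
  fixes V :: "'v set" and F :: "'f set" and lam :: "'f \<Rightarrow> real" and pth :: "'f \<Rightarrow> 'v set"
    and cap :: "'v \<Rightarrow> real" and cost :: "'v \<Rightarrow> real" and B :: real
  assumes "finite V" and "finite F"
    and "\<forall>f\<in>F. 0 < lam f" and "\<forall>f\<in>F. pth f \<subseteq> V"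
    and "\<forall>v\<in>V. 0 < cap v" and "\<forall>v\<in>V. 0 < cost v"
    and "0 \<le> B"
    and "\<forall>f\<in>F. \<forall>v\<in>V. lam f \<le> cap v"
  shows "(\<exists>U x. RP_MCA V F lam pth cap cost B U x) \<and>
         (\<forall>U x. RP_MCA V F lam pth cap cost B U x \<longrightarrow>
            feasible_P1 V F cap cost B U x \<and>
            J1 F lam pth U x \<ge> 1/2 * (1 - 1 / exp 1) * OPT_P1 V F lam pth cap cost B)"
proof -
  interpret network V F lam pth cap using assms by unfold_locales auto
  have mca: "U \<subseteq> V \<Longrightarrow> mca_setting V F lam pth cap U" for U using assms(8) by unfold_locales auto
  note guarantee = placement_guarantee[OF assms(6,7)]
  obtain U where U: "placement V F lam pth cap cost B U" using placement_exists by blast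
  then obtain x where "MCA V F lam pth cap U x" using mca_setting.MCA_exists[OF mca] guarantee by blast
  with U have "\<exists>U x. RP_MCA V F lam pth cap cost B U x" unfolding RP_MCA_def by blast
  moreover have "feasible_P1 V F cap cost B U x \<and>
      1/2 * (1 - 1 / exp 1) * OPT_P1 V F lam pth cap cost B \<le> J1 F lam pth U x"
    if "RP_MCA V F lam pth cap cost B U x" for U x
  proof -
    have U: "U \<subseteq> V" "sum cost U \<le> B" "\<And>Ob. Ob \<subseteq> V \<Longrightarrow> sum cost Ob \<le> B \<Longrightarrow> (1 - exp (-1)) * R Ob \<le> R U"
      using guarantee that unfolding RP_MCA_def by auto
    have "MCA V F lam pth cap U x" using that unfolding RP_MCA_def by blast
    note half = mca_setting.MCA_feasible_half_R[OF mca[OF U(1)] this]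
    have "(1 - exp (-1)) * OPT_P1 V F lam pth cap cost B \<le> R U"
      by (rule approx_OPT_P1[where cost=cost, OF assms(7) U(3)])
    then show ?thesis using half U(1,2) unfolding feasible_P1_def by (auto simp: exp_minus inverse_eq_divide)
  qed
  ultimately show ?thesis by blast
qed

end
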